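(* Let $d\ge 2$ be an integer and let $\mathfrak{F}$ be either an ordered field or a field that has more than two elements, with universe $F$. Let $\mathcal{G}$ be an FFD coordinate geometry over $\mathfrak{F}$ (of dimension $d$), and let $\mathsf{R}\subseteq (F^d)^n$ be an $n$-ary relation on the points $F^d$, for some $n\ge 1$. Then the following statements are equivalent: (i) $\mathsf{R}$ is a concept of $\mathcal{G}$, i.e. $\mathsf{R}$ is definable in $\mathcal{G}$; (ii) $\mathsf{R}$ is definable over $\mathfrak{F}$ and is closed under all automorphisms of $\mathcal{G}$; (iii) $\mathsf{R}$ is definable over $\mathfrak{F}$ and is closed under all affine automorphisms of $\mathcal{G}$.
   Context: A field is $\langle F,+,\cdot,0,1\rangle$; an ordered field is $\langle F,+,\cdot,0,1,\le\rangle$. "Definable" always means first-order definable without parameters: an $n$-ary relation $\mathsf{S}$ on the universe $M$ of a model $\mathfrak{M}$ is definable in $\mathfrak{M}$ iff there is a formula $\varphi(v_1,\dots,v_n)$ of the language of $\mathfrak{M}$ with $(a_1,\dots,a_n)\in\mathsf{S}\iff \mathfrak{M}\models\varphi[a_1,\dots,a_n]$; definable relations are called concepts of $\mathfrak{M}$. For $\vec p=\langle p_1,\dots,p_d\rangle\in F^d$, the collinearity relation is ${\mathsf{Col}}(\vec p,\vec q,\vec r)$ iff $\vec q=\vec p+\lambda(\vec r-\vec p)$ for some $\lambda\in F$ or $\vec r=\vec p$; for an ordered field, the betweenness relation is ${\mathsf{Bw}}(\vec p,\vec q,\vec r)$ iff $\vec q=\vec p+\lambda(\vec r-\vec p)$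 for some $\lambda\in F$ with $0\le\lambda\le 1$. An $n$-ary relation $\mathsf{R}$ on $F^d$ is definable over $\mathfrak{F}$ iff the $dn$-ary relation $\widehat{\mathsf{R}}=\{(p_{11},\dots,p_{1d},\dots,p_{n1},\dots,p_{nd}) : (\langle p_{11},\dots,p_{1d}\rangle,\dots,\langle p_{n1},\dots,p_{nd}\rangle)\in\mathsf{R}\}$ on $F$ is definable in $\mathfrak{F}$. A ($d$-dimensional) coordinate geometry over a field $\mathfrak{F}$ is a first-order model $\mathcal{G}$ whose universe is $F^d$, whose language contains only relation symbols (no functions or constants), and in which ${\mathsf{Col}}$ is definable. A coordinate geometry over an ordered field $\mathfrak{F}$ is defined the same way, with ${\mathsf{Bw}}$ in place of ${\mathsf{Col}}$. A coordinate geometry is field-definable if all its relations are definable over $\mathfrak{F}$, and FFD (finitely field-definable) if it is field-definable and has only finitely many relations. An affine transformation of $F^d$ is a map $\tau\circ L$ with $L$ an invertible linear map $F^d\to F^d$ and $\tau$ a translation. An affine automorphism of $\mathcal{G}$ is an automorphism of $\mathcal{G}$ that is an affine transformation. A relation $\mathsf{R}$ is closed under $f$ if $(a_1,\dots,a_n)\in\mathsf{R}$ implies $(f(a_1),\dots,f(a_n))\in\mathsf{R}$. *)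

theory Defs
  imports Main
begin

definition pts :: "nat \<Rightarrow> 'a list set" where
  "pts d = {p. length p = d}"

definition tuples :: "nat \<Rightarrow> nat \<Rightarrow> 'a list list set" where
  "tuples d n = {t. length t = n \<and> set t \<subseteq> pts d}"

definition vadd :: "'a::field list \<Rightarrow> 'a list \<Rightarrow> 'a list" where
  "vadd p q = map2 (+) p q"

definition vsub :: "'a::field list \<Rightarrow> 'a list \<Rightarrow> 'a list" where
  "vsub p q = map2 (-) p q"

definition smul :: "'a::field \<Rightarrow> 'a list \<Rightarrow> 'a list" where
  "smul c p = map ((*) c) p"

definition col :: "'a::field list \<Rightarrow> 'a list \<Rightarrow> 'a list \<Rightarrow> bool" where
  "col p q r \<longleftrightarrow> (\<exists>l. q = vadd p (smul l (vsub r p))) \<or> r = p"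

definition bw :: "('a::field \<Rightarrow> 'a \<Rightarrow> bool) \<Rightarrow> 'a list \<Rightarrow> 'a list \<Rightarrow> 'a list \<Rightarrow> bool" where
  "bw le p q r \<longleftrightarrow> (\<exists>l. le 0 l \<and> le l 1 \<and> q = vadd p (smul l (vsub r p)))"

definition col_rel :: "nat \<Rightarrow> 'a::field list list set" where
  "col_rel d = {[p, q, r] | p q r. p \<in> pts d \<and> q \<in> pts d \<and> r \<in> pts d \<and> col p q r}"

definition bw_rel :: "('a::field \<Rightarrow> 'a \<Rightarrow> bool) \<Rightarrow> nat \<Rightarrow> 'a list list set" where
  "bw_rel le d = {[p, q, r] | p q r. p \<in> pts d \<and> q \<in> pts d \<and> r \<in> pts d \<and> bw le p q r}"

text \<open>The field axioms come from the type class; an order relation le turns it into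
  an ordered field when the following axioms hold.\<close>

definition is_field_order :: "('a::field \<Rightarrow> 'a \<Rightarrow> bool) \<Rightarrow> bool" where
  "is_field_order le \<longleftrightarrow>
     (\<forall>x. le x x) \<and> (\<forall>x y. le x y \<and> le y x \<longrightarrow> x = y) \<and>
     (\<forall>x y z. le x y \<and> le y z \<longrightarrow> le x z) \<and> (\<forall>x y. le x y \<or> le y x) \<and>
     (\<forall>x y z. le x y \<longrightarrow> le (x + z) (y + z)) \<and>
     (\<forall>x y. le 0 x \<and> le 0 y \<longrightarrow> le 0 (x * y))"

text \<open>The field structure: le = None means the field language (+,*,0,1);
  le = Some r means the ordered field language (+,*,0,1,r).\<close>

definition field_hyp :: "('a::field \<Rightarrow> 'a \<Rightarrow> bool) option \<Rightarrow> bool" where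
  "field_hyp le = (case le of
      None \<Rightarrow> (\<exists>x y z::'a. distinct [x, y, z])
    | Some r \<Rightarrow> is_field_order r)"

datatype ftm = FVar nat | FZero | FOne | FAdd ftm ftm | FMul ftm ftm

datatype ffm = FEq ftm ftm | FLe ftm ftm | FNot ffm | FAnd ffm ffm | FEx nat ffm

fun feval :: "(nat \<Rightarrow> 'a::field) \<Rightarrow> ftm \<Rightarrow> 'a" where
  "feval e (FVar i) = e i"
| "feval e FZero = 0"
| "feval e FOne = 1"
| "feval e (FAdd s t) = feval e s + feval e t"
| "feval e (FMul s t) = feval e s * feval e t"

text \<open>The symbol FLe is only meaningful in the ordered-field language; for the plain
  field language it is interpreted as False (so it adds no expressive power).\<close>

fun fsat :: "('a::field \<Rightarrow> 'a \<Rightarrow> bool) option \<Rightarrow> (nat \<Rightarrow> 'a) \<Rightarrow> ffm \<Rightarrow> bool" where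
  "fsat le e (FEq s t) = (feval e s = feval e t)"
| "fsat le e (FLe s t) = (case le of None \<Rightarrow> False | Some r \<Rightarrow> r (feval e s) (feval e t))"
| "fsat le e (FNot \<phi>) = (\<not> fsat le e \<phi>)"
| "fsat le e (FAnd \<phi> \<psi>) = (fsat le e \<phi> \<and> fsat le e \<psi>)"
| "fsat le e (FEx x \<phi>) = (\<exists>a. fsat le (e(x := a)) \<phi>)"

text \<open>Parameter-free definability of an m-ary relation S on F (variables 0..m-1 are the
  free variables; the truth value must not depend on the other variables).\<close>

definition fdefinable_rel :: "('a::field \<Rightarrow> 'a \<Rightarrow> bool) option \<Rightarrow> nat \<Rightarrow> 'a list set \<Rightarrow> bool" where
  "fdefinable_rel le m S \<longleftrightarrow> (\<exists>\<phi>. \<forall>e. map e [0..<m] \<in> S \<longleftrightarrow> fsat le e \<phi>)"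

definition flatten :: "'a list list set \<Rightarrow> 'a list set" where
  "flatten R = concat ` R"

definition fdefinable :: "('a::field \<Rightarrow> 'a \<Rightarrow> bool) option \<Rightarrow> nat \<Rightarrow> nat \<Rightarrow> 'a list list set \<Rightarrow> bool" where
  "fdefinable le d n R \<longleftrightarrow> fdefinable_rel le (d * n) (flatten R)"

text \<open>Symbols of type 's; I s is the interpretation (a set of tuples of points).\<close>

datatype 's gfm = GEq nat nat | GRel 's "nat list" | GNot "'s gfm" | GAnd "'s gfm" "'s gfm"
  | GEx nat "'s gfm"

fun gsat :: "nat \<Rightarrow> ('s \<Rightarrow> 'a list list \<Rightarrow> bool) \<Rightarrow> (nat \<Rightarrow> 'a list) \<Rightarrow> 's gfm \<Rightarrow> bool" where
  "gsat d I e (GEq x y) = (e x = e y)"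
| "gsat d I e (GRel s xs) = I s (map e xs)"
| "gsat d I e (GNot \<phi>) = (\<not> gsat d I e \<phi>)"
| "gsat d I e (GAnd \<phi> \<psi>) = (gsat d I e \<phi> \<and> gsat d I e \<psi>)"
| "gsat d I e (GEx x \<phi>) = (\<exists>p. length p = d \<and> gsat d I (e(x := p)) \<phi>)"

definition gdefinable :: "nat \<Rightarrow> ('s \<Rightarrow> 'a list list \<Rightarrow> bool) \<Rightarrow> nat \<Rightarrow> 'a list list set \<Rightarrow> bool" where
  "gdefinable d I n R \<longleftrightarrow>
     (\<exists>\<phi>. \<forall>e. (\<forall>i. length (e i) = d) \<longrightarrow> (map e [0..<n] \<in> R \<longleftrightarrow> gsat d I e \<phi>))"

definition wf_struct :: "nat \<Rightarrow> ('s \<Rightarrow> nat) \<Rightarrow> ('s \<Rightarrow> 'a list list \<Rightarrow> bool) \<Rightarrow> bool" where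
  "wf_struct d ar I \<longleftrightarrow> (\<forall>s t. I s t \<longrightarrow> t \<in> tuples d (ar s))"

definition coord_geom :: "('a::field \<Rightarrow> 'a \<Rightarrow> bool) option \<Rightarrow> nat \<Rightarrow> ('s \<Rightarrow> nat)
    \<Rightarrow> ('s \<Rightarrow> 'a list list \<Rightarrow> bool) \<Rightarrow> bool" where
  "coord_geom le d ar I \<longleftrightarrow> wf_struct d ar I \<and>
     (case le of None \<Rightarrow> gdefinable d I 3 (col_rel d)
               | Some r \<Rightarrow> gdefinable d I 3 (bw_rel r d))"

definition FFD :: "('a::field \<Rightarrow> 'a \<Rightarrow> bool) option \<Rightarrow> nat \<Rightarrow> ('s \<Rightarrow> nat)
    \<Rightarrow> ('s \<Rightarrow> 'a list list \<Rightarrow> bool) \<Rightarrow> bool" where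
  "FFD le d ar I \<longleftrightarrow> coord_geom le d ar I \<and> finite (UNIV :: 's set) \<and>
     (\<forall>s. fdefinable le d (ar s) {t. I s t})"

definition automorphism :: "nat \<Rightarrow> ('s \<Rightarrow> 'a list list \<Rightarrow> bool) \<Rightarrow> ('a list \<Rightarrow> 'a list) \<Rightarrow> bool" where
  "automorphism d I f \<longleftrightarrow> bij_betw f (pts d) (pts d) \<and>
     (\<forall>s t. set t \<subseteq> pts d \<longrightarrow> (I s t \<longleftrightarrow> I s (map f t)))"

definition linear_on :: "nat \<Rightarrow> ('a::field list \<Rightarrow> 'a list) \<Rightarrow> bool" where
  "linear_on d L \<longleftrightarrow>
     (\<forall>p\<in>pts d. \<forall>q\<in>pts d. L (vadd p q) = vadd (L p) (L q)) \<and>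
     (\<forall>c. \<forall>p\<in>pts d. L (smul c p) = smul c (L p))"

definition affine_transf :: "nat \<Rightarrow> ('a::field list \<Rightarrow> 'a list) \<Rightarrow> bool" where
  "affine_transf d f \<longleftrightarrow> (\<exists>L b. linear_on d L \<and> bij_betw L (pts d) (pts d) \<and> b \<in> pts d \<and>
      (\<forall>p\<in>pts d. f p = vadd (L p) b))"

definition closed_under :: "'b list set \<Rightarrow> ('b \<Rightarrow> 'b) \<Rightarrow> bool" where
  "closed_under R f \<longleftrightarrow> (\<forall>t\<in>R. map f t \<in> R)"

end

(*
  (i) implies (ii): each basic relation of the geometry is field-definable, so a formula of the
  geometry becomes a field formula once every point variable is replaced by its d coordinates;
  and automorphisms preserve the satisfaction of formulas. (ii) implies (iii) trivially.

  (iii) implies (i): collinearity (resp. betweenness) is definable, hence so are von Staudt's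
  constructions of sum, product (and order) of points of a line relative to three non-collinear
  points. Therefore every field formula can be evaluated on a line inside the geometry. This
  defines the coordinates of points with respect to a frame o, e_1, ..., e_d, and "the frame is
  good", i.e. its affine coordinate map is a bijection preserving the finitely many field-definable
  basic relations. Finally R(x) holds iff for some good frame the coordinates of x satisfy the
  field-definable flattening of R: the standard frame gives one direction, and closure of R under
  the affine automorphism given by a good frame the other.
*)

theory Submission
  imports Defs
begin

definition collinear :: "nat \<Rightarrow> 'a::field list \<Rightarrow> 'a list \<Rightarrow> 'a list \<Rightarrow> bool" where
  "collinear d p q r \<longleftrightarrow> (\<exists>l. \<forall>i<d. q!i = p!i + l * (r!i - p!i)) \<or> (\<forall>i<d. r!i = p!i)"

definition between :: "('a::field \<Rightarrow> 'a \<Rightarrow> bool) \<Rightarrow> nat \<Rightarrow> 'a list \<Rightarrow> 'a list \<Rightarrow> 'a list \<Rightarrow> bool" where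
  "between le d p q r \<longleftrightarrow> (\<exists>l. le 0 l \<and> le l 1 \<and> (\<forall>i<d. q!i = p!i + l * (r!i - p!i)))"

definition line_pt :: "nat \<Rightarrow> 'a::field list \<Rightarrow> 'a list \<Rightarrow> 'a \<Rightarrow> 'a list" where
  "line_pt d oo e a = map (\<lambda>i. oo!i + a * (e!i - oo!i)) [0..<d]"

lemma length_vadd [simp]: "length (vadd p q) = min (length p) (length q)"
  by (simp add: vadd_def)

lemma length_vsub [simp]: "length (vsub p q) = min (length p) (length q)"
  by (simp add: vsub_def)

lemma length_smul [simp]: "length (smul c p) = length p"
  by (simp add: smul_def)

lemma nth_vadd [simp]: "i < length p \<Longrightarrow> i < length q \<Longrightarrow> vadd p q ! i = p!i + q!i"
  by (simp add: vadd_def)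

lemma nth_vsub [simp]: "i < length p \<Longrightarrow> i < length q \<Longrightarrow> vsub p q ! i = p!i - q!i"
  by (simp add: vsub_def)

lemma nth_smul [simp]: "i < length p \<Longrightarrow> smul c p ! i = c * p!i"
  by (simp add: smul_def)

lemma col_iff_collinear:
  assumes "length p = d" "length q = d" "length r = d"
  shows "col p q r \<longleftrightarrow> collinear d p q r"
  using assms by (simp add: col_def collinear_def list_eq_iff_nth_eq)

lemma bw_iff_between:
  assumes "length p = d" "length q = d" "length r = d"
  shows "bw le p q r \<longleftrightarrow> between le d p q r"
  using assms by (simp add: bw_def between_def list_eq_iff_nth_eq)

lemma length_line_pt [simp]: "length (line_pt d oo e a) = d"
  by (simp add: line_pt_def)

lemma nth_line_pt [simp]: "i < d \<Longrightarrow> line_pt d oo e a ! i = oo!i + a * (e!i - oo!i)"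
  by (simp add: line_pt_def)

lemma line_pt_0: "length oo = d \<Longrightarrow> line_pt d oo e 0 = oo"
  by (simp add: list_eq_iff_nth_eq)

lemma line_pt_1: "length e = d \<Longrightarrow> line_pt d oo e 1 = e"
  by (simp add: list_eq_iff_nth_eq)

lemma line_pt_eq_iff:
  assumes "length oo = d" "length e = d" "oo \<noteq> e"
  shows "line_pt d oo e a = line_pt d oo e b \<longleftrightarrow> a = b"
proof
  assume eq: "line_pt d oo e a = line_pt d oo e b"
  obtain i where "i < d" "oo!i \<noteq> e!i"
    using assms by (auto simp: list_eq_iff_nth_eq)
  with arg_cong[OF eq, of "\<lambda>p. p!i"] show "a = b" by simp
qed simp

lemma collinear_line_pt: "collinear d oo (line_pt d oo e a) e"
  unfolding collinear_def by auto

lemma collinear_iff_line_pt: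
  assumes "length oo = d" "length e = d" "length p = d" "oo \<noteq> e"
  shows "collinear d oo p e \<longleftrightarrow> (\<exists>a. p = line_pt d oo e a)"
proof -
  have "\<not> (\<forall>i<d. e!i = oo!i)"
    using assms by (auto simp: list_eq_iff_nth_eq)
  then show ?thesis
    using assms by (auto simp: collinear_def list_eq_iff_nth_eq)
qed

lemma inj_line_pt: "length oo = d \<Longrightarrow> length e = d \<Longrightarrow> oo \<noteq> e \<Longrightarrow> inj (line_pt d oo e)"
  by (simp add: inj_def line_pt_eq_iff)

lemma all_collinear_iff_map_line_pt:
  assumes "length oo = d" "length e = d" "oo \<noteq> e" "\<forall>p\<in>set ts. length p = d"
  shows "(\<forall>p\<in>set ts. collinear d oo p e) \<longleftrightarrow> (\<exists>u. ts = map (line_pt d oo e) u)"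
  using assms collinear_iff_line_pt[of oo d e] collinear_line_pt by (auto simp: ex_map_conv)

lemma ex_map_line_pt_iff:
  assumes "length oo = d" "length e = d" "oo \<noteq> e"
  shows "(\<exists>u. length u = k \<and> P (map (line_pt d oo e) u)) \<longleftrightarrow>
    (\<exists>ts. length ts = k \<and> (\<forall>p\<in>set ts. length p = d) \<and> (\<forall>p\<in>set ts. collinear d oo p e) \<and> P ts)"
proof
  assume "\<exists>u. length u = k \<and> P (map (line_pt d oo e) u)"
  then obtain u where "length u = k" "P (map (line_pt d oo e) u)" by blast
  then show "\<exists>ts. length ts = k \<and> (\<forall>p\<in>set ts. length p = d) \<and> (\<forall>p\<in>set ts. collinear d oo p e) \<and> P ts"
    using collinear_line_pt by (intro exI[of _ "map (line_pt d oo e) u"]) auto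
next
  assume "\<exists>ts. length ts = k \<and> (\<forall>p\<in>set ts. length p = d) \<and> (\<forall>p\<in>set ts. collinear d oo p e) \<and> P ts"
  then obtain ts where "length ts = k" "\<forall>p\<in>set ts. length p = d" "\<forall>p\<in>set ts. collinear d oo p e" "P ts"
    by blast
  moreover from this obtain u where "ts = map (line_pt d oo e) u"
    using all_collinear_iff_map_line_pt[OF assms] by blast
  ultimately show "\<exists>u. length u = k \<and> P (map (line_pt d oo e) u)" by auto
qed

lemma all_map_line_pt_iff:
  assumes "length oo = d" "length e = d" "oo \<noteq> e"
  shows "(\<forall>u. length u = k \<longrightarrow> P (map (line_pt d oo e) u)) \<longleftrightarrow>
    (\<forall>ts. length ts = k \<and> (\<forall>p\<in>set ts. length p = d) \<longrightarrow> (\<forall>p\<in>set ts. collinear d oo p e) \<longrightarrow> P ts)"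
  using ex_map_line_pt_iff[OF assms, of k "\<lambda>ts. \<not> P ts"] by blast

lemma collinear_iff_line_coeff:
  assumes "length oo = d" "length e = d" "oo \<noteq> e"
  shows "collinear d oo p e \<longleftrightarrow> (\<exists>l. \<forall>i<d. p!i = oo!i + l * (e!i - oo!i))"
proof -
  have "\<not> (\<forall>i<d. e!i = oo!i)"
    using assms by (auto simp: list_eq_iff_nth_eq)
  then show ?thesis unfolding collinear_def by blast
qed

lemma noncollinear_coeffs_zero:
  assumes nc: "\<not> collinear d oo a b"
    and eq: "\<forall>i<d. x * (a!i - oo!i) = y * (b!i - oo!i)"
  shows "x = 0 \<and> y = 0"
proof -
  have x: "x = 0"
  proof (rule ccontr)
    assume "x \<noteq> 0"
    then have "\<forall>i<d. a!i = oo!i + (y / x) * (b!i - oo!i)"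
      using eq by (auto simp: field_simps)
    with nc show False unfolding collinear_def by blast
  qed
  moreover have "y = 0"
  proof (rule ccontr)
    assume "y \<noteq> 0"
    then have "\<forall>i<d. b!i = oo!i" using eq x by auto
    with nc show False unfolding collinear_def by blast
  qed
  ultimately show ?thesis ..
qed

lemma noncollinear_neq12:
  "\<not> collinear d oo e w \<Longrightarrow> length oo = d \<Longrightarrow> length e = d \<Longrightarrow> oo \<noteq> e"
  unfolding collinear_def by (metis add.right_neutral mult_zero_left)

lemma noncollinear_neq13:
  "\<not> collinear d oo e w \<Longrightarrow> length oo = d \<Longrightarrow> length w = d \<Longrightarrow> oo \<noteq> w"
  unfolding collinear_def by metis

section \<open>Definable predicates of point environments\<close>

definition gdef :: "nat \<Rightarrow> ('s \<Rightarrow> 'a list list \<Rightarrow> bool) \<Rightarrow> ((nat \<Rightarrow> 'a list) \<Rightarrow> bool) \<Rightarrow> bool" where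
  "gdef d I P \<longleftrightarrow> (\<exists>\<phi>. \<forall>e. (\<forall>i. length (e i) = d) \<longrightarrow> (gsat d I e \<phi> \<longleftrightarrow> P e))"

lemma gdefinable_iff_gdef: "gdefinable d I n R \<longleftrightarrow> gdef d I (\<lambda>e. map e [0..<n] \<in> R)"
  unfolding gdefinable_def gdef_def by (simp add: eq_commute[of "gsat _ _ _ _"])

lemma gdef_cong: "gdef d I P \<Longrightarrow> (\<And>e. \<forall>i. length (e i) = d \<Longrightarrow> P e = Q e) \<Longrightarrow> gdef d I Q"
  unfolding gdef_def by simp

lemma gdef_eq: "gdef d I (\<lambda>e. e i = e j)"
  unfolding gdef_def by (rule exI[of _ "GEq i j"]) simp

lemma gdef_rel: "gdef d I (\<lambda>e. I s (map e xs))"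
  unfolding gdef_def by (rule exI[of _ "GRel s xs"]) simp

lemma gdef_not: "gdef d I P \<Longrightarrow> gdef d I (\<lambda>e. \<not> P e)"
  unfolding gdef_def by (metis gsat.simps(3))

lemma gdef_conj: "gdef d I P \<Longrightarrow> gdef d I Q \<Longrightarrow> gdef d I (\<lambda>e. P e \<and> Q e)"
  unfolding gdef_def by (metis gsat.simps(4))

lemma gdef_disj: "gdef d I P \<Longrightarrow> gdef d I Q \<Longrightarrow> gdef d I (\<lambda>e. P e \<or> Q e)"
  by (rule gdef_cong[OF gdef_not[OF gdef_conj[OF gdef_not gdef_not]]]) simp_all

lemma gdef_imp: "gdef d I P \<Longrightarrow> gdef d I Q \<Longrightarrow> gdef d I (\<lambda>e. P e \<longrightarrow> Q e)"
  by (rule gdef_cong[OF gdef_disj[OF gdef_not]]) simp_all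

lemma gdef_iff: "gdef d I P \<Longrightarrow> gdef d I Q \<Longrightarrow> gdef d I (\<lambda>e. P e \<longleftrightarrow> Q e)"
  by (rule gdef_cong[OF gdef_conj[OF gdef_imp[of d I P Q] gdef_imp[of d I Q P]]]) auto

lemma gdef_const: "gdef d I (\<lambda>e. b)"
proof (cases b)
  case True
  then show ?thesis using gdef_eq[of d I 0 0] by simp
next
  case False
  then show ?thesis using gdef_not[OF gdef_eq[of d I 0 0]] by simp
qed

lemma gdef_ex: "gdef d I P \<Longrightarrow> gdef d I (\<lambda>e. \<exists>p. length p = d \<and> P (e(x := p)))"
  unfolding gdef_def
proof (elim exE)
  fix \<phi> assume "\<forall>e. (\<forall>i. length (e i) = d) \<longrightarrow> gsat d I e \<phi> = P e"
  then show "\<exists>\<psi>. \<forall>e. (\<forall>i. length (e i) = d) \<longrightarrow> gsat d I e \<psi> = (\<exists>p. length p = d \<and> P (e(x := p)))"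
    by (intro exI[of _ "GEx x \<phi>"]) auto
qed

lemma gdef_all: "gdef d I P \<Longrightarrow> gdef d I (\<lambda>e. \<forall>p. length p = d \<longrightarrow> P (e(x := p)))"
  by (rule gdef_cong[OF gdef_not[OF gdef_ex[OF gdef_not]]]) auto

lemma gdef_ball: "(\<And>j. j < (m::nat) \<Longrightarrow> gdef d I (Q j)) \<Longrightarrow> gdef d I (\<lambda>e. \<forall>j<m. Q j e)"
proof (induction m)
  case 0
  then show ?case using gdef_const by simp
next
  case (Suc m)
  then have "gdef d I (\<lambda>e. (\<forall>j<m. Q j e) \<and> Q m e)" by (intro gdef_conj) auto
  then show ?case by (rule gdef_cong) (auto simp: less_Suc_eq)
qed

lemma gdef_finite_ball:
  "finite S \<Longrightarrow> (\<And>s. s \<in> S \<Longrightarrow> gdef d I (Q s)) \<Longrightarrow> gdef d I (\<lambda>e. \<forall>s\<in>S. Q s e)"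
proof (induction S rule: finite_induct)
  case empty
  then show ?case using gdef_const by simp
next
  case (insert x F)
  then have "gdef d I (\<lambda>e. Q x e \<and> (\<forall>s\<in>F. Q s e))" by (intro gdef_conj) auto
  then show ?case by (rule gdef_cong) auto
qed

fun grename :: "(nat \<Rightarrow> nat) \<Rightarrow> 's gfm \<Rightarrow> 's gfm" where
  "grename r (GEq x y) = GEq (r x) (r y)"
| "grename r (GRel s xs) = GRel s (map r xs)"
| "grename r (GNot \<phi>) = GNot (grename r \<phi>)"
| "grename r (GAnd \<phi> \<psi>) = GAnd (grename r \<phi>) (grename r \<psi>)"
| "grename r (GEx x \<phi>) = GEx (r x) (grename r \<phi>)"

lemma gsat_grename: "inj r \<Longrightarrow> gsat d I e (grename r \<phi>) = gsat d I (e \<circ> r) \<phi>"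
proof (induction \<phi> arbitrary: e)
  case (GEx x \<phi>)
  have "(e(r x := p)) \<circ> r = (e \<circ> r)(x := p)" for p
    using GEx.prems by (auto simp: fun_eq_iff inj_eq)
  then show ?case by (simp only: grename.simps gsat.simps GEx.IH[OF GEx.prems])
qed auto

text \<open>\<open>gvars \<phi>\<close> is an upper bound, not necessarily tight, for the free variables of \<open>\<phi>\<close>.\<close>

fun gvars :: "'s gfm \<Rightarrow> nat" where
  "gvars (GEq x y) = Suc (max x y)"
| "gvars (GRel s xs) = Suc (Max (insert 0 (set xs)))"
| "gvars (GNot \<phi>) = gvars \<phi>"
| "gvars (GAnd \<phi> \<psi>) = max (gvars \<phi>) (gvars \<psi>)"
| "gvars (GEx x \<phi>) = gvars \<phi>"

lemma gsat_cong_gvars: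
  "(\<And>i. i < gvars \<phi> \<Longrightarrow> e i = e' i) \<Longrightarrow> gsat d I e \<phi> = gsat d I e' \<phi>"
proof (induction \<phi> arbitrary: e e')
  case (GEq x y)
  then show ?case by simp
next
  case (GRel s xs)
  have "x < Suc (Max (insert 0 (set xs)))" if "x \<in> set xs" for x
    using that by (intro le_imp_less_Suc Max_ge) auto
  with GRel.prems have "map e xs = map e' xs" by (intro map_cong) (simp_all only: gvars.simps)
  then show ?case by (simp only: gsat.simps)
next
  case (GNot \<phi>)
  have "gsat d I e \<phi> = gsat d I e' \<phi>"
    by (rule GNot.IH) (use GNot.prems in simp)
  then show ?case by simp
next
  case (GAnd \<phi> \<psi>)
  have "gsat d I e \<phi> = gsat d I e' \<phi>" "gsat d I e \<psi> = gsat d I e' \<psi>"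
    by (rule GAnd.IH, use GAnd.prems in simp)+
  then show ?case by simp
next
  case (GEx x \<phi>)
  have "gsat d I (e(x := p)) \<phi> = gsat d I (e'(x := p)) \<phi>" for p
    by (rule GEx.IH) (use GEx.prems in simp)
  then show ?case by simp
qed

lemma gdef_rename: "inj r \<Longrightarrow> gdef d I P \<Longrightarrow> gdef d I (\<lambda>e. P (e \<circ> r))"
  unfolding gdef_def
proof (elim exE)
  fix \<phi> assume "inj r" "\<forall>e. (\<forall>i. length (e i) = d) \<longrightarrow> gsat d I e \<phi> = P e"
  then show "\<exists>\<psi>. \<forall>e. (\<forall>i. length (e i) = d) \<longrightarrow> gsat d I e \<psi> = P (e \<circ> r)"
    by (intro exI[of _ "grename r \<phi>"]) (simp add: gsat_grename)
qed

lemma gdef_local: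
  fixes P :: "(nat \<Rightarrow> 'a list) \<Rightarrow> bool"
  assumes "gdef d I P"
  obtains N where "\<And>e e'. \<forall>i. length (e i) = d \<Longrightarrow> \<forall>i. length (e' i) = d \<Longrightarrow>
    (\<And>i. i < N \<Longrightarrow> e i = e' i) \<Longrightarrow> P e = P e'"
proof -
  from assms obtain \<phi> where \<phi>: "\<forall>e. (\<forall>i. length (e i) = d) \<longrightarrow> gsat d I e \<phi> = P e"
    unfolding gdef_def by blast
  then show ?thesis
  proof (intro that[of "gvars \<phi>"])
    fix e e' :: "nat \<Rightarrow> 'a list"
    assume "\<forall>i. length (e i) = d" "\<forall>i. length (e' i) = d" "\<And>i. i < gvars \<phi> \<Longrightarrow> e i = e' i"
    with \<phi> show "P e = P e'" using gsat_cong_gvars[of \<phi> e e' d I] by simp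
  qed
qed

lemma map_upt_eq_map_upt_iff:
  "map e [a..<a + k] = map e [b..<b + k] \<longleftrightarrow> (\<forall>j<k. e (a + j) = e (b + j))"
proof
  assume eq: "map e [a..<a + k] = map e [b..<b + k]"
  show "\<forall>j<k. e (a + j) = e (b + j)"
  proof (intro allI impI)
    fix j assume "j < k"
    with arg_cong[OF eq, of "\<lambda>xs. xs ! j"] show "e (a + j) = e (b + j)" by simp
  qed
qed (intro nth_equalityI, simp_all)

definition upd_block :: "(nat \<Rightarrow> 'b) \<Rightarrow> nat \<Rightarrow> 'b list \<Rightarrow> nat \<Rightarrow> 'b" where
  "upd_block e N ps = (\<lambda>i. if N \<le> i \<and> i < N + length ps then ps ! (i - N) else e i)"

lemma upd_block_Nil [simp]: "upd_block e N [] = e"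
  by (auto simp: upd_block_def fun_eq_iff)

lemma upd_block_Cons: "upd_block e N (p # ps) = upd_block (e(N := p)) (Suc N) ps"
  by (auto simp: upd_block_def fun_eq_iff nth_Cons')

lemma upd_block_below [simp]: "i < N \<Longrightarrow> upd_block e N ps i = e i"
  by (simp add: upd_block_def)

lemma upd_block_in [simp]: "j < length ps \<Longrightarrow> upd_block e N ps (N + j) = ps ! j"
  by (simp add: upd_block_def)

lemma map_upd_block_below [simp]: "b \<le> N \<Longrightarrow> map (upd_block e N ps) [a..<b] = map e [a..<b]"
  by simp

lemma map_upd_block_in [simp]: "map (upd_block e N ps) [N..<N + length ps] = ps"
  by (rule nth_equalityI) simp_all

lemma length_upd_block:
  "\<forall>i. length (e i) = d \<Longrightarrow> \<forall>p\<in>set ps. length p = d \<Longrightarrow> \<forall>i. length (upd_block e N ps i) = d"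
proof
  fix i
  assume "\<forall>i. length (e i) = d" "\<forall>p\<in>set ps. length p = d"
  then show "length (upd_block e N ps i) = d"
    using nth_mem[of "i - N" ps] by (auto simp: upd_block_def)
qed

lemma gdef_ex_block:
  fixes P :: "(nat \<Rightarrow> 'a list) \<Rightarrow> bool"
  shows "gdef d I P \<Longrightarrow>
    gdef d I (\<lambda>e. \<exists>ps. length ps = m \<and> (\<forall>p\<in>set ps. length p = d) \<and> P (upd_block e N ps))"
proof (induction m arbitrary: N)
  case 0
  then show ?case by (rule gdef_cong) auto
next
  case (Suc m)
  then have "gdef d I (\<lambda>e. \<exists>p. length p = d \<and>
      (\<exists>ps. length ps = m \<and> (\<forall>p\<in>set ps. length p = d) \<and> P (upd_block (e(N := p)) (Suc N) ps)))"
    by (intro gdef_ex) blast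
  then show ?case
  proof (rule gdef_cong)
    fix e :: "nat \<Rightarrow> 'a list"
    show "(\<exists>p. length p = d \<and> (\<exists>ps. length ps = m \<and> (\<forall>p\<in>set ps. length p = d) \<and>
        P (upd_block (e(N := p)) (Suc N) ps))) \<longleftrightarrow>
      (\<exists>ps. length ps = Suc m \<and> (\<forall>p\<in>set ps. length p = d) \<and> P (upd_block e N ps))"
      (is "?L \<longleftrightarrow> ?R")
    proof
      assume ?L
      then obtain p ps where "length p = d" "length ps = m" "\<forall>p\<in>set ps. length p = d"
        "P (upd_block (e(N := p)) (Suc N) ps)"
        by blast
      then show ?R by (intro exI[of _ "p # ps"]) (simp add: upd_block_Cons)
    next
      assume ?R
      then obtain p ps where "length (p # ps) = Suc m" "\<forall>q\<in>set (p # ps). length q = d"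
        "P (upd_block e N (p # ps))"
        by (metis length_Suc_conv)
      then show ?L by (auto simp: upd_block_Cons)
    qed
  qed
qed

lemma upd_block_copies_iff:
  assumes "length as = N" "\<And>i. i < N \<Longrightarrow> \<sigma> i < M"
  shows "(\<forall>i<N. upd_block e M as (M + i) = upd_block e M as (\<sigma> i)) \<longleftrightarrow> as = map (e \<circ> \<sigma>) [0..<N]"
proof -
  have "(\<forall>i<N. upd_block e M as (M + i) = upd_block e M as (\<sigma> i)) \<longleftrightarrow> (\<forall>i<N. as ! i = (e \<circ> \<sigma>) i)"
    using assms by simp
  also have "\<dots> \<longleftrightarrow> as = map (e \<circ> \<sigma>) [0..<N]"
    using assms(1) by (simp add: list_eq_iff_nth_eq)
  finally show ?thesis .
qed

text \<open>The values \<open>e (\<sigma> i)\<close> are copied to fresh variables \<open>M + i\<close> above all variables that matter,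
  where the predicate is evaluated after an injective renaming.\<close>

lemma gdef_subst:
  fixes P :: "(nat \<Rightarrow> 'a list) \<Rightarrow> bool"
  assumes "gdef d I P"
  shows "gdef d I (\<lambda>e. P (e \<circ> \<sigma>))"
proof -
  obtain N where loc: "\<And>e e'. \<forall>i. length (e i) = d \<Longrightarrow> \<forall>i. length (e' i) = d \<Longrightarrow>
      (\<And>i. i < N \<Longrightarrow> e i = e' i) \<Longrightarrow> P e = P e'"
    using gdef_local[OF assms] by blast
  obtain M where \<sigma>M: "\<And>i. i < N \<Longrightarrow> \<sigma> i < M"
    using finite_nat_set_iff_bounded[of "\<sigma> ` {..<N}"] by auto
  define Q where "Q e \<longleftrightarrow> (\<forall>i<N. e (M + i) = e (\<sigma> i)) \<and> P (e \<circ> (+) M)" for e :: "nat \<Rightarrow> 'a list"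
  have "gdef d I Q"
    unfolding Q_def by (intro gdef_conj gdef_ball gdef_eq gdef_rename assms) (simp add: inj_def)
  then have "gdef d I (\<lambda>e. \<exists>ps. length ps = N \<and> (\<forall>p\<in>set ps. length p = d) \<and> Q (upd_block e M ps))"
    by (rule gdef_ex_block)
  then show ?thesis
  proof (rule gdef_cong)
    fix e :: "nat \<Rightarrow> 'a list"
    assume len: "\<forall>i. length (e i) = d"
    let ?ps = "map (e \<circ> \<sigma>) [0..<N]"
    have lens: "\<forall>p\<in>set ?ps. length p = d" using len by simp
    have "P (upd_block e M ?ps \<circ> (+) M) = P (e \<circ> \<sigma>)"
      by (rule loc) (use len length_upd_block[OF len lens] in simp_all)
    then have Q_iff: "Q (upd_block e M ps) \<longleftrightarrow> ps = ?ps \<and> P (e \<circ> \<sigma>)" if "length ps = N" for ps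
      unfolding Q_def using upd_block_copies_iff[OF that \<sigma>M] by auto
    show "(\<exists>ps. length ps = N \<and> (\<forall>p\<in>set ps. length p = d) \<and> Q (upd_block e M ps)) \<longleftrightarrow> P (e \<circ> \<sigma>)"
    proof
      assume "\<exists>ps. length ps = N \<and> (\<forall>p\<in>set ps. length p = d) \<and> Q (upd_block e M ps)"
      with Q_iff show "P (e \<circ> \<sigma>)" by blast
    next
      assume "P (e \<circ> \<sigma>)"
      with Q_iff[of ?ps] have "Q (upd_block e M ?ps)" by simp
      with lens show "\<exists>ps. length ps = N \<and> (\<forall>p\<in>set ps. length p = d) \<and> Q (upd_block e M ps)"
        by (intro exI[of _ ?ps]) simp
    qed
  qed
qed

lemma gdef_ex_point:
  assumes "gdef d I (\<lambda>e. P e (e N))" and "\<And>e p. P (e(N := p)) p = P e p"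
  shows "gdef d I (\<lambda>e. \<exists>p. length p = d \<and> P e p)"
  using gdef_ex[OF assms(1), of N] by (rule gdef_cong) (simp add: assms(2))

lemma gdef_all_point:
  assumes "gdef d I (\<lambda>e. P e (e N))" and "\<And>e p. P (e(N := p)) p = P e p"
  shows "gdef d I (\<lambda>e. \<forall>p. length p = d \<longrightarrow> P e p)"
  using gdef_all[OF assms(1), of N] by (rule gdef_cong) (simp add: assms(2))

lemma gdef_ex_points:
  assumes "gdef d I (\<lambda>e. P e (map e [N..<N + k]))"
    and "\<And>e ts. length ts = k \<Longrightarrow> P (upd_block e N ts) ts = P e ts"
  shows "gdef d I (\<lambda>e. \<exists>ts. length ts = k \<and> (\<forall>p\<in>set ts. length p = d) \<and> P e ts)"
proof -
  have "P (upd_block e N ts) (map (upd_block e N ts) [N..<N + k]) = P e ts" if "length ts = k" for e ts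
    using assms(2)[OF that] map_upd_block_in[of e N ts] that by simp
  with gdef_ex_block[OF assms(1), of k N] show ?thesis
    by (elim gdef_cong) (metis (no_types, lifting))
qed

lemma gdef_all_points:
  assumes "gdef d I (\<lambda>e. P e (map e [N..<N + k]))"
    and "\<And>e ts. length ts = k \<Longrightarrow> P (upd_block e N ts) ts = P e ts"
  shows "gdef d I (\<lambda>e. \<forall>ts. length ts = k \<and> (\<forall>p\<in>set ts. length p = d) \<longrightarrow> P e ts)"
proof -
  have "gdef d I (\<lambda>e. \<exists>ts. length ts = k \<and> (\<forall>p\<in>set ts. length p = d) \<and> \<not> P e ts)"
    using assms(2) by (intro gdef_ex_points[where N = N] gdef_not assms(1)) simp
  then show ?thesis by (rule gdef_cong[OF gdef_not]) auto
qed

section \<open>Parallelism and the arithmetic of a line\<close>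

definition parallel :: "nat \<Rightarrow> 'a::field list \<Rightarrow> 'a list \<Rightarrow> 'a list \<Rightarrow> 'a list \<Rightarrow> bool" where
  "parallel d a b c f \<longleftrightarrow> a \<noteq> b \<and> c \<noteq> f \<and> (\<exists>s. \<forall>i<d. f!i - c!i = s * (b!i - a!i))"

text \<open>Parallelism of the lines \<open>ab\<close> and \<open>cf\<close> in terms of collinearity only: either \<open>c\<close> and \<open>f\<close>
  lie on \<open>ab\<close>, or \<open>f\<close> lies in the plane spanned by \<open>a, b, c\<close> and the two lines do not meet.\<close>

definition parallel_col :: "nat \<Rightarrow> 'a::field list \<Rightarrow> 'a list \<Rightarrow> 'a list \<Rightarrow> 'a list \<Rightarrow> bool" where
  "parallel_col d a b c f \<longleftrightarrow> a \<noteq> b \<and> c \<noteq> f \<and>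
     ((collinear d a c b \<and> collinear d a f b) \<or>
      ((\<exists>x. length x = d \<and> (\<exists>y. length y = d \<and>
          collinear d a x b \<and> collinear d a y c \<and> x \<noteq> y \<and> collinear d x f y)) \<and>
       \<not> (\<exists>z. length z = d \<and> collinear d a z b \<and> collinear d c z f)))"

lemma parallelI: "a \<noteq> b \<Longrightarrow> c \<noteq> f \<Longrightarrow> \<forall>i<d. f!i - c!i = s * (b!i - a!i) \<Longrightarrow> parallel d a b c f"
  unfolding parallel_def by blast

lemma parallel_sym:
  assumes "length a = d" "length b = d" "length c = d" "length f = d"
  shows "parallel d a b c f \<longleftrightarrow> parallel d c f a b"
proof -
  have "parallel d c f a b"
    if par: "parallel d a b c f" and len: "length a = d" "length b = d" "length c = d" "length f = d"
    for a b c f :: "'a list"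
  proof -
    from par obtain s where ab: "a \<noteq> b" and cf: "c \<noteq> f"
      and s: "\<forall>i<d. f!i - c!i = s * (b!i - a!i)"
      unfolding parallel_def by blast
    have "s \<noteq> 0"
    proof
      assume "s = 0"
      with s len have "f = c" by (simp add: list_eq_iff_nth_eq)
      with cf show False by simp
    qed
    with s have "\<forall>i<d. b!i - a!i = (1 / s) * (f!i - c!i)" by simp
    with cf ab show ?thesis by (rule parallelI)
  qed
  with assms show ?thesis by blast
qed

lemma parallel_on_line:
  assumes "length a = d" "length b = d" "a \<noteq> b" "c \<noteq> f"
    and "collinear d a c b" "collinear d a f b"
  shows "parallel d a b c f"
proof -
  obtain g h where "\<forall>i<d. c!i = a!i + g * (b!i - a!i)" "\<forall>i<d. f!i = a!i + h * (b!i - a!i)"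
    using assms collinear_iff_line_coeff by metis
  then have "\<forall>i<d. f!i - c!i = (h - g) * (b!i - a!i)" by (auto simp: algebra_simps)
  with assms show ?thesis by (intro parallelI)
qed

lemma parallel_collinear:
  assumes len: "length a = d" "length b = d"
    and par: "parallel d a b c f" and "collinear d a c b"
  shows "collinear d a f b"
proof -
  from par obtain s where ab: "a \<noteq> b" and s: "\<forall>i<d. f!i - c!i = s * (b!i - a!i)"
    unfolding parallel_def by blast
  obtain g where "\<forall>i<d. c!i = a!i + g * (b!i - a!i)"
    using \<open>collinear d a c b\<close> collinear_iff_line_coeff[OF len ab] by blast
  with s have "\<forall>i<d. f!i = a!i + (g + s) * (b!i - a!i)" by (auto simp: algebra_simps)
  then show ?thesis unfolding collinear_def by blast
qed

lemma parallel_lines_disjoint: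
  assumes len: "length a = d" "length b = d" "length c = d" "length f = d"
    and par: "parallel d a b c f" and nc: "\<not> collinear d a c b"
  shows "\<not> (\<exists>z. length z = d \<and> collinear d a z b \<and> collinear d c z f)"
proof
  assume "\<exists>z. length z = d \<and> collinear d a z b \<and> collinear d c z f"
  then obtain z where z: "collinear d a z b" "collinear d c z f" by blast
  from par obtain s where ab: "a \<noteq> b" and cf: "c \<noteq> f"
    and s: "\<forall>i<d. f!i - c!i = s * (b!i - a!i)"
    unfolding parallel_def by blast
  obtain al where al: "\<forall>i<d. z!i = a!i + al * (b!i - a!i)"
    using z(1) collinear_iff_line_coeff[OF len(1,2) ab] by blast
  obtain mu where mu: "\<forall>i<d. z!i = c!i + mu * (f!i - c!i)"
    using z(2) collinear_iff_line_coeff[OF len(3,4) cf] by blast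
  have "\<forall>i<d. c!i = a!i + (al - mu * s) * (b!i - a!i)"
  proof (intro allI impI)
    fix i assume "i < d"
    with al mu s have "c!i = a!i + al * (b!i - a!i) - mu * (s * (b!i - a!i))"
      by (metis add_diff_cancel_right')
    then show "c!i = a!i + (al - mu * s) * (b!i - a!i)" by (simp add: algebra_simps)
  qed
  with nc show False unfolding collinear_def by blast
qed

text \<open>The witnesses \<open>x, y\<close> divide \<open>ab\<close> and \<open>ac\<close> so that \<open>f\<close> becomes the point of \<open>xy\<close> with parameter
  \<open>\<lambda>\<close>; this is where a scalar \<open>\<lambda> \<notin> {0, 1}\<close> is needed.\<close>

lemma parallel_in_plane:
  fixes lam :: "'a::field"
  assumes len: "length a = d" "length b = d"
    and lam: "lam \<noteq> 0" "lam \<noteq> 1"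
    and par: "parallel d a b c (f :: 'a::field list)" and nc: "\<not> collinear d a c b"
  shows "\<exists>x. length x = d \<and> (\<exists>y. length y = d \<and>
    collinear d a x b \<and> collinear d a y c \<and> x \<noteq> y \<and> collinear d x f y)"
proof -
  from par obtain s where ab: "a \<noteq> b" and s: "\<forall>i<d. f!i - c!i = s * (b!i - a!i)"
    unfolding parallel_def by blast
  note cab = collinear_iff_line_coeff[OF len ab]
  define x where "x = map (\<lambda>i. a!i + (s / (1 - lam)) * (b!i - a!i)) [0..<d]"
  define y where "y = map (\<lambda>i. a!i + (1 / lam) * (c!i - a!i)) [0..<d]"
  have "collinear d a x b"
    unfolding collinear_def x_def by (intro disjI1 exI[of _ "s / (1 - lam)"]) simp
  moreover have "collinear d a y c"
    unfolding collinear_def y_def by (intro disjI1 exI[of _ "1 / lam"]) simp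
  moreover have "x \<noteq> y"
  proof
    assume "x = y"
    then have "\<forall>i<d. a!i + (s / (1 - lam)) * (b!i - a!i) = a!i + (1 / lam) * (c!i - a!i)"
      unfolding x_def y_def by (metis (no_types, lifting) diff_zero length_upt nth_map nth_upt add_0)
    then have "\<forall>i<d. c!i = a!i + (lam * (s / (1 - lam))) * (b!i - a!i)"
      using lam by (auto simp: field_simps)
    with nc cab show False by blast
  qed
  moreover have "\<forall>i<d. f!i = x!i + lam * (y!i - x!i)"
  proof (intro allI impI)
    fix i assume i: "i < d"
    have "x!i + lam * (y!i - x!i) = (1 - lam) * x!i + lam * y!i" by (simp add: algebra_simps)
    also have "\<dots> = (1 - lam) * a!i + s * (b!i - a!i) + lam * a!i + (c!i - a!i)"
      using i lam unfolding x_def y_def by (simp add: field_simps)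
    also have "\<dots> = f!i" using s i by (simp add: algebra_simps)
    finally show "f!i = x!i + lam * (y!i - x!i)" by simp
  qed
  then have "collinear d x f y" unfolding collinear_def by blast
  moreover have "length x = d" "length y = d" unfolding x_def y_def by simp_all
  ultimately show ?thesis by blast
qed

lemma combination_meets_line:
  assumes "\<forall>i<d. f!i - c!i = al * (b!i - a!i) + ga * (c!i - a!i)" and "ga \<noteq> 0"
  shows "\<exists>z. length z = d \<and> collinear d a z b \<and> collinear d c z f"
proof -
  define mu where "mu = - 1 / ga"
  define z where "z = map (\<lambda>i. c!i + mu * (f!i - c!i)) [0..<d]"
  have "\<forall>i<d. z!i = a!i + (mu * al) * (b!i - a!i)"
  proof (intro allI impI)
    fix i assume "i < d"
    with assms(1) have "z!i = c!i + mu * (al * (b!i - a!i) + ga * (c!i - a!i))"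
      unfolding z_def by simp
    also have "\<dots> = a!i + (mu * al) * (b!i - a!i)"
      using assms(2) unfolding mu_def by (simp add: field_simps)
    finally show "z!i = a!i + (mu * al) * (b!i - a!i)" .
  qed
  then have "collinear d a z b" unfolding collinear_def by blast
  moreover have "collinear d c z f" "length z = d" unfolding collinear_def z_def by auto
  ultimately show ?thesis by blast
qed

text \<open>If \<open>f\<close> lies on the line through \<open>x \<in> ab\<close> and \<open>y \<in> ac\<close>, then \<open>f - c\<close> is a combination of
  \<open>b - a\<close> and \<open>c - a\<close>; unless the \<open>c - a\<close> part vanishes the line \<open>cf\<close> meets \<open>ab\<close>.\<close>

lemma in_plane_disjoint_imp_parallel:
  assumes len: "length a = d" "length b = d" "length c = d" "length f = d"
    and ab: "a \<noteq> b" and cf: "c \<noteq> f"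
    and xy: "length x = d" "length y = d" "collinear d a x b" "collinear d a y c" "x \<noteq> y"
      "collinear d x f y"
    and disj: "\<not> (\<exists>z. length z = d \<and> collinear d a z b \<and> collinear d c z f)"
  shows "parallel d a b c f"
proof -
  have ca: "c \<noteq> a"
  proof
    assume "c = a"
    then have "collinear d a a b \<and> collinear d c a f"
      unfolding collinear_def by (auto intro: exI[of _ 0])
    with disj len show False by blast
  qed
  obtain al where al: "\<forall>i<d. x!i = a!i + al * (b!i - a!i)"
    using xy(3) collinear_iff_line_coeff[OF len(1,2) ab] by blast
  obtain be where be: "\<forall>i<d. y!i = a!i + be * (c!i - a!i)"
    using xy(4) collinear_iff_line_coeff[OF len(1,3) ca[symmetric]] by blast
  obtain la where la: "\<forall>i<d. f!i = x!i + la * (y!i - x!i)"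
    using xy(6) collinear_iff_line_coeff[OF xy(1,2,5)] by blast
  have fc: "\<forall>i<d. f!i - c!i = ((1 - la) * al) * (b!i - a!i) + (la * be - 1) * (c!i - a!i)"
  proof (intro allI impI)
    fix i assume i: "i < d"
    have "f!i - c!i = (a!i + al * (b!i - a!i))
        + la * ((a!i + be * (c!i - a!i)) - (a!i + al * (b!i - a!i))) - c!i"
      using al be la i by simp
    then show "f!i - c!i = ((1 - la) * al) * (b!i - a!i) + (la * be - 1) * (c!i - a!i)"
      by (simp add: algebra_simps)
  qed
  have "la * be - 1 = 0"
  proof (rule ccontr)
    assume "la * be - 1 \<noteq> 0"
    from combination_meets_line[OF fc this] disj show False by blast
  qed
  with fc have "\<forall>i<d. f!i - c!i = ((1 - la) * al) * (b!i - a!i)" by simp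
  with ab cf show ?thesis by (intro parallelI)
qed

lemma parallel_col_iff:
  assumes lam: "lam \<noteq> 0" "lam \<noteq> (1::'a::field)"
    and len: "length a = d" "length b = d" "length c = d" "length (f::'a list) = d"
  shows "parallel_col d a b c f \<longleftrightarrow> parallel d a b c f"
proof
  assume "parallel_col d a b c f"
  then show "parallel d a b c f"
    unfolding parallel_col_def
    using parallel_on_line[OF len(1,2)] in_plane_disjoint_imp_parallel[OF len] by blast
next
  assume par: "parallel d a b c f"
  then have "a \<noteq> b" "c \<noteq> f" unfolding parallel_def by simp_all
  with par show "parallel_col d a b c f"
    unfolding parallel_col_def
    using parallel_collinear[OF len(1,2) par] parallel_in_plane[OF len(1,2) lam par]
      parallel_lines_disjoint[OF len par] by blast
qed

text \<open>Von Staudt's constructions, relative to a frame \<open>oo, e, w\<close> of three non-collinear points: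
  the point \<open>line_pt d oo e a\<close> of the line \<open>oo e\<close> represents the scalar \<open>a\<close>.\<close>

definition vsum :: "nat \<Rightarrow> 'a::field list \<Rightarrow> 'a list \<Rightarrow> 'a list \<Rightarrow> 'a list" where
  "vsum d oo p y = map (\<lambda>i. p!i + y!i - oo!i) [0..<d]"

definition parallelogram :: "nat \<Rightarrow> 'a::field list \<Rightarrow> 'a list \<Rightarrow> 'a list \<Rightarrow> 'a list \<Rightarrow> bool" where
  "parallelogram d oo p y r \<longleftrightarrow> (p = oo \<and> r = y) \<or> (y = oo \<and> r = p) \<or>
     (\<not> collinear d oo p y \<and> parallel d p r oo y \<and> parallel d y r oo p)"

definition transfer :: "nat \<Rightarrow> 'a::field list \<Rightarrow> 'a list \<Rightarrow> 'a list \<Rightarrow> 'a list \<Rightarrow> 'a list \<Rightarrow> bool" where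
  "transfer d oo e e' t y \<longleftrightarrow> (t = oo \<and> y = oo) \<or> (t \<noteq> oo \<and> collinear d oo y e' \<and> parallel d t y e e')"

definition add_rel :: "nat \<Rightarrow> 'a::field list \<Rightarrow> 'a list \<Rightarrow> 'a list \<Rightarrow> 'a list \<Rightarrow> 'a list \<Rightarrow> 'a list \<Rightarrow> bool" where
  "add_rel d oo e w a b c \<longleftrightarrow>
     collinear d oo c e \<and> (\<exists>q. length q = d \<and> parallelogram d oo b w q \<and> parallel d c q a w)"

definition mul_rel :: "nat \<Rightarrow> 'a::field list \<Rightarrow> 'a list \<Rightarrow> 'a list \<Rightarrow> 'a list \<Rightarrow> 'a list \<Rightarrow> 'a list \<Rightarrow> bool" where
  "mul_rel d oo e w a b c \<longleftrightarrow> collinear d oo c e \<and> (\<exists>a'. length a' = d \<and> transfer d oo e w a a' \<and>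
      (a = oo \<longrightarrow> c = oo) \<and> (a \<noteq> oo \<longrightarrow> parallel d a' c w b))"

definition le_rel :: "('a::field \<Rightarrow> 'a \<Rightarrow> bool) \<Rightarrow> nat \<Rightarrow> 'a list \<Rightarrow> 'a list \<Rightarrow> 'a list \<Rightarrow> 'a list \<Rightarrow> 'a list \<Rightarrow> bool"
  where
  "le_rel le d oo e w a b \<longleftrightarrow> (\<exists>c. length c = d \<and> collinear d oo c e \<and> add_rel d oo e w a c b \<and>
     (between le d oo c e \<or> between le d oo e c))"

lemma length_vsum [simp]: "length (vsum d oo p y) = d"
  by (simp add: vsum_def)

lemma nth_vsum [simp]: "i < d \<Longrightarrow> vsum d oo p y ! i = p!i + y!i - oo!i"
  by (simp add: vsum_def)

lemma parallelogram_imp_eq_vsum: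
  assumes len: "length oo = d" "length p = d" "length y = d" "length r = d"
    and P: "parallelogram d oo p y r"
  shows "r = vsum d oo p y"
proof -
  consider "p = oo \<and> r = y" | "y = oo \<and> r = p" |
    "\<not> collinear d oo p y \<and> parallel d p r oo y \<and> parallel d y r oo p"
    using P unfolding parallelogram_def by blast
  then show ?thesis
  proof cases
    case 3
    then have "parallel d oo y p r" "parallel d oo p y r" using parallel_sym len by blast+
    then obtain s s' where s: "\<forall>i<d. r!i - p!i = s * (y!i - oo!i)"
      and s': "\<forall>i<d. r!i - y!i = s' * (p!i - oo!i)"
      unfolding parallel_def by blast
    have "\<forall>i<d. (s' - 1) * (p!i - oo!i) = (s - 1) * (y!i - oo!i)"
    proof (intro allI impI)
      fix i assume i: "i < d"
      show "(s' - 1) * (p!i - oo!i) = (s - 1) * (y!i - oo!i)"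
        using s[rule_format, OF i] s'[rule_format, OF i] by algebra
    qed
    with 3 have "s - 1 = 0" using noncollinear_coeffs_zero by blast
    with s len show ?thesis by (simp add: list_eq_iff_nth_eq algebra_simps)
  qed (use len in \<open>simp_all add: list_eq_iff_nth_eq\<close>)
qed

lemma parallelogram_vsum:
  assumes len: "length oo = d" "length p = d" "length y = d"
    and h: "p = oo \<or> y = oo \<or> \<not> collinear d oo p y"
  shows "parallelogram d oo p y (vsum d oo p y)"
proof -
  consider "p = oo" | "y = oo" | "\<not> collinear d oo p y" using h by blast
  then show ?thesis
  proof cases
    case 3
    have po: "p \<noteq> oo" and yo: "y \<noteq> oo"
      using 3 noncollinear_neq12 noncollinear_neq13 len by blast+
    have "p \<noteq> vsum d oo p y"
    proof
      assume h: "p = vsum d oo p y"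
      have "y!i = oo!i" if "i < d" for i
        using arg_cong[OF h, of "\<lambda>q. q!i"] that by simp
      with yo len show False by (simp add: list_eq_iff_nth_eq)
    qed
    moreover have "y \<noteq> vsum d oo p y"
    proof
      assume h: "y = vsum d oo p y"
      have "p!i = oo!i" if "i < d" for i
        using arg_cong[OF h, of "\<lambda>q. q!i"] that by simp
      with po len show False by (simp add: list_eq_iff_nth_eq)
    qed
    ultimately have "parallel d oo y p (vsum d oo p y)" "parallel d oo p y (vsum d oo p y)"
      using po yo by (auto intro!: parallelI[where s=1])
    then have "parallel d p (vsum d oo p y) oo y" "parallel d y (vsum d oo p y) oo p"
      using parallel_sym len by (metis length_vsum)+
    with 3 show ?thesis unfolding parallelogram_def by simp
  qed (use len in \<open>simp_all add: parallelogram_def list_eq_iff_nth_eq\<close>)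
qed

lemma transfer_imp_eq:
  assumes len: "length oo = d" "length e = d" "length e' = d" "length y = d"
    and nc: "\<not> collinear d oo e e'"
    and T: "transfer d oo e e' (line_pt d oo e a) y"
  shows "y = line_pt d oo e' a"
proof -
  have oe: "oo \<noteq> e" and oe': "oo \<noteq> e'"
    using noncollinear_neq12[OF nc len(1,2)] noncollinear_neq13[OF nc len(1,3)] .
  consider "line_pt d oo e a = oo \<and> y = oo" |
    "collinear d oo y e' \<and> parallel d (line_pt d oo e a) y e e'"
    using T unfolding transfer_def by blast
  then show ?thesis
  proof cases
    case 1
    then have "a = 0" using line_pt_eq_iff[OF len(1,2) oe, of a 0] line_pt_0[OF len(1)] by simp
    with 1 line_pt_0[OF len(1)] show ?thesis by simp
  next
    case 2
    then obtain mu where mu: "\<forall>i<d. y!i = oo!i + mu * (e'!i - oo!i)"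
      using collinear_iff_line_coeff[OF len(1,3) oe'] by blast
    obtain s where s: "\<forall>i<d. y!i - line_pt d oo e a ! i = s * (e'!i - e!i)"
      using 2 parallel_sym len unfolding parallel_def by (metis length_line_pt)
    have "\<forall>i<d. (a - s) * (e!i - oo!i) = (mu - s) * (e'!i - oo!i)"
    proof (intro allI impI)
      fix i assume i: "i < d"
      show "(a - s) * (e!i - oo!i) = (mu - s) * (e'!i - oo!i)"
        using mu[rule_format, OF i] s[rule_format, OF i] i by simp algebra
    qed
    then have "mu = a" using noncollinear_coeffs_zero[OF nc] by fastforce
    with mu len show ?thesis by (simp add: list_eq_iff_nth_eq)
  qed
qed

lemma transfer_line_pt:
  assumes len: "length oo = d" "length e = d" "length e' = d"
    and nc: "\<not> collinear d oo e e'"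
  shows "transfer d oo e e' (line_pt d oo e a) (line_pt d oo e' a)"
proof (cases "a = 0")
  case True
  then show ?thesis unfolding transfer_def using line_pt_0[OF len(1)] by simp
next
  case False
  have oe: "oo \<noteq> e" using noncollinear_neq12[OF nc len(1,2)] .
  have t: "line_pt d oo e a \<noteq> oo"
    using line_pt_eq_iff[OF len(1,2) oe, of a 0] line_pt_0[OF len(1)] False by simp
  have ee': "e \<noteq> e'"
  proof
    assume "e = e'"
    then have "collinear d oo e e'" unfolding collinear_def by (intro disjI1 exI[of _ 1]) simp
    with nc show False by simp
  qed
  have ty: "line_pt d oo e a \<noteq> line_pt d oo e' a"
  proof
    assume h: "line_pt d oo e a = line_pt d oo e' a"
    have "\<forall>i<d. a * (e!i - oo!i) = a * (e'!i - oo!i)"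
    proof (intro allI impI)
      fix i assume "i < d"
      with arg_cong[OF h, of "\<lambda>p. p!i"] show "a * (e!i - oo!i) = a * (e'!i - oo!i)" by simp
    qed
    with False show False using noncollinear_coeffs_zero[OF nc] by blast
  qed
  have "\<forall>i<d. line_pt d oo e' a ! i - line_pt d oo e a ! i = a * (e'!i - e!i)"
    by (simp add: algebra_simps)
  then have "parallel d e e' (line_pt d oo e a) (line_pt d oo e' a)" using ty ee' by (intro parallelI)
  then have "parallel d (line_pt d oo e a) (line_pt d oo e' a) e e'"
    using parallel_sym len by (metis length_line_pt)
  then show ?thesis unfolding transfer_def using t collinear_line_pt by blast
qed

lemma line_pt_noncollinear:
  assumes len: "length oo = d" "length e = d" "length w = d"
    and nc: "\<not> collinear d oo e w" and "b \<noteq> 0"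
  shows "\<not> collinear d oo (line_pt d oo e b) w"
proof
  assume "collinear d oo (line_pt d oo e b) w"
  then obtain l where "\<forall>i<d. line_pt d oo e b ! i = oo!i + l * (w!i - oo!i)"
    using collinear_iff_line_coeff[OF len(1,3) noncollinear_neq13[OF nc len(1,3)]] by blast
  then have "\<forall>i<d. b * (e!i - oo!i) = l * (w!i - oo!i)" by auto
  with \<open>b \<noteq> 0\<close> show False using noncollinear_coeffs_zero[OF nc] by blast
qed

lemma line_pt_neq_third:
  assumes nc: "\<not> collinear d oo e w"
  shows "line_pt d oo e a \<noteq> w"
proof
  assume h: "line_pt d oo e a = w"
  have "\<forall>i<d. a * (e!i - oo!i) = 1 * (w!i - oo!i)"
  proof (intro allI impI)
    fix i assume "i < d"
    then show "a * (e!i - oo!i) = 1 * (w!i - oo!i)" using h[symmetric] by simp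
  qed
  then show False using noncollinear_coeffs_zero[OF nc, of a 1] by simp
qed

lemma add_rel_imp_eq:
  assumes len: "length oo = d" "length e = d" "length w = d" "length c = d"
    and nc: "\<not> collinear d oo e w"
    and A: "add_rel d oo e w (line_pt d oo e a) (line_pt d oo e b) c"
  shows "c = line_pt d oo e (a + b)"
proof -
  have oe: "oo \<noteq> e" using noncollinear_neq12[OF nc len(1,2)] .
  obtain g where g: "c = line_pt d oo e g"
    using A collinear_iff_line_pt[OF len(1,2,4) oe] unfolding add_rel_def by blast
  from A obtain q where q: "length q = d" "parallelogram d oo (line_pt d oo e b) w q"
    "parallel d c q (line_pt d oo e a) w"
    unfolding add_rel_def by blast
  have q_eq: "q = vsum d oo (line_pt d oo e b) w"
    using parallelogram_imp_eq_vsum[OF len(1) _ len(3) q(1,2)] by simp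
  obtain s where s: "\<forall>i<d. q!i - c!i = s * (w!i - line_pt d oo e a ! i)"
    using q(3) parallel_sym[OF len(4) q(1) _ len(3)] unfolding parallel_def by (metis length_line_pt)
  have "\<forall>i<d. (b - g + s * a) * (e!i - oo!i) = (s - 1) * (w!i - oo!i)"
  proof (intro allI impI)
    fix i assume i: "i < d"
    with s q_eq g have "(oo!i + b * (e!i - oo!i)) + w!i - oo!i - (oo!i + g * (e!i - oo!i))
        = s * (w!i - (oo!i + a * (e!i - oo!i)))"
      by simp
    then show "(b - g + s * a) * (e!i - oo!i) = (s - 1) * (w!i - oo!i)" by algebra
  qed
  then have "b - g + s * a = 0 \<and> s - 1 = 0" by (rule noncollinear_coeffs_zero[OF nc])
  then have "g = a + b" by algebra
  with g show ?thesis by simp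
qed

lemma add_rel_line_pt:
  assumes len: "length oo = d" "length e = d" "length w = d"
    and nc: "\<not> collinear d oo e w"
  shows "add_rel d oo e w (line_pt d oo e a) (line_pt d oo e b) (line_pt d oo e (a + b))"
proof -
  define q where "q = vsum d oo (line_pt d oo e b) w"
  have "line_pt d oo e b = oo \<or> w = oo \<or> \<not> collinear d oo (line_pt d oo e b) w"
    using line_pt_noncollinear[OF len nc, of b] line_pt_0[OF len(1)] by auto
  then have pl: "parallelogram d oo (line_pt d oo e b) w q"
    unfolding q_def using parallelogram_vsum[OF len(1) _ len(3)] by simp
  have aw: "line_pt d oo e a \<noteq> w" using line_pt_neq_third[OF nc] .
  have qd: "\<forall>i<d. q!i - line_pt d oo e (a + b) ! i = 1 * (w!i - line_pt d oo e a ! i)"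
    unfolding q_def by (simp add: algebra_simps)
  have cq: "line_pt d oo e (a + b) \<noteq> q"
  proof
    assume "line_pt d oo e (a + b) = q"
    with qd len have "w = line_pt d oo e a" by (simp add: list_eq_iff_nth_eq)
    with aw show False by simp
  qed
  have "parallel d (line_pt d oo e a) w (line_pt d oo e (a + b)) q" by (rule parallelI[OF aw cq qd])
  then have "parallel d (line_pt d oo e (a + b)) q (line_pt d oo e a) w"
    using parallel_sym len q_def by (metis length_line_pt length_vsum)
  with pl show ?thesis unfolding add_rel_def q_def using collinear_line_pt by (metis length_vsum)
qed

lemma add_rel_iff:
  assumes "length oo = d" "length e = d" "length w = d" "length c = d"
    and "\<not> collinear d oo e w"
  shows "add_rel d oo e w (line_pt d oo e a) (line_pt d oo e b) c \<longleftrightarrow> c = line_pt d oo e (a + b)"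
  using add_rel_imp_eq[OF assms] add_rel_line_pt[OF assms(1-3,5)] by blast

lemma mul_rel_imp_eq:
  assumes len: "length oo = d" "length e = d" "length w = d" "length c = d"
    and nc: "\<not> collinear d oo e w"
    and M: "mul_rel d oo e w (line_pt d oo e a) (line_pt d oo e b) c"
  shows "c = line_pt d oo e (a * b)"
proof -
  have oe: "oo \<noteq> e" using noncollinear_neq12[OF nc len(1,2)] .
  obtain g where g: "c = line_pt d oo e g"
    using M collinear_iff_line_pt[OF len(1,2,4) oe] unfolding mul_rel_def by blast
  from M obtain a' where a': "length a' = d" "transfer d oo e w (line_pt d oo e a) a'"
    "line_pt d oo e a = oo \<longrightarrow> c = oo" "line_pt d oo e a \<noteq> oo \<longrightarrow> parallel d a' c w (line_pt d oo e b)"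
    unfolding mul_rel_def by blast
  have a'_eq: "a' = line_pt d oo w a" using transfer_imp_eq[OF len(1,2,3) a'(1) nc a'(2)] .
  show ?thesis
  proof (cases "a = 0")
    case True
    with a'(3) g show ?thesis using line_pt_0[OF len(1)] by simp
  next
    case False
    then have "line_pt d oo e a \<noteq> oo"
      using line_pt_eq_iff[OF len(1,2) oe, of a 0] line_pt_0[OF len(1)] by simp
    with a'(4) obtain s where s: "\<forall>i<d. c!i - a'!i = s * (line_pt d oo e b ! i - w!i)"
      using parallel_sym[OF a'(1) len(4) len(3)] unfolding parallel_def by (metis length_line_pt)
    have "\<forall>i<d. (g - s * b) * (e!i - oo!i) = (a - s) * (w!i - oo!i)"
    proof (intro allI impI)
      fix i assume i: "i < d"
      with s a'_eq g have "(oo!i + g * (e!i - oo!i)) - (oo!i + a * (w!i - oo!i))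
          = s * ((oo!i + b * (e!i - oo!i)) - w!i)"
        by simp
      then show "(g - s * b) * (e!i - oo!i) = (a - s) * (w!i - oo!i)" by algebra
    qed
    then have "g = a * b" using noncollinear_coeffs_zero[OF nc] by fastforce
    with g show ?thesis by simp
  qed
qed

lemma mul_rel_line_pt:
  assumes len: "length oo = d" "length e = d" "length w = d"
    and nc: "\<not> collinear d oo e w"
  shows "mul_rel d oo e w (line_pt d oo e a) (line_pt d oo e b) (line_pt d oo e (a * b))"
proof -
  have oe: "oo \<noteq> e" using noncollinear_neq12[OF nc len(1,2)] .
  define a' where "a' = line_pt d oo w a"
  have tr: "transfer d oo e w (line_pt d oo e a) a'"
    unfolding a'_def using transfer_line_pt[OF len nc] .
  show ?thesis
  proof (cases "a = 0")
    case True
    then show ?thesis unfolding mul_rel_def using collinear_line_pt tr line_pt_0[OF len(1)] a'_def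
      by (metis length_line_pt mult_zero_left)
  next
    case False
    have pa: "line_pt d oo e a \<noteq> oo"
      using line_pt_eq_iff[OF len(1,2) oe, of a 0] line_pt_0[OF len(1)] False by simp
    have wb: "w \<noteq> line_pt d oo e b" using line_pt_neq_third[OF nc] by metis
    have dd: "\<forall>i<d. line_pt d oo e (a * b) ! i - a'!i = a * (line_pt d oo e b ! i - w!i)"
      unfolding a'_def by (simp add: algebra_simps)
    have ac: "a' \<noteq> line_pt d oo e (a * b)"
    proof
      assume h: "a' = line_pt d oo e (a * b)"
      have "\<forall>i<d. a * (w!i - oo!i) = (a * b) * (e!i - oo!i)"
      proof (intro allI impI)
        fix i assume "i < d"
        with arg_cong[OF h, of "\<lambda>p. p!i"] show "a * (w!i - oo!i) = (a * b) * (e!i - oo!i)"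
          unfolding a'_def by simp
      qed
      with False show False using noncollinear_coeffs_zero[OF nc] by metis
    qed
    have "parallel d w (line_pt d oo e b) a' (line_pt d oo e (a * b))" by (rule parallelI[OF wb ac dd])
    then have "parallel d a' (line_pt d oo e (a * b)) w (line_pt d oo e b)"
      using parallel_sym len a'_def by (metis length_line_pt)
    then show ?thesis unfolding mul_rel_def using collinear_line_pt tr pa a'_def by (metis length_line_pt)
  qed
qed

lemma mul_rel_iff:
  assumes "length oo = d" "length e = d" "length w = d" "length c = d"
    and "\<not> collinear d oo e w"
  shows "mul_rel d oo e w (line_pt d oo e a) (line_pt d oo e b) c \<longleftrightarrow> c = line_pt d oo e (a * b)"
  using mul_rel_imp_eq[OF assms] mul_rel_line_pt[OF assms(1-3,5)] by blast

lemma between_line_pt_iff: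
  assumes "length oo = d" "length e = d" "oo \<noteq> e"
  shows "between le d oo (line_pt d oo e g) e \<longleftrightarrow> le 0 g \<and> le g 1"
proof -
  obtain k where k: "k < d" "oo!k \<noteq> e!k"
    using assms by (auto simp: list_eq_iff_nth_eq)
  have "(\<forall>i<d. line_pt d oo e g ! i = oo!i + l * (e!i - oo!i)) \<longleftrightarrow> g = l" for l
  proof
    assume "\<forall>i<d. line_pt d oo e g ! i = oo!i + l * (e!i - oo!i)"
    then have "line_pt d oo e g ! k = oo!k + l * (e!k - oo!k)" using k by blast
    with k show "g = l" by simp
  qed simp
  then show ?thesis unfolding between_def by auto
qed

lemma between_beyond_line_pt_iff:
  assumes "length oo = d" "length e = d" "oo \<noteq> e"
  shows "between le d oo e (line_pt d oo e g) \<longleftrightarrow> (\<exists>l. le 0 l \<and> le l 1 \<and> l * g = 1)"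
proof -
  obtain k where k: "k < d" "oo!k \<noteq> e!k"
    using assms by (auto simp: list_eq_iff_nth_eq)
  have "(\<forall>i<d. e!i = oo!i + l * (line_pt d oo e g ! i - oo!i)) \<longleftrightarrow> l * g = 1" for l
  proof
    assume "\<forall>i<d. e!i = oo!i + l * (line_pt d oo e g ! i - oo!i)"
    then have "e!k = oo!k + l * (line_pt d oo e g ! k - oo!k)" using k by blast
    with k(1) have "(1 - l * g) * (e!k - oo!k) = 0" by (simp add: algebra_simps)
    with k show "l * g = 1" by simp
  next
    assume "l * g = 1"
    then show "\<forall>i<d. e!i = oo!i + l * (line_pt d oo e g ! i - oo!i)"
      by (simp add: algebra_simps flip: mult.assoc)
  qed
  then show ?thesis unfolding between_def by auto
qed

context
  fixes r :: "'a::field \<Rightarrow> 'a \<Rightarrow> bool"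
  assumes ord: "is_field_order r"
begin

lemma ord_refl: "r x x"
  using ord unfolding is_field_order_def by blast

lemma ord_antisym: "r x y \<Longrightarrow> r y x \<Longrightarrow> x = y"
  using ord unfolding is_field_order_def by blast

lemma ord_trans: "r x y \<Longrightarrow> r y z \<Longrightarrow> r x z"
  using ord unfolding is_field_order_def by blast

lemma ord_total: "r x y \<or> r y x"
  using ord unfolding is_field_order_def by blast

lemma ord_add_right: "r x y \<Longrightarrow> r (x + z) (y + z)"
  using ord unfolding is_field_order_def by blast

lemma ord_mult_nonneg: "r 0 x \<Longrightarrow> r 0 y \<Longrightarrow> r 0 (x * y)"
  using ord unfolding is_field_order_def by blast

lemma ord_iff_diff_nonneg: "r x y \<longleftrightarrow> r 0 (y - x)"
proof
  assume "r x y"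
  then have "r (x + - x) (y + - x)" by (rule ord_add_right)
  then show "r 0 (y - x)" by simp
next
  assume "r 0 (y - x)"
  then have "r (0 + x) (y - x + x)" by (rule ord_add_right)
  then show "r x y" by simp
qed

lemma ord_square_nonneg: "r 0 (z * z)"
proof (cases "r 0 z")
  case False
  then have "r z 0" using ord_total by blast
  then have "r 0 (- z)" using ord_iff_diff_nonneg[of z 0] by simp
  then show ?thesis using ord_mult_nonneg[of "- z" "- z"] by simp
qed (rule ord_mult_nonneg)

lemma ord_zero_one: "r 0 1"
  using ord_square_nonneg[of 1] by simp

lemma ord_inverse_nonneg: "r 0 x \<Longrightarrow> r 0 (1 / x)"
proof (cases "x = 0")
  case False
  assume "r 0 x"
  then have "r 0 (x * ((1 / x) * (1 / x)))" using ord_mult_nonneg ord_square_nonneg by blast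
  with False show ?thesis by (simp add: field_simps)
qed simp

lemma ord_inverse_le_one:
  assumes "r 1 c"
  shows "r (1 / c) 1" "c \<noteq> 0"
proof -
  show c: "c \<noteq> 0"
  proof
    assume "c = 0"
    with assms have "(1::'a) = 0" using ord_antisym ord_zero_one by blast
    then show False by simp
  qed
  have "r 0 (c - 1)" using assms ord_iff_diff_nonneg by blast
  moreover have "r 0 (1 / c)" using ord_inverse_nonneg ord_trans[OF ord_zero_one assms] by blast
  ultimately have "r 0 ((c - 1) * (1 / c))" by (rule ord_mult_nonneg)
  moreover have "(c - 1) * (1 / c) = 1 - 1 / c" using c by (simp add: field_simps)
  ultimately show "r (1 / c) 1" using ord_iff_diff_nonneg by simp
qed

lemma ord_neg_ratio:
  assumes "r l 0"
  shows "r 0 (- l / (1 - l))" "r (- l / (1 - l)) 1" "1 - l \<noteq> 0"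
proof -
  have nl: "r 0 (- l)" using ord_iff_diff_nonneg[of l 0] assms by simp
  then have l1: "r 1 (1 - l)" using ord_add_right[OF nl, of 1] by simp
  then show ln: "1 - l \<noteq> 0" by (rule ord_inverse_le_one)
  have i0: "r 0 (1 / (1 - l))" using ord_inverse_nonneg ord_trans[OF ord_zero_one l1] by blast
  show "r 0 (- l / (1 - l))" using ord_mult_nonneg[OF nl i0] by simp
  have "1 - (- l / (1 - l)) = 1 / (1 - l)" using ln by (simp add: field_simps)
  then show "r (- l / (1 - l)) 1" using ord_iff_diff_nonneg[of "- l / (1 - l)" 1] i0 by simp
qed

lemma ord_one_add_one_neq: "(1::'a) + 1 \<noteq> 0" "(1::'a) + 1 \<noteq> 1"
proof -
  show "(1::'a) + 1 \<noteq> 0"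
  proof
    assume "(1::'a) + 1 = 0"
    with ord_add_right[OF ord_zero_one, of 1] have "r 1 0" by simp
    then show False using ord_antisym[OF _ ord_zero_one] by simp
  qed
  show "(1::'a) + 1 \<noteq> 1"
  proof
    assume "(1::'a) + 1 = 1"
    then have "(1::'a) + 1 = 1 + 0" by simp
    then show False by (simp only: add_left_cancel one_neq_zero)
  qed
qed

lemma nonneg_iff_between:
  assumes "length oo = d" "length e = d" "oo \<noteq> e"
  shows "(between r d oo (line_pt d oo e g) e \<or> between r d oo e (line_pt d oo e g)) \<longleftrightarrow> r 0 g"
proof
  assume "between r d oo (line_pt d oo e g) e \<or> between r d oo e (line_pt d oo e g)"
  then show "r 0 g"
  proof
    assume "between r d oo e (line_pt d oo e g)"
    then obtain l where "r 0 l" "l * g = 1"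
      using between_beyond_line_pt_iff[OF assms] by blast
    then show "r 0 g"
      using ord_inverse_nonneg[of l] by (metis divide_eq_eq mult.commute mult_zero_right zero_neq_one)
  qed (use between_line_pt_iff[OF assms] in simp)
next
  assume g: "r 0 g"
  show "between r d oo (line_pt d oo e g) e \<or> between r d oo e (line_pt d oo e g)"
  proof (cases "r g 1")
    case True
    with g show ?thesis using between_line_pt_iff[OF assms] by simp
  next
    case False
    then have "r 1 g" using ord_total by blast
    then have "r (1 / g) 1" "g \<noteq> 0" "r 0 (1 / g)"
      using ord_inverse_le_one ord_inverse_nonneg[OF g] by auto
    then show ?thesis using between_beyond_line_pt_iff[OF assms] by (auto intro!: exI[of _ "1 / g"])
  qed
qed

lemma le_rel_iff:
  assumes len: "length oo = d" "length e = d" "length w = d"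
    and nc: "\<not> collinear d oo e w"
  shows "le_rel r d oo e w (line_pt d oo e a) (line_pt d oo e b) \<longleftrightarrow> r a b"
proof -
  have oe: "oo \<noteq> e" using noncollinear_neq12[OF nc len(1,2)] .
  have "le_rel r d oo e w (line_pt d oo e a) (line_pt d oo e b) \<longleftrightarrow>
     (\<exists>g. add_rel d oo e w (line_pt d oo e a) (line_pt d oo e g) (line_pt d oo e b) \<and>
       (between r d oo (line_pt d oo e g) e \<or> between r d oo e (line_pt d oo e g)))"
    unfolding le_rel_def using collinear_iff_line_pt[OF len(1,2) _ oe] by (metis length_line_pt)
  also have "\<dots> \<longleftrightarrow> (\<exists>g. line_pt d oo e b = line_pt d oo e (a + g) \<and> r 0 g)"
    using add_rel_iff[OF len(1-3) _ nc] nonneg_iff_between[OF len(1,2) oe] by (metis length_line_pt)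
  also have "\<dots> \<longleftrightarrow> (\<exists>g. b = a + g \<and> r 0 g)"
    using line_pt_eq_iff[OF len(1,2) oe] by metis
  also have "\<dots> \<longleftrightarrow> r a b"
    using ord_iff_diff_nonneg by (metis add_diff_cancel_left' diff_add_cancel add.commute)
  finally show ?thesis .
qed

lemma collinear_imp_between:
  assumes "collinear d p q f"
  shows "between r d p q f \<or> between r d q p f \<or> between r d p f q"
proof -
  consider l where "\<forall>i<d. q!i = p!i + l * (f!i - p!i)" | "\<forall>i<d. f!i = p!i"
    using assms unfolding collinear_def by blast
  then show ?thesis
  proof cases
    case 2
    then have "between r d p f q" unfolding between_def
      using ord_refl ord_zero_one by (intro exI[of _ 0]) auto
    then show ?thesis by simp
  next
    case (1 l)
    consider "r 0 l \<and> r l 1" | "r 1 l" | "r l 0" using ord_total by blast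
    then show ?thesis
    proof cases
      case 1
      with \<open>\<forall>i<d. q!i = _\<close> show ?thesis unfolding between_def by blast
    next
      case 2
      then have "r (1 / l) 1" "l \<noteq> 0" "r 0 (1 / l)"
        using ord_inverse_le_one ord_inverse_nonneg ord_trans[OF ord_zero_one] by blast+
      moreover have "\<forall>i<d. f!i = p!i + (1 / l) * (q!i - p!i)"
        using 1 \<open>l \<noteq> 0\<close> by (simp add: field_simps)
      ultimately show ?thesis unfolding between_def by blast
    next
      case 3
      note m = ord_neg_ratio[OF this]
      have "\<forall>i<d. p!i = q!i + (- l / (1 - l)) * (f!i - q!i)"
      proof (intro allI impI)
        fix i assume "i < d"
        with 1 have qi: "q!i = p!i + l * (f!i - p!i)" by simp
        show "p!i = q!i + (- l / (1 - l)) * (f!i - q!i)"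
          unfolding qi using m(3) by (simp add: field_simps)
      qed
      with m(1,2) show ?thesis unfolding between_def by blast
    qed
  qed
qed

lemma between_imp_collinear:
  assumes "between r d p q f \<or> between r d q p f \<or> between r d p f q"
  shows "collinear d p q f"
  using assms
proof (elim disjE)
  assume "between r d q p f"
  then obtain l where l: "\<forall>i<d. p!i = q!i + l * (f!i - q!i)" unfolding between_def by blast
  show ?thesis
  proof (cases "l = 1")
    case False
    have "\<forall>i<d. q!i = p!i + (- l / (1 - l)) * (f!i - p!i)"
    proof (intro allI impI)
      fix i assume "i < d"
      with l have pi: "p!i = q!i + l * (f!i - q!i)" by simp
      from False have "1 - l \<noteq> 0" by simp
      then show "q!i = p!i + (- l / (1 - l)) * (f!i - p!i)" unfolding pi by (simp add: field_simps)
    qed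
    then show ?thesis unfolding collinear_def by blast
  qed (use l in \<open>simp add: collinear_def\<close>)
next
  assume "between r d p f q"
  then obtain l where l: "\<forall>i<d. f!i = p!i + l * (q!i - p!i)" unfolding between_def by blast
  show ?thesis
  proof (cases "l = 0")
    case False
    with l have "\<forall>i<d. q!i = p!i + (1 / l) * (f!i - p!i)" by (simp add: field_simps)
    then show ?thesis unfolding collinear_def by blast
  qed (use l in \<open>simp add: collinear_def\<close>)
qed (auto simp: between_def collinear_def)

end

lemma field_hyp_ex_scalar:
  assumes "field_hyp (le :: ('a::field \<Rightarrow> 'a \<Rightarrow> bool) option)"
  shows "\<exists>lam::'a. lam \<noteq> 0 \<and> lam \<noteq> 1"
proof (cases le)
  case None
  then obtain x y z :: 'a where "distinct [x, y, z]" using assms unfolding field_hyp_def by auto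
  then show ?thesis by (metis distinct_length_2_or_more distinct_singleton)
next
  case (Some r)
  then have "is_field_order r" using assms unfolding field_hyp_def by simp
  then show ?thesis using ord_one_add_one_neq by blast
qed

locale col_geometry =
  fixes d :: nat and I :: "'s \<Rightarrow> 'a::field list list \<Rightarrow> bool"
  assumes gdef_collinear0: "gdef d I (\<lambda>e. collinear d (e 0) (e 1) (e 2))"
    and scalar: "\<exists>lam::'a. lam \<noteq> 0 \<and> lam \<noteq> 1"
begin

lemma gdef_collinear: "gdef d I (\<lambda>e. collinear d (e i) (e j) (e k))"
  using gdef_subst[OF gdef_collinear0, of "(!) [i, j, k]"] by (rule gdef_cong) simp

lemma gdef_on_line_block: "gdef d I (\<lambda>e. \<forall>p\<in>set (map e [N..<N + k]). collinear d (e a) p (e b))"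
proof -
  have "gdef d I (\<lambda>e. \<forall>j<k. collinear d (e a) (e (N + j)) (e b))"
    by (intro gdef_ball gdef_collinear)
  then show ?thesis unfolding all_set_conv_all_nth by (rule gdef_cong) simp
qed

lemma gdef_parallel: "gdef d I (\<lambda>e. parallel d (e i) (e j) (e k) (e l))"
proof -
  have "gdef d I (\<lambda>e. \<exists>x. length x = d \<and> (\<exists>y. length y = d \<and>
      collinear d (e 0) x (e 1) \<and> collinear d (e 0) y (e 2) \<and> x \<noteq> y \<and> collinear d x (e 3) y))"
    by (intro gdef_ex_point[where N = 4] gdef_ex_point[where N = 5] gdef_conj gdef_not gdef_eq
        gdef_collinear) simp_all
  moreover have "gdef d I (\<lambda>e. \<exists>z. length z = d \<and> collinear d (e 0) z (e 1) \<and> collinear d (e 2) z (e 3))"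
    by (intro gdef_ex_point[where N = 4] gdef_conj gdef_collinear) simp
  ultimately have "gdef d I (\<lambda>e. parallel_col d (e 0) (e 1) (e 2) (e 3))"
    unfolding parallel_col_def by (intro gdef_conj gdef_disj gdef_not gdef_eq gdef_collinear)
  then have "gdef d I (\<lambda>e. parallel d (e 0) (e 1) (e 2) (e 3))"
    by (rule gdef_cong) (use scalar parallel_col_iff in blast)
  from gdef_subst[OF this, of "(!) [i, j, k, l]"] show ?thesis
    by (rule gdef_cong) simp
qed

lemma gdef_parallelogram: "gdef d I (\<lambda>e. parallelogram d (e i) (e j) (e k) (e l))"
  unfolding parallelogram_def by (intro gdef_conj gdef_disj gdef_not gdef_eq gdef_collinear gdef_parallel)

lemma gdef_transfer: "gdef d I (\<lambda>e. transfer d (e i) (e j) (e k) (e l) (e m))"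
  unfolding transfer_def by (intro gdef_conj gdef_disj gdef_not gdef_eq gdef_collinear gdef_parallel)

lemma gdef_add_rel: "gdef d I (\<lambda>e. add_rel d (e i) (e j) (e k) (e l) (e m) (e n))"
proof -
  have "gdef d I (\<lambda>e. add_rel d (e 0) (e 1) (e 2) (e 3) (e 4) (e 5))"
    unfolding add_rel_def
    by (intro gdef_conj gdef_collinear gdef_ex_point[where N = 6] gdef_parallelogram gdef_parallel) simp
  from gdef_subst[OF this, of "(!) [i, j, k, l, m, n]"] show ?thesis
    by (rule gdef_cong) simp
qed

lemma gdef_mul_rel: "gdef d I (\<lambda>e. mul_rel d (e i) (e j) (e k) (e l) (e m) (e n))"
proof -
  have "gdef d I (\<lambda>e. mul_rel d (e 0) (e 1) (e 2) (e 3) (e 4) (e 5))"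
    unfolding mul_rel_def
    by (intro gdef_conj gdef_imp gdef_not gdef_eq gdef_collinear gdef_ex_point[where N = 6]
        gdef_transfer gdef_parallel) simp
  from gdef_subst[OF this, of "(!) [i, j, k, l, m, n]"] show ?thesis
    by (rule gdef_cong) simp
qed

lemma gdef_le_rel:
  assumes "gdef d I (\<lambda>e. between r d (e 0) (e 1) (e 2))"
  shows "gdef d I (\<lambda>e. le_rel r d (e i) (e j) (e k) (e l) (e m))"
proof -
  have between: "gdef d I (\<lambda>e. between r d (e i) (e j) (e k))" for i j k
    using gdef_subst[OF assms, of "(!) [i, j, k]"] by (rule gdef_cong) simp
  have "gdef d I (\<lambda>e. le_rel r d (e 0) (e 1) (e 2) (e 3) (e 4))"
    unfolding le_rel_def
    by (intro gdef_ex_point[where N = 5] gdef_conj gdef_disj gdef_collinear gdef_add_rel between) simp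
  from gdef_subst[OF this, of "(!) [i, j, k, l, m]"] show ?thesis
    by (rule gdef_cong) simp
qed

end

section \<open>Field formulas evaluated on a line\<close>

text \<open>The bounds count bound as well as free variables: each one is given a slot on the line.\<close>

fun tvars :: "ftm \<Rightarrow> nat" where
  "tvars (FVar i) = Suc i"
| "tvars FZero = 0"
| "tvars FOne = 0"
| "tvars (FAdd s t) = max (tvars s) (tvars t)"
| "tvars (FMul s t) = max (tvars s) (tvars t)"

fun fvars :: "ffm \<Rightarrow> nat" where
  "fvars (FEq s t) = max (tvars s) (tvars t)"
| "fvars (FLe s t) = max (tvars s) (tvars t)"
| "fvars (FNot \<phi>) = fvars \<phi>"
| "fvars (FAnd \<phi> \<psi>) = max (fvars \<phi>) (fvars \<psi>)"
| "fvars (FEx x \<phi>) = max (Suc x) (fvars \<phi>)"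

text \<open>The points \<open>e (N + i)\<close>, \<open>i < V\<close>, of the line through \<open>e io\<close> and \<open>e ie\<close> encode the field elements
  \<open>g i\<close>; the point \<open>e iw\<close> off that line completes the frame of the constructions.\<close>

definition line_env :: "nat \<Rightarrow> nat \<Rightarrow> nat \<Rightarrow> nat \<Rightarrow> nat \<Rightarrow> nat \<Rightarrow> (nat \<Rightarrow> 'a::field list) \<Rightarrow> (nat \<Rightarrow> 'a) \<Rightarrow> bool"
  where
  "line_env d io ie iw N V e g \<longleftrightarrow> (\<forall>i. length (e i) = d) \<and> \<not> collinear d (e io) (e ie) (e iw) \<and>
     (\<forall>i<V. e (N + i) = line_pt d (e io) (e ie) (g i))"

lemma line_env_upd:
  assumes "line_env d io ie iw N V e g" "io < N" "ie < N" "iw < N" "N + V \<le> j" "length p = d"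
  shows "line_env d io ie iw N V (e(j := p)) g"
  using assms unfolding line_env_def by auto

lemma line_env_upd_block:
  assumes len: "\<forall>i. length (e i) = d" and nc: "\<not> collinear d (e io) (e ie) (e iw)"
    and pos: "io < N" "ie < N" "iw < N"
    and u: "map e [N..<N + k] = map (line_pt d (e io) (e ie)) u" and u': "length u' = V - k"
  shows "line_env d io ie iw N V (upd_block e (N + k) (map (line_pt d (e io) (e ie)) u')) (\<lambda>i. (u @ u') ! i)"
  unfolding line_env_def
proof (intro conjI allI impI)
  let ?lp = "line_pt d (e io) (e ie)" and ?e = "upd_block e (N + k) (map (line_pt d (e io) (e ie)) u')"
  have lu: "length u = k" using arg_cong[OF u, of length] by simp
  show "length (?e i) = d" for i
    using length_upd_block[OF len, of "map ?lp u'" "N + k"] by simp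
  show "\<not> collinear d (?e io) (?e ie) (?e iw)" using nc pos by simp
  fix i assume "i < V"
  show "?e (N + i) = line_pt d (?e io) (?e ie) ((u @ u') ! i)"
  proof (cases "i < k")
    case True
    then have "e (N + i) = map e [N..<N + k] ! i" by simp
    with True u lu pos show ?thesis by (simp add: nth_append)
  next
    case False
    with \<open>i < V\<close> u' lu have "?e (N + k + (i - k)) = ?lp (u' ! (i - k))"
      by (simp del: upd_block_in add: upd_block_def)
    with False lu pos show ?thesis by (simp add: nth_append)
  qed
qed

context col_geometry
begin

lemma line_values_definable:
  fixes a b :: "(nat \<Rightarrow> 'a) \<Rightarrow> 'a"
  assumes pos: "io < N" "ie < N" "iw < N" "N + V \<le> M1" "N + V \<le> M2" "M1 \<noteq> M2"
    and T1: "gdef d I T1"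
      "\<forall>e g. line_env d io ie iw N V e g \<longrightarrow> (T1 e \<longleftrightarrow> e M1 = line_pt d (e io) (e ie) (a g))"
    and T2: "gdef d I T2"
      "\<forall>e g. line_env d io ie iw N V e g \<longrightarrow> (T2 e \<longleftrightarrow> e M2 = line_pt d (e io) (e ie) (b g))"
    and Q: "gdef d I Q"
  shows "\<exists>T. gdef d I T \<and> (\<forall>e g. line_env d io ie iw N V e g \<longrightarrow>
    (T e \<longleftrightarrow> Q (e(M1 := line_pt d (e io) (e ie) (a g), M2 := line_pt d (e io) (e ie) (b g)))))"
proof (intro exI conjI allI impI)
  define B where "B e \<longleftrightarrow> T1 e \<and> T2 e \<and> Q e" for e
  let ?T = "\<lambda>e. \<exists>p1. length p1 = d \<and> (\<exists>p2. length p2 = d \<and> B (e(M1 := p1, M2 := p2)))"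
  have "gdef d I B" unfolding B_def by (intro gdef_conj T1(1) T2(1) Q)
  then show "gdef d I ?T" by (intro gdef_ex)
  fix e :: "nat \<Rightarrow> 'a list" and g :: "nat \<Rightarrow> 'a"
  assume env: "line_env d io ie iw N V e g"
  let ?A = "line_pt d (e io) (e ie) (a g)" and ?B = "line_pt d (e io) (e ie) (b g)"
  have T12: "T1 (e(M1 := p1, M2 := p2)) \<and> T2 (e(M1 := p1, M2 := p2)) \<longleftrightarrow> p1 = ?A \<and> p2 = ?B"
    if "length p1 = d" "length p2 = d" for p1 p2
  proof -
    let ?e = "e(M1 := p1, M2 := p2)"
    have "line_env d io ie iw N V ?e g"
      using pos that by (intro line_env_upd[OF line_env_upd[OF env]]) simp_all
    then have "T1 ?e \<longleftrightarrow> ?e M1 = line_pt d (?e io) (?e ie) (a g)"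
      and "T2 ?e \<longleftrightarrow> ?e M2 = line_pt d (?e io) (?e ie) (b g)"
      using T1(2) T2(2) by blast+
    moreover have "?e io = e io" "?e ie = e ie" "?e M1 = p1" "?e M2 = p2"
      using pos by auto
    ultimately show ?thesis by simp
  qed
  show "?T e \<longleftrightarrow> Q (e(M1 := ?A, M2 := ?B))"
  proof
    assume "?T e"
    then obtain p1 p2 where len: "length p1 = d" "length p2 = d" and B: "B (e(M1 := p1, M2 := p2))"
      by blast
    from B have "p1 = ?A \<and> p2 = ?B" unfolding B_def using T12[OF len] by blast
    with B show "Q (e(M1 := ?A, M2 := ?B))" unfolding B_def by simp
  next
    assume Q: "Q (e(M1 := ?A, M2 := ?B))"
    have "B (e(M1 := ?A, M2 := ?B))" unfolding B_def using T12[of ?A ?B] Q by simp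
    then show "?T e" by (intro exI[of _ ?A] conjI exI[of _ ?B]) simp_all
  qed
qed

lemma term_binop_definable:
  fixes a b :: "(nat \<Rightarrow> 'a) \<Rightarrow> 'a"
  assumes pos: "io < N" "ie < N" "iw < N" "N + V \<le> M"
    and T1: "\<exists>T. gdef d I T \<and>
      (\<forall>e g. line_env d io ie iw N V e g \<longrightarrow> (T e \<longleftrightarrow> e (M + 1) = line_pt d (e io) (e ie) (a g)))"
    and T2: "\<exists>T. gdef d I T \<and>
      (\<forall>e g. line_env d io ie iw N V e g \<longrightarrow> (T e \<longleftrightarrow> e (M + 2) = line_pt d (e io) (e ie) (b g)))"
    and op: "gdef d I (\<lambda>e. R (e io) (e ie) (e iw) (e (M + 1)) (e (M + 2)) (e M))"
    and op_iff: "\<And>oo e w c x y. length oo = d \<Longrightarrow> length e = d \<Longrightarrow> length w = d \<Longrightarrow> length c = d \<Longrightarrow>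
      \<not> collinear d oo e w \<Longrightarrow>
      R oo e w (line_pt d oo e x) (line_pt d oo e y) c \<longleftrightarrow> c = line_pt d oo e (f x y)"
  shows "\<exists>T. gdef d I T \<and> (\<forall>e g. line_env d io ie iw N V e g \<longrightarrow>
    (T e \<longleftrightarrow> e M = line_pt d (e io) (e ie) (f (a g) (b g))))"
proof -
  obtain T1' where T1': "gdef d I T1'"
    "\<forall>e g. line_env d io ie iw N V e g \<longrightarrow> (T1' e \<longleftrightarrow> e (M + 1) = line_pt d (e io) (e ie) (a g))"
    using T1 by blast
  obtain T2' where T2': "gdef d I T2'"
    "\<forall>e g. line_env d io ie iw N V e g \<longrightarrow> (T2' e \<longleftrightarrow> e (M + 2) = line_pt d (e io) (e ie) (b g))"
    using T2 by blast
  have "N + V \<le> M + 1" "N + V \<le> M + 2" "M + 1 \<noteq> M + 2" using pos(4) by simp_all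
  from line_values_definable[OF pos(1-3) this T1' T2' op]
  obtain T where T: "gdef d I T" "\<forall>e g. line_env d io ie iw N V e g \<longrightarrow>
      (T e \<longleftrightarrow> (\<lambda>e. R (e io) (e ie) (e iw) (e (M + 1)) (e (M + 2)) (e M))
        (e(M + 1 := line_pt d (e io) (e ie) (a g), M + 2 := line_pt d (e io) (e ie) (b g))))"
    by blast
  show ?thesis
  proof (intro exI conjI allI impI)
    fix e :: "nat \<Rightarrow> 'a list" and g :: "nat \<Rightarrow> 'a"
    assume env: "line_env d io ie iw N V e g"
    then have len: "\<forall>i. length (e i) = d" and nc: "\<not> collinear d (e io) (e ie) (e iw)"
      unfolding line_env_def by auto
    have "T e \<longleftrightarrow> R (e io) (e ie) (e iw) (line_pt d (e io) (e ie) (a g)) (line_pt d (e io) (e ie) (b g)) (e M)"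
      using T(2) env pos by simp
    also have "\<dots> \<longleftrightarrow> e M = line_pt d (e io) (e ie) (f (a g) (b g))"
      using op_iff[OF len[rule_format] len[rule_format] len[rule_format] len[rule_format] nc] .
    finally show "T e \<longleftrightarrow> e M = line_pt d (e io) (e ie) (f (a g) (b g))" .
  qed (rule T(1))
qed

lemma term_binrel_definable:
  fixes a b :: "(nat \<Rightarrow> 'a) \<Rightarrow> 'a"
  assumes pos: "io < N" "ie < N" "iw < N"
    and T1: "\<exists>T. gdef d I T \<and>
      (\<forall>e g. line_env d io ie iw N V e g \<longrightarrow> (T e \<longleftrightarrow> e (N + V) = line_pt d (e io) (e ie) (a g)))"
    and T2: "\<exists>T. gdef d I T \<and>
      (\<forall>e g. line_env d io ie iw N V e g \<longrightarrow> (T e \<longleftrightarrow> e (N + V + 1) = line_pt d (e io) (e ie) (b g)))"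
    and rel: "gdef d I (\<lambda>e. R (e io) (e ie) (e iw) (e (N + V)) (e (N + V + 1)))"
    and rel_iff: "\<And>oo e w x y. length oo = d \<Longrightarrow> length e = d \<Longrightarrow> length w = d \<Longrightarrow>
      \<not> collinear d oo e w \<Longrightarrow> R oo e w (line_pt d oo e x) (line_pt d oo e y) \<longleftrightarrow> P x y"
  shows "\<exists>Q. gdef d I Q \<and> (\<forall>e g. line_env d io ie iw N V e g \<longrightarrow> (Q e \<longleftrightarrow> P (a g) (b g)))"
proof -
  obtain T1' where T1': "gdef d I T1'" "\<forall>e g. line_env d io ie iw N V e g \<longrightarrow>
      (T1' e \<longleftrightarrow> e (N + V) = line_pt d (e io) (e ie) (a g))"
    using T1 by blast
  obtain T2' where T2': "gdef d I T2'" "\<forall>e g. line_env d io ie iw N V e g \<longrightarrow>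
      (T2' e \<longleftrightarrow> e (N + V + 1) = line_pt d (e io) (e ie) (b g))"
    using T2 by blast
  have "N + V \<le> N + V" "N + V \<le> N + V + 1" "N + V \<noteq> N + V + 1" by simp_all
  from line_values_definable[OF pos this T1' T2' rel]
  obtain Q where Q: "gdef d I Q" "\<forall>e g. line_env d io ie iw N V e g \<longrightarrow>
      (Q e \<longleftrightarrow> (\<lambda>e. R (e io) (e ie) (e iw) (e (N + V)) (e (N + V + 1)))
        (e(N + V := line_pt d (e io) (e ie) (a g), N + V + 1 := line_pt d (e io) (e ie) (b g))))"
    by blast
  show ?thesis
  proof (intro exI conjI allI impI)
    fix e :: "nat \<Rightarrow> 'a list" and g :: "nat \<Rightarrow> 'a"
    assume env: "line_env d io ie iw N V e g"
    then have len: "\<forall>i. length (e i) = d" and nc: "\<not> collinear d (e io) (e ie) (e iw)"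
      unfolding line_env_def by auto
    have "Q e \<longleftrightarrow> R (e io) (e ie) (e iw) (line_pt d (e io) (e ie) (a g)) (line_pt d (e io) (e ie) (b g))"
      using Q(2) env pos by simp
    also have "\<dots> \<longleftrightarrow> P (a g) (b g)"
      using rel_iff[OF len[rule_format] len[rule_format] len[rule_format] nc] .
    finally show "Q e \<longleftrightarrow> P (a g) (b g)" .
  qed (rule Q(1))
qed

lemma line_ex_definable:
  assumes pos: "io < N" "ie < N" "iw < N" and x: "x < V"
    and Q: "gdef d I Q" "\<forall>e g. line_env d io ie iw N V e g \<longrightarrow> (Q e \<longleftrightarrow> P g)"
  shows "\<exists>Q'. gdef d I Q' \<and> (\<forall>e g. line_env d io ie iw N V e g \<longrightarrow> (Q' e \<longleftrightarrow> (\<exists>a. P (g(x := a)))))"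
proof (intro exI conjI allI impI)
  let ?Q = "\<lambda>e. \<exists>p. length p = d \<and> (\<lambda>e. collinear d (e io) (e (N + x)) (e ie) \<and> Q e) (e(N + x := p))"
  show "gdef d I ?Q" by (intro gdef_ex gdef_conj gdef_collinear Q(1))
  fix e :: "nat \<Rightarrow> 'a list" and g :: "nat \<Rightarrow> 'a"
  assume env: "line_env d io ie iw N V e g"
  then have len: "\<forall>i. length (e i) = d" and nc: "\<not> collinear d (e io) (e ie) (e iw)"
    unfolding line_env_def by auto
  then have oe: "e io \<noteq> e ie" using noncollinear_neq12 by blast
  have env': "line_env d io ie iw N V (e(N + x := line_pt d (e io) (e ie) a)) (g(x := a))" for a
    using env pos x unfolding line_env_def by auto
  have "?Q e \<longleftrightarrow> (\<exists>p. length p = d \<and> collinear d (e io) p (e ie) \<and> Q (e(N + x := p)))"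
    using pos by simp
  also have "\<dots> \<longleftrightarrow> (\<exists>a. Q (e(N + x := line_pt d (e io) (e ie) a)))"
    using collinear_iff_line_pt[OF _ _ _ oe] len by (metis length_line_pt)
  also have "\<dots> \<longleftrightarrow> (\<exists>a. P (g(x := a)))"
    using Q(2) env' by blast
  finally show "?Q e \<longleftrightarrow> (\<exists>a. P (g(x := a)))" .
qed

lemma term_definable:
  assumes pos: "io < N" "ie < N" "iw < N"
  shows "tvars t \<le> V \<Longrightarrow> N + V \<le> M \<Longrightarrow> \<exists>T. gdef d I T \<and>
    (\<forall>e g. line_env d io ie iw N V e g \<longrightarrow> (T e \<longleftrightarrow> e M = line_pt d (e io) (e ie) (feval g t)))"
proof (induction t arbitrary: M)
  case (FVar i)
  then show ?case
    by (intro exI[of _ "\<lambda>e. e M = e (N + i)"]) (auto simp: gdef_eq line_env_def)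
next
  case FZero
  show ?case
    by (intro exI[of _ "\<lambda>e. e M = e io"]) (auto simp: gdef_eq line_env_def line_pt_0)
next
  case FOne
  show ?case
    by (intro exI[of _ "\<lambda>e. e M = e ie"]) (auto simp: gdef_eq line_env_def line_pt_1)
next
  case (FAdd s t)
  have "\<exists>T. gdef d I T \<and> (\<forall>e g. line_env d io ie iw N V e g \<longrightarrow>
      (T e \<longleftrightarrow> e M = line_pt d (e io) (e ie) (feval g s + feval g t)))"
  proof (rule term_binop_definable[where R = "add_rel d" and f = "(+)", OF pos])
    show "gdef d I (\<lambda>e. add_rel d (e io) (e ie) (e iw) (e (M + 1)) (e (M + 2)) (e M))"
      by (rule gdef_add_rel)
    show "add_rel d oo e w (line_pt d oo e x) (line_pt d oo e y) c \<longleftrightarrow> c = line_pt d oo e (x + y)"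
      if "length oo = d" "length e = d" "length w = d" "length c = d" "\<not> collinear d oo e w"
      for oo e w c x y
      by (rule add_rel_iff[OF that])
  qed (use FAdd in auto)
  then show ?case by simp
next
  case (FMul s t)
  have "\<exists>T. gdef d I T \<and> (\<forall>e g. line_env d io ie iw N V e g \<longrightarrow>
      (T e \<longleftrightarrow> e M = line_pt d (e io) (e ie) (feval g s * feval g t)))"
  proof (rule term_binop_definable[where R = "mul_rel d" and f = "(*)", OF pos])
    show "gdef d I (\<lambda>e. mul_rel d (e io) (e ie) (e iw) (e (M + 1)) (e (M + 2)) (e M))"
      by (rule gdef_mul_rel)
    show "mul_rel d oo e w (line_pt d oo e x) (line_pt d oo e y) c \<longleftrightarrow> c = line_pt d oo e (x * y)"
      if "length oo = d" "length e = d" "length w = d" "length c = d" "\<not> collinear d oo e w"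
      for oo e w c x y
      by (rule mul_rel_iff[OF that])
  qed (use FMul in auto)
  then show ?case by simp
qed

end

locale field_geometry = col_geometry d I for d :: nat and I :: "'s \<Rightarrow> 'a::field list list \<Rightarrow> bool" +
  fixes le :: "('a \<Rightarrow> 'a \<Rightarrow> bool) option"
  assumes order_between: "\<And>r. le = Some r \<Longrightarrow> is_field_order r \<and> gdef d I (\<lambda>e. between r d (e 0) (e 1) (e 2))"
begin

lemma formula_definable:
  assumes pos: "io < N" "ie < N" "iw < N"
  shows "fvars \<phi> \<le> V \<Longrightarrow>
    \<exists>Q. gdef d I Q \<and> (\<forall>e g. line_env d io ie iw N V e g \<longrightarrow> (Q e \<longleftrightarrow> fsat le g \<phi>))"
proof (induction \<phi>)
  case (FEq s t)
  have "\<exists>Q. gdef d I Q \<and> (\<forall>e g. line_env d io ie iw N V e g \<longrightarrow> (Q e \<longleftrightarrow> feval g s = feval g t))"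
  proof (rule term_binrel_definable[where R = "\<lambda>_ _ _ p q. p = q" and P = "(=)", OF pos])
    show "gdef d I (\<lambda>e. e (N + V) = e (N + V + 1))" by (rule gdef_eq)
    show "line_pt d oo e x = line_pt d oo e y \<longleftrightarrow> x = y"
      if "length oo = d" "length e = d" "\<not> collinear d oo e w" for oo e w x y
      using line_pt_eq_iff noncollinear_neq12 that by blast
  qed (use FEq term_definable[OF pos] in auto)
  then show ?case by simp
next
  case (FLe s t)
  show ?case
  proof (cases le)
    case None
    then show ?thesis by (intro exI[of _ "\<lambda>e. False"]) (simp add: gdef_const)
  next
    case (Some r)
    with order_between have ord: "is_field_order r"
      and between: "gdef d I (\<lambda>e. between r d (e 0) (e 1) (e 2))" by auto
    have "\<exists>Q. gdef d I Q \<and> (\<forall>e g. line_env d io ie iw N V e g \<longrightarrow> (Q e \<longleftrightarrow> r (feval g s) (feval g t)))"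
    proof (rule term_binrel_definable[where R = "le_rel r d" and P = r, OF pos])
      show "gdef d I (\<lambda>e. le_rel r d (e io) (e ie) (e iw) (e (N + V)) (e (N + V + 1)))"
        by (rule gdef_le_rel[OF between])
      show "le_rel r d oo e w (line_pt d oo e x) (line_pt d oo e y) \<longleftrightarrow> r x y"
        if "length oo = d" "length e = d" "length w = d" "\<not> collinear d oo e w" for oo e w x y
        by (rule le_rel_iff[OF ord that])
    qed (use FLe term_definable[OF pos] in auto)
    with Some show ?thesis by simp
  qed
next
  case (FNot \<phi>)
  then obtain Q where "gdef d I Q" "\<forall>e g. line_env d io ie iw N V e g \<longrightarrow> (Q e \<longleftrightarrow> fsat le g \<phi>)"
    by auto
  then show ?case by (intro exI[of _ "\<lambda>e. \<not> Q e"]) (auto intro: gdef_not)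
next
  case (FAnd \<phi> \<psi>)
  then obtain Q1 Q2 where "gdef d I Q1" "\<forall>e g. line_env d io ie iw N V e g \<longrightarrow> (Q1 e \<longleftrightarrow> fsat le g \<phi>)"
    "gdef d I Q2" "\<forall>e g. line_env d io ie iw N V e g \<longrightarrow> (Q2 e \<longleftrightarrow> fsat le g \<psi>)"
    by auto
  then show ?case by (intro exI[of _ "\<lambda>e. Q1 e \<and> Q2 e"]) (auto intro: gdef_conj)
next
  case (FEx x \<phi>)
  then obtain Q where Q: "gdef d I Q" "\<forall>e g. line_env d io ie iw N V e g \<longrightarrow> (Q e \<longleftrightarrow> fsat le g \<phi>)"
    by auto
  from FEx.prems have "x < V" by simp
  from line_ex_definable[OF pos this Q] show ?case by simp
qed

text \<open>The formula defining the relation may use more than \<open>k\<close> variables; they get further slots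
  on the line.\<close>

lemma gdef_line_rel:
  assumes "fdefinable_rel le k S"
  shows "gdef d I (\<lambda>e. \<not> collinear d (e 0) (e 1) (e 2) \<and>
    (\<exists>u. u \<in> S \<and> map e [3..<3 + k] = map (line_pt d (e 0) (e 1)) u))"
proof -
  obtain \<phi> where \<phi>: "\<And>g. map g [0..<k] \<in> S \<longleftrightarrow> fsat le g \<phi>"
    using assms unfolding fdefinable_rel_def by blast
  define V where "V = max (fvars \<phi>) k"
  obtain Q where Q: "gdef d I Q" "\<forall>e g. line_env d 0 1 2 3 V e g \<longrightarrow> (Q e \<longleftrightarrow> fsat le g \<phi>)"
    using formula_definable[of 0 3 1 2 \<phi> V] unfolding V_def by auto
  define G where "G e \<longleftrightarrow> \<not> collinear d (e 0) (e 1) (e 2) \<and>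
    (\<forall>p\<in>set (map e [3..<3 + k]). collinear d (e 0) p (e 1)) \<and>
    (\<exists>ts. length ts = V - k \<and> (\<forall>p\<in>set ts. length p = d) \<and>
      (\<forall>p\<in>set ts. collinear d (e 0) p (e 1)) \<and> Q (upd_block e (3 + k) ts))" for e
  have "gdef d I (\<lambda>e. \<exists>ts. length ts = V - k \<and> (\<forall>p\<in>set ts. length p = d) \<and>
      (\<lambda>e. (\<forall>j<V - k. collinear d (e 0) (e (3 + k + j)) (e 1)) \<and> Q e) (upd_block e (3 + k) ts))"
    by (intro gdef_ex_block gdef_conj gdef_ball gdef_collinear Q(1))
  then have "gdef d I (\<lambda>e. \<exists>ts. length ts = V - k \<and> (\<forall>p\<in>set ts. length p = d) \<and>
      (\<forall>p\<in>set ts. collinear d (e 0) p (e 1)) \<and> Q (upd_block e (3 + k) ts))"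
    by (rule gdef_cong) (auto simp: all_set_conv_all_nth)
  then have "gdef d I G"
    unfolding G_def by (intro gdef_conj gdef_not gdef_collinear gdef_on_line_block)
  then show ?thesis
  proof (rule gdef_cong)
    fix e :: "nat \<Rightarrow> 'a list"
    assume len: "\<forall>i. length (e i) = d"
    let ?lp = "line_pt d (e 0) (e 1)"
    show "G e \<longleftrightarrow> \<not> collinear d (e 0) (e 1) (e 2) \<and> (\<exists>u. u \<in> S \<and> map e [3..<3 + k] = map ?lp u)"
    proof (cases "collinear d (e 0) (e 1) (e 2)")
      case False
      have Q_iff: "Q (upd_block e (3 + k) (map ?lp u')) \<longleftrightarrow> u \<in> S"
        if u: "map e [3..<3 + k] = map ?lp u" and u': "length u' = V - k" for u u'
      proof -
        have "length u = k" using arg_cong[OF u, of length] by simp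
        then have "map (\<lambda>i. (u @ u') ! i) [0..<k] = u" by (simp add: list_eq_iff_nth_eq nth_append)
        moreover have "Q (upd_block e (3 + k) (map ?lp u')) \<longleftrightarrow> fsat le (\<lambda>i. (u @ u') ! i) \<phi>"
          using Q(2) line_env_upd_block[OF len False _ _ _ u u'] by simp
        ultimately show ?thesis using \<phi> by metis
      qed
      have oe: "e 0 \<noteq> e 1" using False noncollinear_neq12 len by blast
      have "(\<forall>p\<in>set (map e [3..<3 + k]). collinear d (e 0) p (e 1)) \<longleftrightarrow> (\<exists>u. map e [3..<3 + k] = map ?lp u)"
        by (rule all_collinear_iff_map_line_pt[OF len[rule_format] len[rule_format] oe]) (use len in auto)
      moreover have "(\<exists>ts. length ts = V - k \<and> (\<forall>p\<in>set ts. length p = d) \<and>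
          (\<forall>p\<in>set ts. collinear d (e 0) p (e 1)) \<and> Q (upd_block e (3 + k) ts)) \<longleftrightarrow>
        (\<exists>u'. length u' = V - k \<and> Q (upd_block e (3 + k) (map ?lp u')))"
        using ex_map_line_pt_iff[OF len[rule_format] len[rule_format] oe,
            of "V - k" "\<lambda>ts. Q (upd_block e (3 + k) ts)"] by simp
      ultimately have "G e \<longleftrightarrow> (\<exists>u. map e [3..<3 + k] = map ?lp u) \<and>
          (\<exists>u'. length u' = V - k \<and> Q (upd_block e (3 + k) (map ?lp u')))"
        unfolding G_def using False by simp
      also have "\<dots> \<longleftrightarrow> (\<exists>u. u \<in> S \<and> map e [3..<3 + k] = map ?lp u)"
        using Q_iff by (metis length_replicate)
      finally show ?thesis using False by simp
    qed (simp add: G_def)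
  qed
qed

end

section \<open>Coordinates with respect to a frame\<close>

definition chunk :: "nat \<Rightarrow> 'b list \<Rightarrow> nat \<Rightarrow> 'b list" where
  "chunk d u i = take d (drop (i * d) u)"

lemma chunk_map: "chunk d (map f u) i = map f (chunk d u i)"
  by (simp add: chunk_def take_map drop_map)

lemma chunk_map_upt: "chunk d (map f [N..<N + d * m]) i = map f [N + i * d..<N + i * d + d]" if "i < m"
proof -
  have "i * d + d \<le> d * m"
    using that by (metis Suc_leI mult.commute mult_Suc_right add.commute mult_le_mono2)
  then show ?thesis by (simp add: chunk_def take_map drop_map take_upt drop_upt add.assoc)
qed

lemma chunk_concat: "\<forall>x\<in>set t. length x = d \<Longrightarrow> i < length t \<Longrightarrow> chunk d (concat t) i = t ! i"
proof (induction t arbitrary: i)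
  case (Cons x t)
  show ?case
  proof (cases i)
    case (Suc i')
    with Cons.prems have "drop (i * d) (concat (x # t)) = drop (i' * d) (concat t)"
      by (simp add: add.commute)
    with Cons Suc show ?thesis by (simp add: chunk_def)
  qed (use Cons in \<open>simp add: chunk_def\<close>)
qed simp

lemma length_concat_const: "\<forall>x\<in>set t. length x = d \<Longrightarrow> length (concat t) = d * length t"
  by (induction t) auto

lemma concat_eq_concat_iff:
  assumes "\<forall>x\<in>set t. length x = d" "\<forall>x\<in>set t'. length x = d" "length t = length t'"
  shows "concat t = concat t' \<longleftrightarrow> t = t'"
  using assms chunk_concat[of t d] chunk_concat[of t' d] by (metis nth_equalityI)

lemma concat_in_flatten_iff:
  assumes "R \<subseteq> tuples d n" "ts \<in> tuples d n"
  shows "concat ts \<in> flatten R \<longleftrightarrow> ts \<in> R"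
proof -
  have "concat ts = concat t \<longleftrightarrow> ts = t" if "t \<in> R" for t
    using that assms concat_eq_concat_iff[of ts d t] by (auto simp: tuples_def pts_def subset_iff)
  then show ?thesis unfolding flatten_def by auto
qed

text \<open>The coordinates of \<open>x\<close> are represented by the points \<open>ts\<close> of the axis \<open>oo (es!0)\<close>; they are
  transferred to the axes \<open>oo (es!j)\<close> (giving \<open>ys\<close>) and added up by parallelograms (giving the partial
  sums \<open>ps\<close>).\<close>

definition has_coords :: "nat \<Rightarrow> 'a::field list \<Rightarrow> 'a list list \<Rightarrow> 'a list \<Rightarrow> 'a list list \<Rightarrow> bool" where
  "has_coords d oo es x ts \<longleftrightarrow> (\<exists>ys. length ys = d \<and> (\<forall>y\<in>set ys. length y = d) \<and>
     (\<exists>ps. length ps = d \<and> (\<forall>p\<in>set ps. length p = d) \<and> ys!0 = ts!0 \<and>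
       (\<forall>j. 1 \<le> j \<and> j < d \<longrightarrow> transfer d oo (es!0) (es!j) (ts!j) (ys!j)) \<and> ps!0 = ys!0 \<and>
       (\<forall>j. 1 \<le> j \<and> j < d \<longrightarrow> parallelogram d oo (ps!(j - 1)) (ys!j) (ps!j)) \<and> x = ps!(d - 1)))"

definition frame_axes :: "nat \<Rightarrow> 'a::field list \<Rightarrow> 'a list list \<Rightarrow> bool" where
  "frame_axes d oo es \<longleftrightarrow> (\<forall>j. 1 \<le> j \<and> j < d \<longrightarrow> \<not> collinear d oo (es!0) (es!j))"

definition frame_map_upto :: "nat \<Rightarrow> 'a::field list \<Rightarrow> 'a list list \<Rightarrow> 'a list \<Rightarrow> nat \<Rightarrow> 'a list" where
  "frame_map_upto d oo es u k = map (\<lambda>i. oo!i + (\<Sum>j<k. u!j * (es!j!i - oo!i))) [0..<d]"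

definition frame_map :: "nat \<Rightarrow> 'a::field list \<Rightarrow> 'a list list \<Rightarrow> 'a list \<Rightarrow> 'a list" where
  "frame_map d oo es u = frame_map_upto d oo es u d"

lemma length_frame_map_upto [simp]: "length (frame_map_upto d oo es u k) = d"
  by (simp add: frame_map_upto_def)

lemma length_frame_map [simp]: "length (frame_map d oo es u) = d"
  by (simp add: frame_map_def)

lemma has_coords_imp_eq_frame_map:
  assumes d: "1 \<le> d" and len: "length oo = d" "length es = d" "\<forall>e\<in>set es. length e = d"
    "length u = d" "length x = d"
    and axes: "frame_axes d oo es"
    and C: "has_coords d oo es x (map (line_pt d oo (es!0)) u)"
  shows "x = frame_map d oo es u"
proof -
  obtain ys ps where ys: "length ys = d" "length ps = d" "\<forall>y\<in>set ys. length y = d"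
    "\<forall>p\<in>set ps. length p = d" "ys!0 = map (line_pt d oo (es!0)) u ! 0"
    "\<forall>j. 1 \<le> j \<and> j < d \<longrightarrow> transfer d oo (es!0) (es!j) (map (line_pt d oo (es!0)) u ! j) (ys!j)"
    "ps!0 = ys!0" "\<forall>j. 1 \<le> j \<and> j < d \<longrightarrow> parallelogram d oo (ps!(j - 1)) (ys!j) (ps!j)"
    "x = ps!(d - 1)"
    using C unfolding has_coords_def by blast
  have les: "length (es!j) = d" if "j < d" for j using len(2,3) that by auto
  have ys_eq: "ys!j = line_pt d oo (es!j) (u!j)" if "j < d" for j
  proof (cases "j = 0")
    case True
    with ys(5) len d show ?thesis by simp
  next
    case False
    with that have j: "1 \<le> j" "j < d" by auto
    with ys(6) len have tr: "transfer d oo (es!0) (es!j) (line_pt d oo (es!0) (u!j)) (ys!j)" by simp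
    have "length (ys!j) = d" using ys(1,3) j by simp
    moreover have "\<not> collinear d oo (es!0) (es!j)" using axes j unfolding frame_axes_def by blast
    ultimately show ?thesis
      using transfer_imp_eq[OF len(1) les les _ _ tr] j d by simp
  qed
  have "ps!j = frame_map_upto d oo es u (Suc j)" if "j < d" for j
    using that
  proof (induction j)
    case 0
    with ys(7) ys_eq[of 0] len show ?case by (simp add: frame_map_upto_def list_eq_iff_nth_eq)
  next
    case (Suc j)
    have "parallelogram d oo (ps!j) (ys!Suc j) (ps!Suc j)" using ys(8) Suc.prems by fastforce
    then have "ps!Suc j = vsum d oo (ps!j) (ys!Suc j)"
      using parallelogram_imp_eq_vsum[OF len(1)] ys(1-4) Suc.prems by (metis Suc_lessD nth_mem)
    also have "\<dots> = frame_map_upto d oo es u (Suc (Suc j))"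
      using Suc ys_eq[OF Suc.prems] len by (simp add: frame_map_upto_def list_eq_iff_nth_eq algebra_simps)
    finally show ?case .
  qed
  with ys(9) d show ?thesis unfolding frame_map_def by (metis One_nat_def Suc_pred diff_less zero_less_one less_le_trans)
qed

definition unit_vec :: "nat \<Rightarrow> nat \<Rightarrow> 'a::field list" where
  "unit_vec d j = map (\<lambda>i. if i = j then 1 else 0) [0..<d]"

definition std_frame :: "nat \<Rightarrow> 'a::field list list" where
  "std_frame d = map (unit_vec d) [0..<d]"

lemma length_unit_vec [simp]: "length (unit_vec d j) = d"
  by (simp add: unit_vec_def)

lemma nth_unit_vec [simp]: "i < d \<Longrightarrow> unit_vec d j ! i = (if i = j then 1 else 0)"
  by (simp add: unit_vec_def)

lemma length_std_frame [simp]: "length (std_frame d) = d"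
  by (simp add: std_frame_def)

lemma nth_std_frame [simp]: "j < d \<Longrightarrow> std_frame d ! j = unit_vec d j"
  by (simp add: std_frame_def)

lemma length_std_frame_elems: "\<forall>e\<in>set (std_frame d). length (e :: 'a::field list) = d"
  by (simp add: std_frame_def)

lemma frame_map_std: "length u = d \<Longrightarrow> frame_map d (replicate d 0) (std_frame d) u = (u::'a::field list)"
proof -
  assume "length u = d"
  moreover have "(\<Sum>j<d. u!j * (if i = j then 1 else 0)) = u!i" if "i < d" for i :: nat
    using that by (simp add: if_distrib[of "(*) _"] cong: if_cong)
  ultimately show ?thesis
    by (simp add: frame_map_def frame_map_upto_def list_eq_iff_nth_eq)
qed

lemma std_frame_axes: "frame_axes d (replicate d 0) (std_frame d :: 'a::field list list)"
  unfolding frame_axes_def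
proof (intro allI impI notI)
  fix j
  assume assms: "1 \<le> j \<and> j < d"
  assume "collinear d (replicate d 0) (std_frame d ! 0) (std_frame d ! j :: 'a list)"
  then consider l where "\<forall>i<d. (std_frame d ! 0 :: 'a list) ! i = l * ((std_frame d ! j) ! i)"
    | "\<forall>i<d. (std_frame d ! j :: 'a list) ! i = 0"
    unfolding collinear_def using assms by auto
  then show False
  proof cases
    case 1
    then have "(std_frame d ! 0 :: 'a list) ! 0 = l * ((std_frame d ! j) ! 0)" using assms by auto
    with assms show False by simp
  next
    case 2
    then have "(std_frame d ! j :: 'a list) ! j = 0" using assms by auto
    with assms show False by simp
  qed
qed

lemma noncollinear_origin_coordinate:
  assumes "length p = d" "j < d" "p ! j = 0" "y ! j \<noteq> 0" "p \<noteq> replicate d 0"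
  shows "\<not> collinear d (replicate d 0) p y"
proof
  assume "collinear d (replicate d 0) p y"
  then consider l where "\<forall>i<d. p!i = l * y!i" | "\<forall>i<d. y!i = 0"
    unfolding collinear_def by auto
  then show False
  proof cases
    case 1
    with assms(2-4) have "l = 0" by auto
    with 1 assms(1,5) show False by (simp add: list_eq_iff_nth_eq)
  qed (use assms(2,4) in simp)
qed

lemma has_coords_std:
  assumes d: "1 \<le> d" and lu: "length u = d"
  shows "has_coords d (replicate d 0) (std_frame d) (u::'a::field list)
    (map (line_pt d (replicate d 0) (std_frame d ! 0)) u)"
proof -
  let ?o = "replicate d (0::'a)"
  define ys where "ys = map (\<lambda>j. line_pt d ?o (std_frame d ! j) (u!j)) [0..<d]"
  define ps where "ps = map (\<lambda>j. map (\<lambda>i. if i \<le> j then u!i else 0) [0..<d]) [0..<d]"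
  have tr: "transfer d ?o (std_frame d ! 0) (std_frame d ! j) (map (line_pt d ?o (std_frame d ! 0)) u ! j) (ys!j)"
    if "1 \<le> j" "j < d" for j
  proof -
    have "\<not> collinear d ?o (std_frame d ! 0) (std_frame d ! j)"
      using std_frame_axes that unfolding frame_axes_def by blast
    then show ?thesis
      using transfer_line_pt[of ?o d "std_frame d ! 0" "std_frame d ! j"] that lu d
      unfolding ys_def by simp
  qed
  have pl: "parallelogram d ?o (ps!(j - 1)) (ys!j) (ps!j)" if j: "1 \<le> j" "j < d" for j
  proof -
    have "ps!j = vsum d ?o (ps!(j - 1)) (ys!j)"
      unfolding ps_def ys_def using j by (auto simp: list_eq_iff_nth_eq)
    moreover have "ps!(j - 1) = ?o \<or> ys!j = ?o \<or> \<not> collinear d ?o (ps!(j - 1)) (ys!j)"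
    proof (cases "u!j = 0")
      case True
      then have "ys!j = ?o" unfolding ys_def using j by (simp add: list_eq_iff_nth_eq)
      then show ?thesis by simp
    next
      case False
      moreover have "(ps!(j - 1))!j = 0" "(ys!j)!j = u!j" "length (ps!(j - 1)) = d" "length (ys!j) = d"
        unfolding ps_def ys_def using j by auto
      ultimately show ?thesis using noncollinear_origin_coordinate[of "ps!(j - 1)" d j "ys!j"] j by auto
    qed
    moreover have "length (ps!(j - 1)) = d" "length (ys!j) = d" unfolding ps_def ys_def using j by auto
    ultimately show ?thesis using parallelogram_vsum[of ?o d] by simp
  qed
  have "ys!0 = map (line_pt d ?o (std_frame d ! 0)) u ! 0" "ps!0 = ys!0" "u = ps!(d - 1)"
    unfolding ys_def ps_def using d lu by (auto simp: list_eq_iff_nth_eq)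
  moreover have "length ys = d" "\<forall>y\<in>set ys. length y = d" "length ps = d" "\<forall>p\<in>set ps. length p = d"
    by (auto simp: ys_def ps_def)
  ultimately show ?thesis unfolding has_coords_def using tr pl by blast
qed

lemma has_coords_std_iff:
  assumes "1 \<le> d" "length x = d" "length u = d"
  shows "has_coords d (replicate d 0) (std_frame d) x (map (line_pt d (replicate d 0) (std_frame d ! 0)) u)
    \<longleftrightarrow> x = (u::'a::field list)"
proof
  assume "has_coords d (replicate d 0) (std_frame d) x (map (line_pt d (replicate d 0) (std_frame d ! 0)) u)"
  then have "x = frame_map d (replicate d 0) (std_frame d) u"
    by (intro has_coords_imp_eq_frame_map[OF assms(1) _ _ length_std_frame_elems assms(3,2)] std_frame_axes)
      simp_all
  with frame_map_std[OF assms(3)] show "x = u" by simp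
qed (use has_coords_std[OF assms(1,3)] in simp)

definition coords_total :: "nat \<Rightarrow> 'a::field list \<Rightarrow> 'a list list \<Rightarrow> bool" where
  "coords_total d oo es \<longleftrightarrow>
     (\<forall>u. length u = d \<longrightarrow> (\<exists>x. length x = d \<and> has_coords d oo es x (map (line_pt d oo (es!0)) u)))"

definition coords_onto :: "nat \<Rightarrow> 'a::field list \<Rightarrow> 'a list list \<Rightarrow> bool" where
  "coords_onto d oo es \<longleftrightarrow>
     (\<forall>x. length x = d \<longrightarrow> (\<exists>u. length u = d \<and> has_coords d oo es x (map (line_pt d oo (es!0)) u)))"

definition coords_unique :: "nat \<Rightarrow> 'a::field list \<Rightarrow> 'a list list \<Rightarrow> bool" where
  "coords_unique d oo es \<longleftrightarrow> (\<forall>x u u'. length x = d \<longrightarrow> length u = d \<longrightarrow> length u' = d \<longrightarrow>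
     has_coords d oo es x (map (line_pt d oo (es!0)) u) \<longrightarrow>
     has_coords d oo es x (map (line_pt d oo (es!0)) u') \<longrightarrow> u = u')"

definition coord_frame :: "nat \<Rightarrow> 'a::field list \<Rightarrow> 'a list list \<Rightarrow> bool" where
  "coord_frame d oo es \<longleftrightarrow>
     frame_axes d oo es \<and> coords_total d oo es \<and> coords_onto d oo es \<and> coords_unique d oo es"

lemmas coord_frame_defs = coord_frame_def coords_total_def coords_onto_def coords_unique_def

lemma coords_total_iff:
  assumes "length oo = d" "length (es!0) = d" "oo \<noteq> es!0"
  shows "coords_total d oo es \<longleftrightarrow> (\<forall>ts. length ts = d \<and> (\<forall>p\<in>set ts. length p = d) \<longrightarrow>
    (\<forall>p\<in>set ts. collinear d oo p (es!0)) \<longrightarrow> (\<exists>x. length x = d \<and> has_coords d oo es x ts))"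
  unfolding coords_total_def
  by (rule all_map_line_pt_iff[OF assms, of d "\<lambda>ts. \<exists>x. length x = d \<and> has_coords d oo es x ts"])

lemma coords_onto_iff:
  assumes "length oo = d" "length (es!0) = d" "oo \<noteq> es!0"
  shows "coords_onto d oo es \<longleftrightarrow> (\<forall>x. length x = d \<longrightarrow> (\<exists>ts. length ts = d \<and> (\<forall>p\<in>set ts. length p = d) \<and>
    (\<forall>p\<in>set ts. collinear d oo p (es!0)) \<and> has_coords d oo es x ts))"
  unfolding coords_onto_def using ex_map_line_pt_iff[OF assms, of d "has_coords d oo es _"] by blast

lemma coords_unique_iff:
  assumes "length oo = d" "length (es!0) = d" "oo \<noteq> es!0"
  shows "coords_unique d oo es \<longleftrightarrow> (\<forall>x. length x = d \<longrightarrow>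
    (\<forall>ts. length ts = d \<and> (\<forall>p\<in>set ts. length p = d) \<longrightarrow> (\<forall>p\<in>set ts. collinear d oo p (es!0)) \<longrightarrow>
    (\<forall>ts'. length ts' = d \<and> (\<forall>p\<in>set ts'. length p = d) \<longrightarrow> (\<forall>p\<in>set ts'. collinear d oo p (es!0)) \<longrightarrow>
      has_coords d oo es x ts \<longrightarrow> has_coords d oo es x ts' \<longrightarrow> ts = ts')))"
proof -
  let ?H = "has_coords d oo es" and ?lp = "line_pt d oo (es!0)"
  note all_iff = all_map_line_pt_iff[OF assms]
  have inner: "(\<forall>u'. length u' = d \<longrightarrow> ?H x ts \<longrightarrow> ?H x (map ?lp u') \<longrightarrow> ts = map ?lp u') \<longleftrightarrow>
    (\<forall>ts'. length ts' = d \<and> (\<forall>p\<in>set ts'. length p = d) \<longrightarrow> (\<forall>p\<in>set ts'. collinear d oo p (es!0)) \<longrightarrow>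
      ?H x ts \<longrightarrow> ?H x ts' \<longrightarrow> ts = ts')" for x ts
    by (rule all_iff[of d "\<lambda>ts'. ?H x ts \<longrightarrow> ?H x ts' \<longrightarrow> ts = ts'"])
  have outer: "(\<forall>u. length u = d \<longrightarrow> (\<forall>u'. length u' = d \<longrightarrow>
      ?H x (map ?lp u) \<longrightarrow> ?H x (map ?lp u') \<longrightarrow> map ?lp u = map ?lp u')) \<longleftrightarrow>
    (\<forall>ts. length ts = d \<and> (\<forall>p\<in>set ts. length p = d) \<longrightarrow> (\<forall>p\<in>set ts. collinear d oo p (es!0)) \<longrightarrow>
      (\<forall>u'. length u' = d \<longrightarrow> ?H x ts \<longrightarrow> ?H x (map ?lp u') \<longrightarrow> ts = map ?lp u'))" for x
    by (rule all_iff[of d "\<lambda>ts. \<forall>u'. length u' = d \<longrightarrow> ?H x ts \<longrightarrow> ?H x (map ?lp u') \<longrightarrow> ts = map ?lp u'"])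
  have "inj ?lp" using inj_line_pt assms by blast
  then have "coords_unique d oo es \<longleftrightarrow> (\<forall>x. length x = d \<longrightarrow> (\<forall>u. length u = d \<longrightarrow> (\<forall>u'. length u' = d \<longrightarrow>
      ?H x (map ?lp u) \<longrightarrow> ?H x (map ?lp u') \<longrightarrow> map ?lp u = map ?lp u')))"
    unfolding coords_unique_def by auto
  also have "\<dots> \<longleftrightarrow> (\<forall>x. length x = d \<longrightarrow>
    (\<forall>ts. length ts = d \<and> (\<forall>p\<in>set ts. length p = d) \<longrightarrow> (\<forall>p\<in>set ts. collinear d oo p (es!0)) \<longrightarrow>
      (\<forall>u'. length u' = d \<longrightarrow> ?H x ts \<longrightarrow> ?H x (map ?lp u') \<longrightarrow> ts = map ?lp u')))"
    by (simp only: outer)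
  also have "\<dots> \<longleftrightarrow> (\<forall>x. length x = d \<longrightarrow>
    (\<forall>ts. length ts = d \<and> (\<forall>p\<in>set ts. length p = d) \<longrightarrow> (\<forall>p\<in>set ts. collinear d oo p (es!0)) \<longrightarrow>
    (\<forall>ts'. length ts' = d \<and> (\<forall>p\<in>set ts'. length p = d) \<longrightarrow> (\<forall>p\<in>set ts'. collinear d oo p (es!0)) \<longrightarrow>
      ?H x ts \<longrightarrow> ?H x ts' \<longrightarrow> ts = ts')))"
    by (simp only: inner)
  finally show ?thesis .
qed

definition coords_in :: "nat \<Rightarrow> 'a::field list \<Rightarrow> 'a list list \<Rightarrow> 'a list set \<Rightarrow> 'a list list \<Rightarrow> bool" where
  "coords_in d oo es S xs \<longleftrightarrow> (\<exists>u. length u = d * length xs \<and> u \<in> S \<and>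
     (\<forall>i<length xs. has_coords d oo es (xs!i) (map (line_pt d oo (es!0)) (chunk d u i))))"

context
  fixes d :: nat and oo :: "'a::field list" and es :: "'a list list"
  assumes d: "1 \<le> d" and len: "length oo = d" "length es = d" "\<forall>x\<in>set es. length x = d"
    and frame: "coord_frame d oo es"
begin

lemma has_coords_iff_frame_map:
  assumes "length x = d" "length u = d"
  shows "has_coords d oo es x (map (line_pt d oo (es!0)) u) \<longleftrightarrow> x = frame_map d oo es u"
proof
  show "has_coords d oo es x (map (line_pt d oo (es!0)) u) \<Longrightarrow> x = frame_map d oo es u"
    using has_coords_imp_eq_frame_map[OF d len assms(2,1)] frame unfolding coord_frame_defs by blast
next
  obtain y where "length y = d" "has_coords d oo es y (map (line_pt d oo (es!0)) u)"
    using frame assms(2) unfolding coord_frame_defs by blast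
  moreover from this have "y = frame_map d oo es u"
    using has_coords_imp_eq_frame_map[OF d len assms(2)] frame unfolding coord_frame_defs by blast
  ultimately show "x = frame_map d oo es u \<Longrightarrow> has_coords d oo es x (map (line_pt d oo (es!0)) u)"
    by simp
qed

lemma frame_map_eq_iff:
  assumes "length u = d" "length u' = d"
  shows "frame_map d oo es u = frame_map d oo es u' \<longleftrightarrow> u = u'"
  using frame assms has_coords_iff_frame_map[of "frame_map d oo es u"] unfolding coord_frame_defs
  by (metis length_frame_map)

lemma frame_map_surj: "length x = d \<Longrightarrow> \<exists>u. length u = d \<and> x = frame_map d oo es u"
  using frame has_coords_iff_frame_map unfolding coord_frame_defs by blast

lemma bij_betw_frame_map: "bij_betw (frame_map d oo es) (pts d) (pts d)"
  unfolding bij_betw_def inj_on_def pts_def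
  using frame_map_eq_iff frame_map_surj by (auto simp: image_def)

lemma coords_in_flatten_iff:
  assumes R: "R \<subseteq> tuples d n" and xs: "xs \<in> tuples d n"
  shows "coords_in d oo es (flatten R) xs \<longleftrightarrow> (\<exists>t\<in>R. xs = map (frame_map d oo es) t)"
proof
  assume "coords_in d oo es (flatten R) xs"
  then obtain t where t: "t \<in> R"
    and co: "\<forall>i<length xs. has_coords d oo es (xs!i) (map (line_pt d oo (es!0)) (chunk d (concat t) i))"
    unfolding coords_in_def flatten_def by blast
  have lt: "length t = n" "\<forall>x\<in>set t. length x = d" and lx: "length xs = n" "\<forall>x\<in>set xs. length x = d"
    using t R xs by (auto simp: tuples_def pts_def)
  have "xs!i = frame_map d oo es (t!i)" if "i < n" for i
    using co that lt lx chunk_concat[OF lt(2)] has_coords_iff_frame_map by simp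
  with lt lx have "xs = map (frame_map d oo es) t" by (simp add: list_eq_iff_nth_eq)
  with t show "\<exists>t\<in>R. xs = map (frame_map d oo es) t" by blast
next
  assume "\<exists>t\<in>R. xs = map (frame_map d oo es) t"
  then obtain t where t: "t \<in> R" "xs = map (frame_map d oo es) t" by blast
  have lt: "length t = n" "\<forall>x\<in>set t. length x = d"
    using t R by (auto simp: tuples_def pts_def)
  have "\<forall>i<length xs. has_coords d oo es (xs!i) (map (line_pt d oo (es!0)) (chunk d (concat t) i))"
    using t lt chunk_concat[OF lt(2)] has_coords_iff_frame_map by simp
  moreover have "length (concat t) = d * length xs" "concat t \<in> flatten R"
    using t lt length_concat_const[OF lt(2)] unfolding flatten_def by auto
  ultimately show "coords_in d oo es (flatten R) xs" unfolding coords_in_def by blast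
qed

lemma affine_frame_map: "affine_transf d (frame_map d oo es)"
  unfolding affine_transf_def
proof (intro exI conjI)
  define L where "L u = map (\<lambda>i. \<Sum>j<d. u!j * (es!j!i - oo!i)) [0..<d]" for u :: "'a list"
  have len_L: "length (L u) = d" for u by (simp add: L_def)
  have frame_map_L: "frame_map d oo es u = vadd (L u) oo" for u
    using len by (simp add: frame_map_def frame_map_upto_def L_def list_eq_iff_nth_eq add.commute)
  show "linear_on d L"
    unfolding linear_on_def L_def pts_def
    by (simp add: list_eq_iff_nth_eq distrib_right sum.distrib sum_distrib_left mult.assoc)
  show "oo \<in> pts d" using len by (simp add: pts_def)
  show "\<forall>p\<in>pts d. frame_map d oo es p = vadd (L p) oo" using frame_map_L by blast
  have L_eq: "L u = vsub (frame_map d oo es u) oo" for u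
    using len len_L by (simp add: frame_map_L list_eq_iff_nth_eq)
  show "bij_betw L (pts d) (pts d)"
  proof (rule bij_betw_imageI)
    show "inj_on L (pts d)"
      using frame_map_eq_iff len_L unfolding inj_on_def pts_def
      by (metis (mono_tags, lifting) frame_map_L mem_Collect_eq)
    show "L ` pts d = pts d"
    proof
      show "L ` pts d \<subseteq> pts d" using len_L by (auto simp: pts_def)
      show "pts d \<subseteq> L ` pts d"
      proof
        fix y :: "'a list" assume y: "y \<in> pts d"
        then have "length (vadd y oo) = d" using len by (simp add: pts_def)
        then obtain u where u: "length u = d" "vadd y oo = frame_map d oo es u"
          using frame_map_surj by blast
        then have "L u = y" using y len by (simp add: L_eq list_eq_iff_nth_eq pts_def) (metis add_diff_cancel_right')
        with u show "y \<in> L ` pts d" by (auto simp: pts_def)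
      qed
    qed
  qed
qed

end

text \<open>The last conjunct says, in coordinates, that the coordinate map of the frame preserves the basic
  relations of the geometry.\<close>

definition good_frame ::
  "nat \<Rightarrow> ('s \<Rightarrow> nat) \<Rightarrow> ('s \<Rightarrow> 'a::field list list \<Rightarrow> bool) \<Rightarrow> 'a list \<Rightarrow> 'a list list \<Rightarrow> bool" where
  "good_frame d ar I oo es \<longleftrightarrow> length oo = d \<and> length es = d \<and> (\<forall>x\<in>set es. length x = d) \<and>
     coord_frame d oo es \<and>
     (\<forall>s ys. ys \<in> tuples d (ar s) \<longrightarrow> (I s ys \<longleftrightarrow> coords_in d oo es (flatten {t. I s t}) ys))"

definition rel_in_good_frame ::
  "nat \<Rightarrow> ('s \<Rightarrow> nat) \<Rightarrow> ('s \<Rightarrow> 'a::field list list \<Rightarrow> bool) \<Rightarrow> 'a list list set \<Rightarrow> 'a list list \<Rightarrow> bool"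
  where
  "rel_in_good_frame d ar I R xs \<longleftrightarrow> (\<exists>oo es. good_frame d ar I oo es \<and> coords_in d oo es (flatten R) xs)"

lemma good_frame_automorphism:
  fixes I :: "'s \<Rightarrow> 'a::field list list \<Rightarrow> bool"
  assumes wf: "wf_struct d ar I" and d: "1 \<le> d" and good: "good_frame d ar I oo es"
  shows "automorphism d I (frame_map d oo es)"
  unfolding automorphism_def
proof (intro conjI allI impI)
  have len: "length oo = d" "length es = d" "\<forall>x\<in>set es. length x = d"
    and frame: "coord_frame d oo es"
    and rel: "\<And>s ys. ys \<in> tuples d (ar s) \<Longrightarrow> I s ys \<longleftrightarrow> coords_in d oo es (flatten {t. I s t}) ys"
    using good unfolding good_frame_def by blast+
  note frame_facts = bij_betw_frame_map[OF d len frame] coords_in_flatten_iff[OF d len frame]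
    frame_map_eq_iff[OF d len frame]
  show "bij_betw (frame_map d oo es) (pts d) (pts d)" by (fact frame_facts(1))
  fix s and t :: "'a list list"
  assume "set t \<subseteq> pts d"
  show "I s t \<longleftrightarrow> I s (map (frame_map d oo es) t)"
  proof (cases "length t = ar s")
    case True
    with \<open>set t \<subseteq> pts d\<close> have t: "t \<in> tuples d (ar s)" "map (frame_map d oo es) t \<in> tuples d (ar s)"
      by (auto simp: tuples_def pts_def)
    have I_tuples: "{t. I s t} \<subseteq> tuples d (ar s)" using wf unfolding wf_struct_def by blast
    have "I s (map (frame_map d oo es) t) \<longleftrightarrow> (\<exists>t'\<in>{t. I s t}. map (frame_map d oo es) t = map (frame_map d oo es) t')"
      using rel[OF t(2)] frame_facts(2)[OF I_tuples t(2)] by simp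
    also have "\<dots> \<longleftrightarrow> I s t"
    proof -
      have "map (frame_map d oo es) t = map (frame_map d oo es) t' \<longleftrightarrow> t = t'" if "I s t'" for t'
        using that t(1) I_tuples frame_facts(3)
        by (auto simp: tuples_def pts_def list_eq_iff_nth_eq subset_iff)
      then show ?thesis by auto
    qed
    finally show ?thesis ..
  next
    case False
    have "length t' = ar s" if "I s t'" for t' using wf that unfolding wf_struct_def tuples_def by blast
    with False have "\<not> I s t" "\<not> I s (map (frame_map d oo es) t)" by fastforce+
    then show ?thesis by simp
  qed
qed

lemma good_frame_std:
  assumes wf: "wf_struct d ar I" and d: "1 \<le> d"
  shows "good_frame d ar I (replicate d 0) (std_frame d :: 'a::field list list)"
proof -
  let ?o = "replicate d (0::'a)"
  have frame: "coord_frame d ?o (std_frame d)"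
    unfolding coord_frame_defs using std_frame_axes has_coords_std_iff[OF d] by blast
  have "I s ys \<longleftrightarrow> coords_in d ?o (std_frame d) (flatten {t. I s t}) ys"
    if ys: "ys \<in> tuples d (ar s)" for s ys
  proof -
    have I_tuples: "{t. I s t} \<subseteq> tuples d (ar s)" using wf unfolding wf_struct_def by blast
    have "map (frame_map d ?o (std_frame d)) t = t" if "t \<in> tuples d (ar s)" for t
      using that frame_map_std by (auto simp: tuples_def pts_def intro: map_idI)
    then show ?thesis
      using coords_in_flatten_iff[OF d _ _ length_std_frame_elems frame I_tuples ys] I_tuples ys
      by auto
  qed
  then show ?thesis
    unfolding good_frame_def using frame length_std_frame_elems by simp
qed

lemma rel_in_good_frame_iff:
  assumes wf: "wf_struct d ar I" and d: "1 \<le> d"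
    and R: "R \<subseteq> tuples d n" and xs: "xs \<in> tuples d n"
    and closed: "\<forall>f. automorphism d I f \<and> affine_transf d f \<longrightarrow> closed_under R f"
  shows "rel_in_good_frame d ar I R xs \<longleftrightarrow> xs \<in> R"
proof
  assume "rel_in_good_frame d ar I R xs"
  then obtain oo es where good: "good_frame d ar I oo es" and co: "coords_in d oo es (flatten R) xs"
    unfolding rel_in_good_frame_def by blast
  then have len: "length oo = d" "length es = d" "\<forall>x\<in>set es. length x = d"
    and frame: "coord_frame d oo es"
    unfolding good_frame_def by blast+
  from co obtain t where "t \<in> R" "xs = map (frame_map d oo es) t"
    using coords_in_flatten_iff[OF d len frame R xs] by blast
  moreover have "closed_under R (frame_map d oo es)"
    using closed good_frame_automorphism[OF wf d good] affine_frame_map[OF d len frame] by blast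
  ultimately show "xs \<in> R" unfolding closed_under_def by blast
next
  assume "xs \<in> R"
  moreover have "map (frame_map d (replicate d 0) (std_frame d)) xs = xs"
    using xs frame_map_std by (auto simp: tuples_def pts_def intro: map_idI)
  ultimately have "coords_in d (replicate d 0) (std_frame d) (flatten R) xs"
    using coords_in_flatten_iff[OF d _ _ length_std_frame_elems _ R xs] good_frame_std[OF wf d]
    unfolding good_frame_def by (metis length_replicate length_std_frame)
  then show "rel_in_good_frame d ar I R xs"
    unfolding rel_in_good_frame_def using good_frame_std[OF wf d] by blast
qed

context col_geometry
begin

lemma gdef_has_coords0:
  assumes "1 \<le> d"
  shows "gdef d I (\<lambda>e. has_coords d (e 0) (map e [1..<d + 1]) (e (d + 1)) (map e [d + 2..<2 * d + 2]))"
proof -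
  let ?Y = "2 * d + 2" and ?P = "3 * d + 2"
  have body: "gdef d I (\<lambda>e. e ?Y = e (d + 2) \<and>
      (\<forall>j<d. 1 \<le> j \<longrightarrow> transfer d (e 0) (e 1) (e (1 + j)) (e (d + 2 + j)) (e (?Y + j))) \<and>
      e ?P = e ?Y \<and>
      (\<forall>j<d. 1 \<le> j \<longrightarrow> parallelogram d (e 0) (e (?P + (j - 1))) (e (?Y + j)) (e (?P + j))) \<and>
      e (d + 1) = e (?P + (d - 1)))"
    by (intro gdef_conj gdef_eq gdef_ball gdef_imp gdef_const gdef_transfer gdef_parallelogram)
  show ?thesis
    unfolding has_coords_def
    apply (rule gdef_ex_points[where N = "2 * d + 2"])
     apply (rule gdef_ex_points[where N = "3 * d + 2"])
      apply (rule gdef_cong[OF body])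
    using assms by (auto simp del: upt_Suc)
qed

lemma gdef_has_coords:
  assumes "1 \<le> d" "length ES = d" "length TS = d"
  shows "gdef d I (\<lambda>e. has_coords d (e a) (map e ES) (e x) (map e TS))"
proof -
  let ?vs = "a # ES @ x # TS"
  have "map (e \<circ> (!) ?vs) [1..<d + 1] = map e ES" "map (e \<circ> (!) ?vs) [d + 2..<2 * d + 2] = map e TS"
    for e :: "nat \<Rightarrow> 'a list"
    using assms by (simp_all add: list_eq_iff_nth_eq nth_append del: upt_Suc)
  moreover have "(e \<circ> (!) ?vs) 0 = e a" "(e \<circ> (!) ?vs) (d + 1) = e x" for e :: "nat \<Rightarrow> 'a list"
    using assms by (simp_all add: nth_append)
  ultimately show ?thesis
    using gdef_subst[OF gdef_has_coords0[OF assms(1)], of "(!) ?vs"] by (simp only:)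
qed

lemma gdef_frame_axes:
  assumes "1 \<le> d"
  shows "gdef d I (\<lambda>e. frame_axes d (e 0) (map e [1..<d + 1]))"
proof -
  have "gdef d I (\<lambda>e. \<forall>j<d. 1 \<le> j \<longrightarrow> \<not> collinear d (e 0) (e 1) (e (1 + j)))"
    by (intro gdef_ball gdef_imp gdef_const gdef_not gdef_collinear)
  then show ?thesis
    unfolding frame_axes_def by (rule gdef_cong) (use assms in \<open>auto simp del: upt_Suc\<close>)
qed

lemma gdef_coords_total:
  assumes "1 \<le> d"
  shows "gdef d I (\<lambda>e. e 0 \<noteq> e 1 \<and> coords_total d (e 0) (map e [1..<d + 1]))"
proof -
  have "gdef d I (\<lambda>e. \<forall>ts. length ts = d \<and> (\<forall>p\<in>set ts. length p = d) \<longrightarrow>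
      (\<forall>p\<in>set ts. collinear d (e 0) p (e 1)) \<longrightarrow>
      (\<exists>x. length x = d \<and> has_coords d (e 0) (map e [1..<d + 1]) x ts))"
    by (intro gdef_all_points[where N = "d + 1"] gdef_imp gdef_on_line_block
        gdef_ex_point[where N = "2 * d + 1"])
      (use gdef_has_coords[OF assms] assms in \<open>simp_all add: mult_2 del: upt_Suc\<close>)
  then have "gdef d I (\<lambda>e. e 0 \<noteq> e 1 \<and> (\<forall>ts. length ts = d \<and> (\<forall>p\<in>set ts. length p = d) \<longrightarrow>
      (\<forall>p\<in>set ts. collinear d (e 0) p (e 1)) \<longrightarrow>
      (\<exists>x. length x = d \<and> has_coords d (e 0) (map e [1..<d + 1]) x ts)))"
    by (intro gdef_conj gdef_not gdef_eq)
  then show ?thesis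
  proof (rule gdef_cong)
    fix e :: "nat \<Rightarrow> 'a list"
    assume "\<forall>i. length (e i) = d"
    moreover have "map e [1..<d + 1] ! 0 = e 1" using assms by (simp del: upt_Suc)
    ultimately show "(e 0 \<noteq> e 1 \<and> (\<forall>ts. length ts = d \<and> (\<forall>p\<in>set ts. length p = d) \<longrightarrow>
        (\<forall>p\<in>set ts. collinear d (e 0) p (e 1)) \<longrightarrow>
        (\<exists>x. length x = d \<and> has_coords d (e 0) (map e [1..<d + 1]) x ts))) \<longleftrightarrow>
      e 0 \<noteq> e 1 \<and> coords_total d (e 0) (map e [1..<d + 1])"
      using coords_total_iff[of "e 0" d "map e [1..<d + 1]"] by auto
  qed
qed

lemma gdef_coords_onto:
  assumes "1 \<le> d"
  shows "gdef d I (\<lambda>e. e 0 \<noteq> e 1 \<and> coords_onto d (e 0) (map e [1..<d + 1]))"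
proof -
  have "gdef d I (\<lambda>e. \<forall>x. length x = d \<longrightarrow> (\<exists>ts. length ts = d \<and> (\<forall>p\<in>set ts. length p = d) \<and>
      (\<forall>p\<in>set ts. collinear d (e 0) p (e 1)) \<and> has_coords d (e 0) (map e [1..<d + 1]) x ts))"
    by (intro gdef_all_point[where N = "d + 1"] gdef_ex_points[where N = "d + 2"] gdef_conj
        gdef_on_line_block)
      (use gdef_has_coords[OF assms] assms in \<open>simp_all del: upt_Suc\<close>)
  then have "gdef d I (\<lambda>e. e 0 \<noteq> e 1 \<and> (\<forall>x. length x = d \<longrightarrow>
      (\<exists>ts. length ts = d \<and> (\<forall>p\<in>set ts. length p = d) \<and>
        (\<forall>p\<in>set ts. collinear d (e 0) p (e 1)) \<and> has_coords d (e 0) (map e [1..<d + 1]) x ts)))"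
    by (intro gdef_conj gdef_not gdef_eq)
  then show ?thesis
  proof (rule gdef_cong)
    fix e :: "nat \<Rightarrow> 'a list"
    assume "\<forall>i. length (e i) = d"
    moreover have "map e [1..<d + 1] ! 0 = e 1" using assms by (simp del: upt_Suc)
    ultimately show "(e 0 \<noteq> e 1 \<and> (\<forall>x. length x = d \<longrightarrow> (\<exists>ts. length ts = d \<and>
        (\<forall>p\<in>set ts. length p = d) \<and> (\<forall>p\<in>set ts. collinear d (e 0) p (e 1)) \<and>
        has_coords d (e 0) (map e [1..<d + 1]) x ts))) \<longleftrightarrow>
      e 0 \<noteq> e 1 \<and> coords_onto d (e 0) (map e [1..<d + 1])"
      using coords_onto_iff[of "e 0" d "map e [1..<d + 1]"] by auto
  qed
qed

lemma gdef_coords_unique: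
  assumes "1 \<le> d"
  shows "gdef d I (\<lambda>e. e 0 \<noteq> e 1 \<and> coords_unique d (e 0) (map e [1..<d + 1]))"
proof -
  have "gdef d I (\<lambda>e. \<forall>x. length x = d \<longrightarrow>
      (\<forall>ts. length ts = d \<and> (\<forall>p\<in>set ts. length p = d) \<longrightarrow> (\<forall>p\<in>set ts. collinear d (e 0) p (e 1)) \<longrightarrow>
      (\<forall>ts'. length ts' = d \<and> (\<forall>p\<in>set ts'. length p = d) \<longrightarrow> (\<forall>p\<in>set ts'. collinear d (e 0) p (e 1)) \<longrightarrow>
        has_coords d (e 0) (map e [1..<d + 1]) x ts \<longrightarrow> has_coords d (e 0) (map e [1..<d + 1]) x ts' \<longrightarrow>
        ts = ts')))"
  proof -
    have "gdef d I (\<lambda>e. \<forall>j<d. e (d + 2 + j) = e (2 * d + 2 + j))"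
      by (intro gdef_ball gdef_eq)
    then have "gdef d I (\<lambda>e. map e [d + 2..<d + 2 + d] = map e [2 * d + 2..<2 * d + 2 + d])"
      by (rule gdef_cong) (simp only: map_upt_eq_map_upt_iff)
    then show ?thesis
      apply (intro gdef_all_point[where N = "d + 1"])
       apply (intro gdef_all_points[where N = "d + 2"])
        apply (intro gdef_imp gdef_on_line_block)
        apply (intro gdef_all_points[where N = "2 * d + 2"])
         apply (intro gdef_imp gdef_on_line_block gdef_has_coords assms)
      using assms by (simp_all add: mult_2 del: upt_Suc)
  qed
  then have "gdef d I (\<lambda>e. e 0 \<noteq> e 1 \<and> (\<forall>x. length x = d \<longrightarrow>
      (\<forall>ts. length ts = d \<and> (\<forall>p\<in>set ts. length p = d) \<longrightarrow> (\<forall>p\<in>set ts. collinear d (e 0) p (e 1)) \<longrightarrow>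
      (\<forall>ts'. length ts' = d \<and> (\<forall>p\<in>set ts'. length p = d) \<longrightarrow> (\<forall>p\<in>set ts'. collinear d (e 0) p (e 1)) \<longrightarrow>
        has_coords d (e 0) (map e [1..<d + 1]) x ts \<longrightarrow> has_coords d (e 0) (map e [1..<d + 1]) x ts' \<longrightarrow>
        ts = ts'))))"
    by (intro gdef_conj gdef_not gdef_eq)
  then show ?thesis
  proof (rule gdef_cong)
    fix e :: "nat \<Rightarrow> 'a list"
    assume "\<forall>i. length (e i) = d"
    moreover have "map e [1..<d + 1] ! 0 = e 1" using assms by (simp del: upt_Suc)
    ultimately show "(e 0 \<noteq> e 1 \<and> (\<forall>x. length x = d \<longrightarrow>
        (\<forall>ts. length ts = d \<and> (\<forall>p\<in>set ts. length p = d) \<longrightarrow> (\<forall>p\<in>set ts. collinear d (e 0) p (e 1)) \<longrightarrow>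
        (\<forall>ts'. length ts' = d \<and> (\<forall>p\<in>set ts'. length p = d) \<longrightarrow> (\<forall>p\<in>set ts'. collinear d (e 0) p (e 1)) \<longrightarrow>
          has_coords d (e 0) (map e [1..<d + 1]) x ts \<longrightarrow> has_coords d (e 0) (map e [1..<d + 1]) x ts' \<longrightarrow>
          ts = ts')))) \<longleftrightarrow>
      e 0 \<noteq> e 1 \<and> coords_unique d (e 0) (map e [1..<d + 1])"
      using coords_unique_iff[of "e 0" d "map e [1..<d + 1]"] by auto
  qed
qed

lemma gdef_coord_frame:
  assumes "2 \<le> d"
  shows "gdef d I (\<lambda>e. coord_frame d (e 0) (map e [1..<d + 1]))"
proof -
  have parts: "gdef d I (\<lambda>e. frame_axes d (e 0) (map e [1..<d + 1]) \<and>
      (e 0 \<noteq> e 1 \<and> coords_total d (e 0) (map e [1..<d + 1])) \<and>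
      (e 0 \<noteq> e 1 \<and> coords_onto d (e 0) (map e [1..<d + 1])) \<and>
      (e 0 \<noteq> e 1 \<and> coords_unique d (e 0) (map e [1..<d + 1])))"
    using assms by (intro gdef_conj gdef_frame_axes gdef_coords_total gdef_coords_onto gdef_coords_unique)
      simp_all
  have neq: "e 0 \<noteq> e 1" if "frame_axes d (e 0) (map e [1..<d + 1])" "\<forall>i. length (e i) = d" for e
  proof -
    have "\<not> collinear d (e 0) (map e [1..<d + 1] ! 0) (map e [1..<d + 1] ! 1)"
      using that(1) assms unfolding frame_axes_def by simp
    with assms have "\<not> collinear d (e 0) (e 1) (e 2)" by (simp add: numeral_2_eq_2 del: upt_Suc)
    with that(2) show ?thesis using noncollinear_neq12 by blast
  qed
  from parts show ?thesis
    by (rule gdef_cong) (use neq in \<open>auto simp only: coord_frame_def\<close>)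
qed

end

context field_geometry
begin

lemma gdef_coords_in:
  assumes d: "1 \<le> d" and S: "fdefinable_rel le (d * m) S"
  shows "gdef d I (\<lambda>e. \<not> collinear d (e 0) (e 1) (e 2) \<and>
    coords_in d (e 0) (map e [1..<d + 1]) S (map e [d + 1..<d + 1 + m]))"
proof -
  define K where "K = d + m + 3"
  let ?lp = "\<lambda>e. line_pt d (e 0) (e 1)"
  let ?\<sigma> = "\<lambda>i::nat. if i < 3 then i else K + (i - 3)"
  have "map (e \<circ> ?\<sigma>) [3..<3 + d * m] = map e [K..<K + d * m]" for e :: "nat \<Rightarrow> 'a list"
    by (simp add: list_eq_iff_nth_eq)
  then have line: "gdef d I (\<lambda>e. \<not> collinear d (e 0) (e 1) (e 2) \<and>
      (\<exists>u. u \<in> S \<and> map e [K..<K + d * m] = map (?lp e) u))"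
    using gdef_subst[OF gdef_line_rel[OF S], of ?\<sigma>] by simp
  have "gdef d I (\<lambda>e. \<forall>i<m. has_coords d (e 0) (map e [1..<d + 1]) (e (d + 1 + i))
      (map e [K + i * d..<K + i * d + d]))"
    by (intro gdef_ball gdef_has_coords d) simp_all
  with line have "gdef d I (\<lambda>e. (\<not> collinear d (e 0) (e 1) (e 2) \<and>
      (\<exists>u. u \<in> S \<and> map e [K..<K + d * m] = map (?lp e) u)) \<and>
      (\<forall>i<m. has_coords d (e 0) (map e [1..<d + 1]) (e (d + 1 + i)) (chunk d (map e [K..<K + d * m]) i)))"
    by (simp only: chunk_map_upt cong: conj_cong all_cong imp_cong) (rule gdef_conj)
  then have "gdef d I (\<lambda>e. \<exists>ts. length ts = d * m \<and> (\<forall>p\<in>set ts. length p = d) \<and>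
      (\<not> collinear d (e 0) (e 1) (e 2) \<and> (\<exists>u. u \<in> S \<and> ts = map (?lp e) u)) \<and>
      (\<forall>i<m. has_coords d (e 0) (map e [1..<d + 1]) (e (d + 1 + i)) (chunk d ts i)))"
    by (rule gdef_ex_points[where N = K]) (simp add: K_def del: upt_Suc)
  then show ?thesis
  proof (rule gdef_cong)
    fix e :: "nat \<Rightarrow> 'a list"
    have "coords_in d (e 0) (map e [1..<d + 1]) S (map e [d + 1..<d + 1 + m]) \<longleftrightarrow>
        (\<exists>u. length u = d * m \<and> u \<in> S \<and>
          (\<forall>i<m. has_coords d (e 0) (map e [1..<d + 1]) (e (d + 1 + i)) (map (?lp e) (chunk d u i))))"
      using d unfolding coords_in_def by (simp del: upt_Suc)
    also have "\<dots> \<longleftrightarrow> (\<exists>ts. length ts = d * m \<and> (\<forall>p\<in>set ts. length p = d) \<and>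
        (\<exists>u. u \<in> S \<and> ts = map (?lp e) u) \<and>
        (\<forall>i<m. has_coords d (e 0) (map e [1..<d + 1]) (e (d + 1 + i)) (chunk d ts i)))"
    proof
      assume "\<exists>u. length u = d * m \<and> u \<in> S \<and>
        (\<forall>i<m. has_coords d (e 0) (map e [1..<d + 1]) (e (d + 1 + i)) (map (?lp e) (chunk d u i)))"
      then obtain u where "length u = d * m" "u \<in> S"
        "\<forall>i<m. has_coords d (e 0) (map e [1..<d + 1]) (e (d + 1 + i)) (map (?lp e) (chunk d u i))"
        by blast
      then show "\<exists>ts. length ts = d * m \<and> (\<forall>p\<in>set ts. length p = d) \<and>
        (\<exists>u. u \<in> S \<and> ts = map (?lp e) u) \<and>
        (\<forall>i<m. has_coords d (e 0) (map e [1..<d + 1]) (e (d + 1 + i)) (chunk d ts i))"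
        by (intro exI[of _ "map (?lp e) u"]) (auto simp: chunk_map simp del: upt_Suc)
    qed (auto simp: chunk_map simp del: upt_Suc)
    finally show "(\<exists>ts. length ts = d * m \<and> (\<forall>p\<in>set ts. length p = d) \<and>
        (\<not> collinear d (e 0) (e 1) (e 2) \<and> (\<exists>u. u \<in> S \<and> ts = map (?lp e) u)) \<and>
        (\<forall>i<m. has_coords d (e 0) (map e [1..<d + 1]) (e (d + 1 + i)) (chunk d ts i))) \<longleftrightarrow>
      \<not> collinear d (e 0) (e 1) (e 2) \<and>
        coords_in d (e 0) (map e [1..<d + 1]) S (map e [d + 1..<d + 1 + m])"
      by blast
  qed
qed

end

locale ffd_geometry = field_geometry d I le
  for d :: nat and I :: "'s \<Rightarrow> 'a::field list list \<Rightarrow> bool" and le +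
  fixes ar :: "'s \<Rightarrow> nat"
  assumes wf: "wf_struct d ar I" and two_le_d: "2 \<le> d"
    and finite_symbols: "finite (UNIV :: 's set)"
    and fdefinable_symbols: "fdefinable le d (ar s) {t. I s t}"
begin

lemma gdef_good_frame: "gdef d I (\<lambda>e. good_frame d ar I (e 0) (map e [1..<d + 1]))"
proof -
  have d: "1 \<le> d" using two_le_d by simp
  have rel: "gdef d I (\<lambda>e. \<forall>ys. length ys = ar s \<and> (\<forall>p\<in>set ys. length p = d) \<longrightarrow>
      (I s ys \<longleftrightarrow> \<not> collinear d (e 0) (e 1) (e 2) \<and>
        coords_in d (e 0) (map e [1..<d + 1]) (flatten {t. I s t}) ys))" for s
  proof (rule gdef_all_points[where N = "d + 1"])
    show "gdef d I (\<lambda>e. I s (map e [d + 1..<d + 1 + ar s]) \<longleftrightarrow> \<not> collinear d (e 0) (e 1) (e 2) \<and>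
        coords_in d (e 0) (map e [1..<d + 1]) (flatten {t. I s t}) (map e [d + 1..<d + 1 + ar s]))"
      using fdefinable_symbols[of s] unfolding fdefinable_def
      by (intro gdef_iff gdef_rel gdef_coords_in d)
  qed (use two_le_d in \<open>simp del: upt_Suc\<close>)
  have "gdef d I (\<lambda>e. coord_frame d (e 0) (map e [1..<d + 1]) \<and> (\<forall>s\<in>UNIV. \<forall>ys.
      length ys = ar s \<and> (\<forall>p\<in>set ys. length p = d) \<longrightarrow>
      (I s ys \<longleftrightarrow> \<not> collinear d (e 0) (e 1) (e 2) \<and>
        coords_in d (e 0) (map e [1..<d + 1]) (flatten {t. I s t}) ys)))"
    by (intro gdef_conj gdef_coord_frame two_le_d gdef_finite_ball finite_symbols rel)
  then show ?thesis
  proof (rule gdef_cong)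
    fix e :: "nat \<Rightarrow> 'a list"
    assume len: "\<forall>i. length (e i) = d"
    have "\<not> collinear d (e 0) (e 1) (e 2)" if "coord_frame d (e 0) (map e [1..<d + 1])"
      using that two_le_d unfolding coord_frame_def frame_axes_def
      by (simp add: numeral_2_eq_2 del: upt_Suc)
    with len show "(coord_frame d (e 0) (map e [1..<d + 1]) \<and> (\<forall>s\<in>UNIV. \<forall>ys.
        length ys = ar s \<and> (\<forall>p\<in>set ys. length p = d) \<longrightarrow>
        (I s ys \<longleftrightarrow> \<not> collinear d (e 0) (e 1) (e 2) \<and>
          coords_in d (e 0) (map e [1..<d + 1]) (flatten {t. I s t}) ys))) \<longleftrightarrow>
      good_frame d ar I (e 0) (map e [1..<d + 1])"
      unfolding good_frame_def tuples_def pts_def by (auto simp del: upt_Suc)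
  qed
qed

lemma gdef_rel_in_good_frame:
  assumes R: "fdefinable le d n R"
  shows "gdef d I (\<lambda>e. rel_in_good_frame d ar I R (map e [0..<n]))"
proof -
  have d: "1 \<le> d" using two_le_d by simp
  have "gdef d I (\<lambda>e. good_frame d ar I (e 0) (map e [1..<d + 1]) \<and>
      (\<not> collinear d (e 0) (e 1) (e 2) \<and>
        coords_in d (e 0) (map e [1..<d + 1]) (flatten R) (map e [d + 1..<d + 1 + n])))"
    using R unfolding fdefinable_def by (intro gdef_conj gdef_good_frame gdef_coords_in d)
  moreover have "\<not> collinear d (e 0) (e 1) (e 2)" if "good_frame d ar I (e 0) (map e [1..<d + 1])" for e
    using that two_le_d unfolding good_frame_def coord_frame_def frame_axes_def
    by (simp add: numeral_2_eq_2 del: upt_Suc)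
  ultimately have canon: "gdef d I (\<lambda>e. good_frame d ar I (e 0) (map e [1..<d + 1]) \<and>
      coords_in d (e 0) (map e [1..<d + 1]) (flatten R) (map e [d + 1..<d + 1 + n]))"
    by (elim gdef_cong) blast
  let ?\<sigma> = "\<lambda>i. if i \<le> d then n + i else i - (d + 1)"
  have \<sigma>: "map (e \<circ> ?\<sigma>) [1..<d + 1] = map e [n + 1..<n + d + 1]"
    "map (e \<circ> ?\<sigma>) [d + 1..<d + 1 + n] = map e [0..<n]" "(e \<circ> ?\<sigma>) 0 = e n"
    for e :: "nat \<Rightarrow> 'a list"
    by (intro nth_equalityI; simp del: upt_Suc)+
  from gdef_subst[OF canon, of ?\<sigma>]
  have "gdef d I (\<lambda>e. good_frame d ar I (e n) (map e [n + 1..<n + d + 1]) \<and>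
      coords_in d (e n) (map e [n + 1..<n + d + 1]) (flatten R) (map e [0..<n]))"
    by (simp only: \<sigma>)
  moreover have "map e [n..<n + (d + 1)] = e n # map e [n + 1..<n + d + 1]" for e :: "nat \<Rightarrow> 'a list"
    by (simp add: upt_conv_Cons del: upt_Suc)
  ultimately have "gdef d I (\<lambda>e. \<exists>fr. length fr = d + 1 \<and> (\<forall>p\<in>set fr. length p = d) \<and>
      good_frame d ar I (fr ! 0) (tl fr) \<and> coords_in d (fr ! 0) (tl fr) (flatten R) (map e [0..<n]))"
    by (intro gdef_ex_points[where N = n]) simp_all
  then show ?thesis
  proof (rule gdef_cong)
    fix e :: "nat \<Rightarrow> 'a list"
    show "(\<exists>fr. length fr = d + 1 \<and> (\<forall>p\<in>set fr. length p = d) \<and>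
        good_frame d ar I (fr ! 0) (tl fr) \<and> coords_in d (fr ! 0) (tl fr) (flatten R) (map e [0..<n])) \<longleftrightarrow>
      rel_in_good_frame d ar I R (map e [0..<n])"
      unfolding rel_in_good_frame_def
    proof
      assume "\<exists>oo es. good_frame d ar I oo es \<and> coords_in d oo es (flatten R) (map e [0..<n])"
      then obtain oo es where "good_frame d ar I oo es" "coords_in d oo es (flatten R) (map e [0..<n])"
        by blast
      then show "\<exists>fr. length fr = d + 1 \<and> (\<forall>p\<in>set fr. length p = d) \<and>
        good_frame d ar I (fr ! 0) (tl fr) \<and> coords_in d (fr ! 0) (tl fr) (flatten R) (map e [0..<n])"
        unfolding good_frame_def by (intro exI[of _ "oo # es"]) auto
    qed blast
  qed
qed

lemma gdefinable_if_closed: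
  assumes R: "R \<subseteq> tuples d n" "fdefinable le d n R"
    and closed: "\<forall>f. automorphism d I f \<and> affine_transf d f \<longrightarrow> closed_under R f"
  shows "gdefinable d I n R"
  unfolding gdefinable_iff_gdef
  using gdef_rel_in_good_frame[OF R(2)]
proof (rule gdef_cong)
  fix e :: "nat \<Rightarrow> 'a list"
  assume "\<forall>i. length (e i) = d"
  then have "map e [0..<n] \<in> tuples d n" by (auto simp: tuples_def pts_def)
  with rel_in_good_frame_iff[OF wf _ R(1) _ closed] two_le_d
  show "rel_in_good_frame d ar I R (map e [0..<n]) \<longleftrightarrow> map e [0..<n] \<in> R" by simp
qed

end

definition fdef :: "('a::field \<Rightarrow> 'a \<Rightarrow> bool) option \<Rightarrow> ((nat \<Rightarrow> 'a) \<Rightarrow> bool) \<Rightarrow> bool" where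
  "fdef le P \<longleftrightarrow> (\<exists>\<phi>. \<forall>g. fsat le g \<phi> \<longleftrightarrow> P g)"

lemma fdefinable_rel_iff_fdef: "fdefinable_rel le m S \<longleftrightarrow> fdef le (\<lambda>g. map g [0..<m] \<in> S)"
  unfolding fdefinable_rel_def fdef_def by (simp add: eq_commute[of "fsat _ _ _"])

lemma fdef_cong: "fdef le P \<Longrightarrow> (\<And>g. P g = Q g) \<Longrightarrow> fdef le Q"
  unfolding fdef_def by simp

lemma fdef_eq: "fdef le (\<lambda>g. g i = g j)"
  unfolding fdef_def by (rule exI[of _ "FEq (FVar i) (FVar j)"]) simp

lemma fdef_not: "fdef le P \<Longrightarrow> fdef le (\<lambda>g. \<not> P g)"
  unfolding fdef_def by (metis fsat.simps(3))

lemma fdef_conj: "fdef le P \<Longrightarrow> fdef le Q \<Longrightarrow> fdef le (\<lambda>g. P g \<and> Q g)"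
  unfolding fdef_def by (metis fsat.simps(4))

lemma fdef_const: "fdef le (\<lambda>g. b)"
proof (cases b)
  case True
  then show ?thesis using fdef_eq[of le 0 0] by simp
next
  case False
  then show ?thesis using fdef_not[OF fdef_eq[of le 0 0]] by simp
qed

lemma fdef_ex: "fdef le P \<Longrightarrow> fdef le (\<lambda>g. \<exists>a. P (g(x := a)))"
  unfolding fdef_def by (metis fsat.simps(5))

lemma fdef_ball: "(\<And>j. j < (m::nat) \<Longrightarrow> fdef le (Q j)) \<Longrightarrow> fdef le (\<lambda>g. \<forall>j<m. Q j g)"
proof (induction m)
  case 0
  then show ?case using fdef_const by simp
next
  case (Suc m)
  then have "fdef le (\<lambda>g. (\<forall>j<m. Q j g) \<and> Q m g)" by (intro fdef_conj) auto
  then show ?case by (rule fdef_cong) (auto simp: less_Suc_eq)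
qed

lemma fdef_ex_block:
  fixes P :: "(nat \<Rightarrow> 'a::field) \<Rightarrow> bool"
  shows "fdef le P \<Longrightarrow> fdef le (\<lambda>g. \<exists>as. length as = m \<and> P (upd_block g N as))"
proof (induction m arbitrary: N)
  case 0
  then show ?case by simp
next
  case (Suc m)
  then have "fdef le (\<lambda>g. \<exists>a. \<exists>as. length as = m \<and> P (upd_block (g(N := a)) (Suc N) as))"
    by (intro fdef_ex) blast
  then show ?case
  proof (rule fdef_cong)
    fix g :: "nat \<Rightarrow> 'a"
    show "(\<exists>a as. length as = m \<and> P (upd_block (g(N := a)) (Suc N) as)) \<longleftrightarrow>
      (\<exists>as. length as = Suc m \<and> P (upd_block g N as))"
    proof
      assume "\<exists>a as. length as = m \<and> P (upd_block (g(N := a)) (Suc N) as)"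
      then obtain a as where "length as = m" "P (upd_block (g(N := a)) (Suc N) as)" by blast
      then show "\<exists>as. length as = Suc m \<and> P (upd_block g N as)"
        by (intro exI[of _ "a # as"]) (simp add: upd_block_Cons)
    next
      assume "\<exists>as. length as = Suc m \<and> P (upd_block g N as)"
      then obtain a as where "length (a # as) = Suc m" "P (upd_block g N (a # as))"
        by (metis length_Suc_conv)
      then show "\<exists>a as. length as = m \<and> P (upd_block (g(N := a)) (Suc N) as)"
        by (auto simp: upd_block_Cons)
    qed
  qed
qed

fun trename :: "(nat \<Rightarrow> nat) \<Rightarrow> ftm \<Rightarrow> ftm" where
  "trename r (FVar i) = FVar (r i)"
| "trename r FZero = FZero"
| "trename r FOne = FOne"
| "trename r (FAdd s t) = FAdd (trename r s) (trename r t)"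
| "trename r (FMul s t) = FMul (trename r s) (trename r t)"

fun frename :: "(nat \<Rightarrow> nat) \<Rightarrow> ffm \<Rightarrow> ffm" where
  "frename r (FEq s t) = FEq (trename r s) (trename r t)"
| "frename r (FLe s t) = FLe (trename r s) (trename r t)"
| "frename r (FNot \<phi>) = FNot (frename r \<phi>)"
| "frename r (FAnd \<phi> \<psi>) = FAnd (frename r \<phi>) (frename r \<psi>)"
| "frename r (FEx x \<phi>) = FEx (r x) (frename r \<phi>)"

lemma feval_trename: "feval g (trename r t) = feval (g \<circ> r) t"
  by (induction t) auto

lemma fsat_frename: "inj r \<Longrightarrow> fsat le g (frename r \<phi>) = fsat le (g \<circ> r) \<phi>"
proof (induction \<phi> arbitrary: g)
  case (FEx x \<phi>)
  have "(g(r x := a)) \<circ> r = (g \<circ> r)(x := a)" for a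
    using FEx.prems by (auto simp: fun_eq_iff inj_eq)
  then show ?case by (simp only: frename.simps fsat.simps FEx.IH[OF FEx.prems])
qed (simp_all add: feval_trename split: option.splits)

lemma feval_cong_tvars: "(\<And>i. i < tvars t \<Longrightarrow> g i = g' i) \<Longrightarrow> feval g t = feval g' t"
  by (induction t) auto

lemma fsat_cong_fvars: "(\<And>i. i < fvars \<phi> \<Longrightarrow> g i = g' i) \<Longrightarrow> fsat le g \<phi> = fsat le g' \<phi>"
proof (induction \<phi> arbitrary: g g')
  case (FEq s t)
  then show ?case using feval_cong_tvars[of s g g'] feval_cong_tvars[of t g g'] by simp
next
  case (FLe s t)
  then show ?case
    using feval_cong_tvars[of s g g'] feval_cong_tvars[of t g g'] by (simp split: option.splits)
next
  case (FNot \<phi>)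
  have "fsat le g \<phi> = fsat le g' \<phi>" by (rule FNot.IH) (use FNot.prems in simp)
  then show ?case by simp
next
  case (FAnd \<phi> \<psi>)
  have "fsat le g \<phi> = fsat le g' \<phi>" "fsat le g \<psi> = fsat le g' \<psi>"
    by (rule FAnd.IH, use FAnd.prems in simp)+
  then show ?case by simp
next
  case (FEx x \<phi>)
  have "fsat le (g(x := a)) \<phi> = fsat le (g'(x := a)) \<phi>" for a
    by (rule FEx.IH) (use FEx.prems in simp)
  then show ?case by simp
qed

lemma fdef_subst:
  fixes P :: "(nat \<Rightarrow> 'a::field) \<Rightarrow> bool"
  assumes "fdef le P"
  shows "fdef le (\<lambda>g. P (g \<circ> \<sigma>))"
proof -
  obtain \<phi> where \<phi>: "\<And>g. fsat le g \<phi> \<longleftrightarrow> P g" using assms unfolding fdef_def by blast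
  obtain M where \<sigma>M: "\<And>i. i < fvars \<phi> \<Longrightarrow> \<sigma> i < M"
    using finite_nat_set_iff_bounded[of "\<sigma> ` {..<fvars \<phi>}"] by auto
  have "fdef le (\<lambda>g. (\<forall>i<fvars \<phi>. g (M + i) = g (\<sigma> i)) \<and> fsat le (g \<circ> (+) M) \<phi>)"
  proof (intro fdef_conj fdef_ball fdef_eq)
    show "fdef le (\<lambda>g. fsat le (g \<circ> (+) M) \<phi>)"
      unfolding fdef_def using fsat_frename[of "(+) M"] by (auto simp: inj_def)
  qed
  then have "fdef le (\<lambda>g. \<exists>as. length as = fvars \<phi> \<and>
      (\<forall>i<fvars \<phi>. upd_block g M as (M + i) = upd_block g M as (\<sigma> i)) \<and>
      fsat le (upd_block g M as \<circ> (+) M) \<phi>)"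
    by (rule fdef_ex_block)
  then show ?thesis
  proof (rule fdef_cong)
    fix g :: "nat \<Rightarrow> 'a"
    let ?as = "map (g \<circ> \<sigma>) [0..<fvars \<phi>]"
    have "fsat le (upd_block g M ?as \<circ> (+) M) \<phi> \<longleftrightarrow> P (g \<circ> \<sigma>)"
      using fsat_cong_fvars[of \<phi> "upd_block g M ?as \<circ> (+) M" "g \<circ> \<sigma>" le] \<phi> by simp
    moreover have "(\<forall>i<fvars \<phi>. upd_block g M as (M + i) = upd_block g M as (\<sigma> i)) \<longleftrightarrow> as = ?as"
      if "length as = fvars \<phi>" for as
      using upd_block_copies_iff[of as "fvars \<phi>" \<sigma> M g] that \<sigma>M by blast
    ultimately show "(\<exists>as. length as = fvars \<phi> \<and>
        (\<forall>i<fvars \<phi>. upd_block g M as (M + i) = upd_block g M as (\<sigma> i)) \<and>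
        fsat le (upd_block g M as \<circ> (+) M) \<phi>) \<longleftrightarrow> P (g \<circ> \<sigma>)"
      by (metis length_map diff_zero length_upt)
  qed
qed

section \<open>Translating the geometry into the field\<close>

text \<open>A point variable \<open>x\<close> is represented by the \<open>d\<close> field variables \<open>x * d, \<dots>, x * d + d - 1\<close>.\<close>

definition decode :: "nat \<Rightarrow> (nat \<Rightarrow> 'a) \<Rightarrow> nat \<Rightarrow> 'a list" where
  "decode d g x = map (\<lambda>j. g (x * d + j)) [0..<d]"

lemma length_decode [simp]: "length (decode d g x) = d"
  by (simp add: decode_def)

lemma block_index_eq_iff:
  assumes "j < (d::nat)" "j' < d"
  shows "x * d + j = y * d + j' \<longleftrightarrow> x = y \<and> j = j'"
proof
  assume eq: "x * d + j = y * d + j'"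
  have "(x * d + j) div d = x" "(y * d + j') div d = y" "(x * d + j) mod d = j" "(y * d + j') mod d = j'"
    using assms by simp_all
  with eq show "x = y \<and> j = j'" by metis
qed simp

lemma decode_upd_block:
  assumes "length p = d"
  shows "decode d (upd_block g (x * d) p) = (decode d g)(x := p)"
proof
  fix y
  show "decode d (upd_block g (x * d) p) y = ((decode d g)(x := p)) y"
  proof (cases "y = x")
    case True
    with assms show ?thesis by (simp add: decode_def list_eq_iff_nth_eq)
  next
    case False
    have "upd_block g (x * d) p (y * d + j) = g (y * d + j)" if "j < d" for j
    proof -
      have "\<not> (x * d \<le> y * d + j \<and> y * d + j < x * d + d)"
      proof
        assume "x * d \<le> y * d + j \<and> y * d + j < x * d + d"
        then have "y * d + j = x * d + (y * d + j - x * d)" "y * d + j - x * d < d" by linarith+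
        with that False show False using block_index_eq_iff by metis
      qed
      with assms show ?thesis unfolding upd_block_def by auto
    qed
    with False show ?thesis by (simp add: decode_def)
  qed
qed

lemma concat_decode: "concat (map (decode d g) [0..<n]) = map g [0..<d * n]"
proof (induction n)
  case (Suc n)
  have "[0..<d * Suc n] = [0..<d * n] @ [d * n..<d * n + d]"
    using upt_add_eq_append[of 0 "d * n" d] by (simp add: add.commute)
  then have "map g [0..<d * Suc n] = map g [0..<d * n] @ map g [d * n..<d * n + d]" by simp
  also have "map g [d * n..<d * n + d] = decode d g n"
    by (simp add: decode_def list_eq_iff_nth_eq mult.commute)
  finally show ?case using Suc by simp
qed simp

lemma map_decode_eq:
  "map (decode d g) xs = map (decode d (g \<circ> (\<lambda>k. xs ! (k div d) * d + k mod d))) [0..<length xs]"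
proof (rule nth_equalityI)
  fix i assume "i < length (map (decode d g) xs)"
  then have i: "i < length xs" by simp
  have "(i * d + j) div d = i \<and> (i * d + j) mod d = j" if "j < d" for j using that by simp
  then have "decode d (g \<circ> (\<lambda>k. xs ! (k div d) * d + k mod d)) i = decode d g (xs ! i)"
    unfolding decode_def by (intro map_cong) auto
  with i show "map (decode d g) xs ! i =
      map (decode d (g \<circ> (\<lambda>k. xs ! (k div d) * d + k mod d))) [0..<length xs] ! i"
    by simp
qed simp

lemma fdef_gsat:
  assumes wf: "wf_struct d ar I" and symbols: "\<And>s. fdefinable le d (ar s) {t. I s t}"
  shows "fdef le (\<lambda>g. gsat d I (decode d g) \<phi>)"
proof (induction \<phi>)
  case (GEq x y)
  have "fdef le (\<lambda>g. \<forall>j<d. g (x * d + j) = g (y * d + j))" by (intro fdef_ball fdef_eq)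
  then show ?case by (rule fdef_cong) (auto simp: decode_def)
next
  case (GRel s xs)
  have tuples: "{t. I s t} \<subseteq> tuples d (ar s)" using wf unfolding wf_struct_def by blast
  show ?case
  proof (cases "length xs = ar s")
    case True
    define \<sigma> where "\<sigma> = (\<lambda>k. xs ! (k div d) * d + k mod d)"
    have "fdef le (\<lambda>g. map (g \<circ> \<sigma>) [0..<d * ar s] \<in> flatten {t. I s t})"
      using fdef_subst[of le "\<lambda>g. map g [0..<d * ar s] \<in> flatten {t. I s t}" \<sigma>] symbols[of s]
      unfolding fdefinable_def fdefinable_rel_iff_fdef by (simp add: comp_def)
    moreover have "map (g \<circ> \<sigma>) [0..<d * ar s] \<in> flatten {t. I s t} \<longleftrightarrow> I s (map (decode d g) xs)" for g
    proof -
      have "map (decode d (g \<circ> \<sigma>)) [0..<ar s] \<in> tuples d (ar s)"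
        by (auto simp: tuples_def pts_def)
      then have "concat (map (decode d (g \<circ> \<sigma>)) [0..<ar s]) \<in> flatten {t. I s t} \<longleftrightarrow>
          I s (map (decode d (g \<circ> \<sigma>)) [0..<ar s])"
        using concat_in_flatten_iff[OF tuples] by blast
      moreover have "map (decode d g) xs = map (decode d (g \<circ> \<sigma>)) [0..<ar s]"
        using map_decode_eq[of d g xs] True unfolding \<sigma>_def by simp
      ultimately show ?thesis by (simp only: concat_decode)
    qed
    ultimately show ?thesis by (elim fdef_cong) simp
  next
    case False
    with tuples have "\<not> I s (map (decode d g) xs)" for g by (auto simp: tuples_def)
    then show ?thesis using fdef_const[of le False] by simp
  qed
next
  case (GNot \<phi>)
  then show ?case by (simp add: fdef_not)
next
  case (GAnd \<phi> \<psi>)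
  then show ?case by (simp add: fdef_conj)
next
  case (GEx x \<phi>)
  have "fdef le (\<lambda>g. \<exists>as. length as = d \<and> gsat d I (decode d (upd_block g (x * d) as)) \<phi>)"
    using fdef_ex_block[OF GEx.IH] .
  then show ?case by (rule fdef_cong) (auto simp: decode_upd_block)
qed

lemma gdefinable_imp_fdefinable:
  assumes wf: "wf_struct d ar I" and symbols: "\<And>s. fdefinable le d (ar s) {t. I s t}"
    and R: "R \<subseteq> tuples d n" and G: "gdefinable d I n R"
  shows "fdefinable le d n R"
proof -
  obtain \<psi> where \<psi>: "\<And>e. \<forall>i. length (e i) = d \<Longrightarrow> map e [0..<n] \<in> R \<longleftrightarrow> gsat d I e \<psi>"
    using G unfolding gdefinable_def by blast
  have "map g [0..<d * n] \<in> flatten R \<longleftrightarrow> gsat d I (decode d g) \<psi>" for g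
  proof -
    have "map (decode d g) [0..<n] \<in> tuples d n" by (auto simp: tuples_def pts_def)
    then have "map g [0..<d * n] \<in> flatten R \<longleftrightarrow> map (decode d g) [0..<n] \<in> R"
      using concat_in_flatten_iff[OF R] concat_decode by metis
    also have "\<dots> \<longleftrightarrow> gsat d I (decode d g) \<psi>" using \<psi> by simp
    finally show ?thesis .
  qed
  with fdef_gsat[OF wf symbols, of \<psi>] show ?thesis
    unfolding fdefinable_def fdefinable_rel_iff_fdef by (elim fdef_cong) simp
qed

section \<open>Invariance under automorphisms\<close>

lemma gsat_automorphism:
  fixes e :: "nat \<Rightarrow> 'a list"
  assumes f: "automorphism d I f" and len: "\<forall>i. length (e i) = d"
  shows "gsat d I (f \<circ> e) \<phi> \<longleftrightarrow> gsat d I e \<phi>"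
  using len
proof (induction \<phi> arbitrary: e)
  case (GEq x y)
  have "inj_on f (pts d)" using f unfolding automorphism_def bij_betw_def by blast
  with GEq show ?case by (auto simp: pts_def inj_on_def)
next
  case (GRel s xs)
  have "set (map e xs) \<subseteq> pts d" using GRel by (auto simp: pts_def)
  with f show ?case unfolding automorphism_def by (simp add: comp_def)
next
  case (GEx x \<phi>)
  have bij: "bij_betw f (pts d) (pts d)" using f unfolding automorphism_def by blast
  have upd: "(f \<circ> e)(x := f p) = f \<circ> e(x := p)" for p by (auto simp: fun_eq_iff)
  have "gsat d I (f \<circ> e) (GEx x \<phi>) \<longleftrightarrow> (\<exists>q\<in>pts d. gsat d I ((f \<circ> e)(x := q)) \<phi>)"
    by (simp add: pts_def del: comp_apply)
  also have "\<dots> \<longleftrightarrow> (\<exists>p\<in>pts d. gsat d I ((f \<circ> e)(x := f p)) \<phi>)"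
    using bij unfolding bij_betw_def by (metis imageE imageI)
  also have "\<dots> \<longleftrightarrow> (\<exists>p\<in>pts d. gsat d I (e(x := p)) \<phi>)"
  proof (rule bex_cong[OF refl])
    fix p :: "'a list" assume "p \<in> pts d"
    then have "\<forall>i. length ((e(x := p)) i) = d" using GEx.prems by (simp add: pts_def)
    then show "gsat d I ((f \<circ> e)(x := f p)) \<phi> \<longleftrightarrow> gsat d I (e(x := p)) \<phi>"
      unfolding upd by (rule GEx.IH)
  qed
  finally show ?case by (simp add: pts_def del: comp_apply)
qed simp_all

lemma automorphism_closed:
  assumes G: "gdefinable d I n R" and R: "R \<subseteq> tuples d n" and f: "automorphism d I f"
  shows "closed_under R f"
  unfolding closed_under_def
proof
  fix t assume "t \<in> R"
  then have t: "length t = n" "\<forall>x\<in>set t. length x = d" using R by (auto simp: tuples_def pts_def)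
  obtain \<psi> where \<psi>: "\<And>e. \<forall>i. length (e i) = d \<Longrightarrow> map e [0..<n] \<in> R \<longleftrightarrow> gsat d I e \<psi>"
    using G unfolding gdefinable_def by blast
  define e where "e i = (if i < n then t ! i else replicate d undefined)" for i
  have len: "\<forall>i. length (e i) = d" unfolding e_def using t by auto
  moreover have "length (f p) = d" if "length p = d" for p
    using f that unfolding automorphism_def bij_betw_def pts_def by auto
  ultimately have len_f: "\<forall>i. length ((f \<circ> e) i) = d" by simp
  have t_eq: "map e [0..<n] = t" unfolding e_def using t by (simp add: list_eq_iff_nth_eq)
  with \<open>t \<in> R\<close> \<psi>[OF len] have "gsat d I e \<psi>" by simp
  moreover have "map (f \<circ> e) [0..<n] \<in> R \<longleftrightarrow> gsat d I (f \<circ> e) \<psi>" by (rule \<psi>[OF len_f])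
  ultimately have "map (f \<circ> e) [0..<n] \<in> R" using gsat_automorphism[OF f len] by blast
  with t_eq show "map f t \<in> R" by (simp flip: map_map)
qed

lemma gdef_from_gdefinable3:
  assumes "gdefinable d I 3 S"
    and "\<And>p q r. length p = d \<Longrightarrow> length q = d \<Longrightarrow> length r = d \<Longrightarrow> [p, q, r] \<in> S \<longleftrightarrow> P p q r"
  shows "gdef d I (\<lambda>e. P (e 0) (e 1) (e 2))"
proof -
  have "[0..<3] = [0, 1, 2::nat]" by (simp add: upt_rec)
  with assms(1) show ?thesis unfolding gdefinable_iff_gdef by (elim gdef_cong) (simp add: assms(2))
qed

lemma coord_geom_gdef_between:
  assumes "coord_geom (Some r) d ar I"
  shows "gdef d I (\<lambda>e. between r d (e 0) (e 1) (e 2))"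
proof -
  have "gdefinable d I 3 (bw_rel r d)" using assms unfolding coord_geom_def by simp
  then show ?thesis by (rule gdef_from_gdefinable3) (auto simp: bw_rel_def pts_def bw_iff_between)
qed

lemma coord_geom_gdef_collinear:
  assumes "coord_geom le d ar I" "field_hyp le"
  shows "gdef d I (\<lambda>e. collinear d (e 0) (e 1) (e 2))"
proof (cases le)
  case None
  with assms(1) have "gdefinable d I 3 (col_rel d)" unfolding coord_geom_def by simp
  then show ?thesis by (rule gdef_from_gdefinable3) (auto simp: col_rel_def pts_def col_iff_collinear)
next
  case (Some r)
  with assms have ord: "is_field_order r" and bw: "gdef d I (\<lambda>e. between r d (e 0) (e 1) (e 2))"
    using coord_geom_gdef_between unfolding field_hyp_def by auto
  have "gdef d I (\<lambda>e. between r d (e i) (e j) (e k))" for i j k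
    using gdef_subst[OF bw, of "(!) [i, j, k]"] by (rule gdef_cong) simp
  then have "gdef d I (\<lambda>e. between r d (e 0) (e 1) (e 2) \<or> between r d (e 1) (e 0) (e 2) \<or>
      between r d (e 0) (e 2) (e 1))"
    by (intro gdef_disj)
  then show ?thesis
    using collinear_imp_between[OF ord] between_imp_collinear[OF ord] by (elim gdef_cong) blast
qed

lemma FFD_imp_ffd_geometry:
  assumes "2 \<le> d" "field_hyp le" "FFD le d ar I"
  shows "ffd_geometry d I le ar"
proof -
  have cg: "coord_geom le d ar I" using assms(3) unfolding FFD_def by blast
  have "field_geometry d I le"
    unfolding field_geometry_def field_geometry_axioms_def col_geometry_def
    using coord_geom_gdef_collinear[OF cg assms(2)] field_hyp_ex_scalar[OF assms(2)]
      coord_geom_gdef_between assms(2) cg unfolding field_hyp_def by auto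
  with assms show ?thesis
    unfolding ffd_geometry_def ffd_geometry_axioms_def FFD_def coord_geom_def by blast
qed

theorem theorem1:
  fixes le :: "('a::field \<Rightarrow> 'a \<Rightarrow> bool) option"
    and d n :: nat
    and ar :: "'s \<Rightarrow> nat"
    and I :: "'s \<Rightarrow> 'a list list \<Rightarrow> bool"
    and R :: "'a list list set"
  assumes "d \<ge> 2"
    and "field_hyp le"
    and "FFD le d ar I"
    and "n \<ge> 1"
    and "R \<subseteq> tuples d n"
  shows "(gdefinable d I n R \<longleftrightarrow>
            fdefinable le d n R \<and> (\<forall>f. automorphism d I f \<longrightarrow> closed_under R f))
       \<and> (gdefinable d I n R \<longleftrightarrow>
            fdefinable le d n R \<and>
            (\<forall>f. automorphism d I f \<and> affine_transf d f \<longrightarrow> closed_under R f))"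
proof -
  interpret ffd_geometry d I le ar
    using FFD_imp_ffd_geometry assms(1-3) by blast
  have "gdefinable d I n R \<Longrightarrow> fdefinable le d n R \<and> (\<forall>f. automorphism d I f \<longrightarrow> closed_under R f)"
    using gdefinable_imp_fdefinable[OF wf fdefinable_symbols assms(5)] automorphism_closed assms(5)
    by blast
  moreover have "fdefinable le d n R \<and> (\<forall>f. automorphism d I f \<and> affine_transf d f \<longrightarrow> closed_under R f)
      \<Longrightarrow> gdefinable d I n R"
    using gdefinable_if_closed assms(5) by blast
  ultimately show ?thesis by blast
qed


end
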